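(* Let $n\ge p$, $\mathcal X\in\mathrm{St}(n,p,l)$, $\mathcal U,\mathcal V\in T_{\mathcal X}\mathrm{St}(n,p,l)$, and let $R_{\mathcal X}(\mathcal U)=(\mathcal X+\mathcal U)*(\mathcal I+\mathcal U^\top*\mathcal U)^{-1/2}$ be the t-PD based retraction. Put $\mathcal P=(\mathcal I+\mathcal U^\top*\mathcal U)^{1/2}$, $\mathcal Y=R_{\mathcal X}(\mathcal U)=(\mathcal X+\mathcal U)*\mathcal P^{-1}$, and let $\mathcal S\in\mathbb R^{p\times p\times l}$ be given by $$\operatorname{vec}(\mathcal S)=\big(\widetilde{\operatorname{bcirc}}(\mathcal P)^\top\otimes I_p+[I_p]_{l\times l}\odot\operatorname{bcirc}(\mathcal P)\big)^{\dagger}\operatorname{vec}(\mathcal Y^\top*\mathcal V-\mathcal V^\top*\mathcal Y).$$ Then the vector transport by differentiated retraction $\mathcal T_{\mathcal U}\mathcal V:=\frac{d}{dt}R_{\mathcal X}(\mathcal U+t\mathcal V)\big|_{t=0}$ equals $$\mathcal T_{\mathcal U}\mathcal V=\mathcal Y*\mathcal S+(\mathcal I-\mathcal Y*\mathcal Y^\top)*\mathcal V*(\mathcal Y^\top*(\mathcal X+\mathcal U))^{-1}.$$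
   Context: Frontal slices $A^{(i)}=\mathcal A(:,:,i)$. $\operatorname{bcirc}(\mathcal A)$ is the block circulant matrix whose $(i,j)$ block is $A^{(((i-j)\bmod l)+1)}$, and $\widetilde{\operatorname{bcirc}}(\mathcal A)$ is the block matrix whose $(i,j)$ block is $A^{(((j-i)\bmod l)+1)}$ (first block row $A^{(1)},A^{(2)},\dots,A^{(l)}$). The t-product is $\mathcal A*\mathcal B=\operatorname{fold}(\operatorname{bcirc}(\mathcal A)\operatorname{unfold}(\mathcal B))$, with $\operatorname{unfold}$ stacking frontal slices vertically and $\operatorname{fold}$ its inverse. Transpose: $\mathcal A^\top$ has frontal slices $(A^{(1)})^\top,(A^{(l)})^\top,\dots,(A^{(2)})^\top$. $\mathcal I$ identity tensor, $\mathcal A^{-1}$ t-product inverse. For a symmetric ($\mathcal A=\mathcal A^\top$) tensor that is t-positive definite ($\langle\mathcal Z,\mathcal A*\mathcal Z\rangle>0$ for nonzero $\mathcal Z\in\mathbb R^{p\times1\times l}$), $\mathcal A^{1/2}$ is the unique symmetric t-positive semidefinite $\mathcal S$ with $\mathcal S*\mathcal S=\mathcal A$ and $\mathcal A^{-1/2}=(\mathcal A^{1/2})^{-1}$. $\operatorname{vec}(\mathcal A)$ is the column-major vectorization $\mathcal A(:)$ (columns of $A^{(1)}$, then of $A^{(2)}$, etc.). $[I_p]_{l\times l}$ is the $pl\times pl$ block matrix all of whose $p\times p$ blocks equal $I_p$; for block matrices $M=[M_{ij}]$, $N=[N_{ij}]$ with the same block pattern $l\times l$, the Khatri–Rao product $M\odot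 N$ is the block matrix with $(i,j)$ block $M_{ij}\otimes N_{ij}$. $\dagger$ is the Moore–Penrose inverse. $\mathrm{St}(n,p,l)=\{\mathcal X\in\mathbb R^{n\times p\times l}:\mathcal X^\top*\mathcal X=\mathcal I\}$. *)

theory Defs
  imports Complex_Main "Jordan_Normal_Form.Matrix"
begin

text \<open>Third-order real tensors of size m x n x l are represented by the list of their
 l frontal slices A^(1),...,A^(l), each an m x n matrix (list index k = slice k+1).\<close>

type_synonym tensor = "real mat list"

definition tdims :: "nat \<Rightarrow> nat \<Rightarrow> nat \<Rightarrow> tensor \<Rightarrow> bool" where
  "tdims m n l A \<longleftrightarrow> length A = l \<and> (\<forall>M\<in>set A. M \<in> carrier_mat m n)"

definition bcirc :: "tensor \<Rightarrow> real mat" where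
  "bcirc A = (let l = length A; m = dim_row (A!0); n = dim_col (A!0) in
     mat (m*l) (n*l) (\<lambda>(r,c). A ! nat ((int (r div m) - int (c div n)) mod int l) $$ (r mod m, c mod n)))"

definition bcirc_t :: "tensor \<Rightarrow> real mat" where
  "bcirc_t A = (let l = length A; m = dim_row (A!0); n = dim_col (A!0) in
     mat (m*l) (n*l) (\<lambda>(r,c). A ! nat ((int (c div n) - int (r div m)) mod int l) $$ (r mod m, c mod n)))"

definition unfold :: "tensor \<Rightarrow> real mat" where
  "unfold B = (let l = length B; m = dim_row (B!0); n = dim_col (B!0) in
     mat (m*l) n (\<lambda>(r,c). B ! (r div m) $$ (r mod m, c)))"

definition fold :: "nat \<Rightarrow> real mat \<Rightarrow> tensor" where
  "fold l M = map (\<lambda>k. mat (dim_row M div l) (dim_col M)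
                     (\<lambda>(i,j). M $$ (k * (dim_row M div l) + i, j))) [0..<l]"

definition tprod :: "tensor \<Rightarrow> tensor \<Rightarrow> tensor" (infixl "\<star>" 70) where
  "A \<star> B = fold (length A) (bcirc A * unfold B)"

definition tplus :: "tensor \<Rightarrow> tensor \<Rightarrow> tensor" (infixl "\<oplus>\<^sub>t" 65) where
  "A \<oplus>\<^sub>t B = map2 (+) A B"

definition tminus :: "tensor \<Rightarrow> tensor \<Rightarrow> tensor" (infixl "\<ominus>\<^sub>t" 65) where
  "A \<ominus>\<^sub>t B = map2 (-) A B"

definition tsmult :: "real \<Rightarrow> tensor \<Rightarrow> tensor" where
  "tsmult a A = map (\<lambda>M. a \<cdot>\<^sub>m M) A"

text \<open>Transpose: slices (A^(1))^T, (A^(l))^T, ..., (A^(2))^T.\<close>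
definition ttrans :: "tensor \<Rightarrow> tensor" where
  "ttrans A = map (\<lambda>k. transpose_mat (A ! ((length A - k) mod length A))) [0..<length A]"

definition tid :: "nat \<Rightarrow> nat \<Rightarrow> tensor" where
  "tid p l = map (\<lambda>k. if k = 0 then 1\<^sub>m p else 0\<^sub>m p p) [0..<l]"

definition tinv :: "nat \<Rightarrow> nat \<Rightarrow> tensor \<Rightarrow> tensor" where
  "tinv p l A = (THE B. tdims p p l B \<and> A \<star> B = tid p l \<and> B \<star> A = tid p l)"

definition tinner :: "tensor \<Rightarrow> tensor \<Rightarrow> real" where
  "tinner A B = (\<Sum>k<length A. \<Sum>i<dim_row (A!k). \<Sum>j<dim_col (A!k). A!k $$ (i,j) * B!k $$ (i,j))"

definition tsym :: "tensor \<Rightarrow> bool" where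
  "tsym A \<longleftrightarrow> A = ttrans A"

definition tpsd :: "nat \<Rightarrow> nat \<Rightarrow> tensor \<Rightarrow> bool" where
  "tpsd p l A \<longleftrightarrow> (\<forall>Z. tdims p 1 l Z \<longrightarrow> tinner Z (A \<star> Z) \<ge> 0)"

definition tpd :: "nat \<Rightarrow> nat \<Rightarrow> tensor \<Rightarrow> bool" where
  "tpd p l A \<longleftrightarrow> (\<forall>Z. tdims p 1 l Z \<longrightarrow> Z \<noteq> replicate l (0\<^sub>m p 1) \<longrightarrow> tinner Z (A \<star> Z) > 0)"

definition tsqrt :: "nat \<Rightarrow> nat \<Rightarrow> tensor \<Rightarrow> tensor" where
  "tsqrt p l A = (THE S. tdims p p l S \<and> tsym S \<and> tpsd p l S \<and> S \<star> S = A)"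

definition tinvsqrt :: "nat \<Rightarrow> nat \<Rightarrow> tensor \<Rightarrow> tensor" where
  "tinvsqrt p l A = tinv p l (tsqrt p l A)"

text \<open>Column-major vectorization vec(A) = A(:) of an m x n x l tensor.\<close>
definition tvec :: "tensor \<Rightarrow> real vec" where
  "tvec A = (let l = length A; m = dim_row (A!0); n = dim_col (A!0) in
     vec (m*n*l) (\<lambda>x. A ! (x div (m*n)) $$ ((x mod (m*n)) mod m, (x mod (m*n)) div m)))"

definition kron :: "real mat \<Rightarrow> real mat \<Rightarrow> real mat" where
  "kron M N = mat (dim_row M * dim_row N) (dim_col M * dim_col N)
     (\<lambda>(r,c). M $$ (r div dim_row N, c div dim_col N) * N $$ (r mod dim_row N, c mod dim_col N))"

text \<open>Khatri-Rao product of block matrices with an l x l block pattern, blocks of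
  M of size a x b and blocks of N of size c x d: (i,j) block is M_ij (x) N_ij.\<close>
definition khatri_rao :: "nat \<Rightarrow> real mat \<Rightarrow> real mat \<Rightarrow> real mat" where
  "khatri_rao l M N = (let a = dim_row M div l; b = dim_col M div l;
                          c = dim_row N div l; d = dim_col N div l in
     mat (a*c*l) (b*d*l) (\<lambda>(r,s).
       let i = r div (a*c); j = s div (b*d); r' = r mod (a*c); s' = s mod (b*d) in
       M $$ (i*a + r' div c, j*b + s' div d) * N $$ (i*c + r' mod c, j*d + s' mod d)))"

text \<open>[I_p]_{l x l}: pl x pl block matrix all of whose p x p blocks are I_p.\<close>
definition blockI :: "nat \<Rightarrow> nat \<Rightarrow> real mat" where
  "blockI p l = mat (p*l) (p*l) (\<lambda>(r,c). if r mod p = c mod p then 1 else 0)"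

definition pinv :: "real mat \<Rightarrow> real mat" where
  "pinv M = (THE X. X \<in> carrier_mat (dim_col M) (dim_row M) \<and> M * X * M = M \<and> X * M * X = X
              \<and> transpose_mat (M * X) = M * X \<and> transpose_mat (X * M) = X * M)"

definition tStiefel :: "nat \<Rightarrow> nat \<Rightarrow> nat \<Rightarrow> tensor set" where
  "tStiefel n p l = {X. tdims n p l X \<and> ttrans X \<star> X = tid p l}"

definition tangent_tStiefel :: "nat \<Rightarrow> nat \<Rightarrow> nat \<Rightarrow> tensor \<Rightarrow> tensor set" where
  "tangent_tStiefel n p l X = {U. tdims n p l U \<and> ttrans X \<star> U \<oplus>\<^sub>t ttrans U \<star> X = replicate l (0\<^sub>m p p)}"

definition retr_tpd :: "nat \<Rightarrow> nat \<Rightarrow> tensor \<Rightarrow> tensor \<Rightarrow> tensor" where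
  "retr_tpd p l X U = (X \<oplus>\<^sub>t U) \<star> tinvsqrt p l (tid p l \<oplus>\<^sub>t ttrans U \<star> U)"

end

theory Submission
  imports Defs "HOL-Analysis.L2_Norm" "Jordan_Normal_Form.Determinant"
begin

text \<open>The map bcirc is an injective homomorphism from the t-product algebra of third-order tensors
  to block-circulant matrices that also respects transposition, so the statement is one about the
  matrices X, U, V, S of bcirc X, bcirc U, bcirc V, bcirc S.  There P t, the square root of
  I + (U + t V)^T (U + t V), exists as the limit of a contracting fixed-point iteration that stays
  block-circulant.  One estimate carries the analysis: for psd Q and P \<ge> c I,
  c |E|_F \<le> |Q E + E P|_F.  It gives the uniqueness of the square root, the invertibility of the
  Sylvester operator E \<mapsto> E P + P E (whose vectorization is the Kronecker/Khatri-Rao matrix in the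
  statement, so its pseudoinverse is its inverse), and the derivative G of P at 0, the solution of
  P G + G P = U^T V + V^T U.  With Y = (X + U) P^-1 this solution is G = Y^T V - S P, and the product
  rule for (X + U + t V) (P t)^-1 yields V P^-1 - Y G P^-1 = Y S + (I - Y Y^T) V P^-1, where
  P = Y^T (X + U).\<close>

section \<open>Block-circulant index arithmetic\<close>

text \<open>Block (i,j) of bcirc A is the slice A ! circ_idx l i j, i.e. A^((i - j) mod l) (counting from 0).\<close>

definition circ_idx :: "nat \<Rightarrow> nat \<Rightarrow> nat \<Rightarrow> nat" where
  "circ_idx l i j = nat ((int i - int j) mod int l)"

lemma int_circ_idx: "0 < l \<Longrightarrow> int (circ_idx l i j) = (int i - int j) mod int l"
  unfolding circ_idx_def by simp

lemma circ_idx_less: "0 < l \<Longrightarrow> circ_idx l i j < l"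
  unfolding circ_idx_def by (simp add: nat_less_iff)

lemma circ_idx_eqI:
  "0 < l \<Longrightarrow> (int a - int b) mod int l = (int c - int d) mod int l \<Longrightarrow> circ_idx l a b = circ_idx l c d"
  unfolding circ_idx_def by simp

lemma circ_idx_0: "k < l \<Longrightarrow> circ_idx l k 0 = k"
  unfolding circ_idx_def by simp

lemma circ_idx_eq_0_iff:
  assumes "a < l" "b < l"
  shows "circ_idx l a b = 0 \<longleftrightarrow> a = b"
proof
  assume "circ_idx l a b = 0"
  then have h: "(int a - int b) mod int l = 0"
    using int_circ_idx[of l a b] assms by simp
  show "a = b"
  proof (cases "b \<le> a")
    case True
    then have "(int a - int b) mod int l = int a - int b" using assms
      by (intro mod_pos_pos_trivial) auto
    then show ?thesis using h True by simp
  next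
    case False
    then have "(int a - int b + int l) mod int l = int a - int b + int l"
      using assms by (intro mod_pos_pos_trivial) auto
    then show ?thesis using h assms by simp
  qed
qed (simp add: circ_idx_def)

lemma circ_idx_cancel: "0 < l \<Longrightarrow> circ_idx l (circ_idx l i j) (circ_idx l k j) = circ_idx l i k"
  by (rule circ_idx_eqI) (simp_all add: int_circ_idx mod_diff_eq)

lemma circ_idx_swap: "0 < l \<Longrightarrow> circ_idx l 0 (circ_idx l i j) = circ_idx l j i"
  by (rule circ_idx_eqI) (simp_all add: int_circ_idx mod_minus_eq)

lemma circ_idx_circ_idx: "0 < l \<Longrightarrow> j < l \<Longrightarrow> circ_idx l k (circ_idx l k j) = j"
  using circ_idx_eqI[of l k "circ_idx l k j" j 0]
  by (simp add: int_circ_idx mod_diff_right_eq circ_idx_0)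

lemma bij_betw_circ_idx_left: "0 < l \<Longrightarrow> bij_betw (circ_idx l k) {..<l} {..<l}"
  by (rule bij_betw_byWitness[where f' = "circ_idx l k"]) (auto simp: circ_idx_circ_idx circ_idx_less)

lemma bij_betw_circ_idx_right:
  assumes l: "0 < l"
  shows "bij_betw (\<lambda>j. circ_idx l j J) {..<l} {..<l}"
proof (rule bij_betw_byWitness[where f' = "\<lambda>j. circ_idx l j (circ_idx l 0 J)"])
  have "circ_idx l (circ_idx l j J) (circ_idx l 0 J) = circ_idx l j 0"
    "circ_idx l (circ_idx l j (circ_idx l 0 J)) J = circ_idx l j 0" for j
    using l by (intro circ_idx_eqI; simp add: int_circ_idx mod_simps)+
  then show "\<forall>j\<in>{..<l}. circ_idx l (circ_idx l j J) (circ_idx l 0 J) = j"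
    "\<forall>j\<in>{..<l}. circ_idx l (circ_idx l j (circ_idx l 0 J)) J = j"
    by (auto simp: circ_idx_0)
qed (auto simp: circ_idx_less l)

lemma sum_lessThan_mult:
  fixes m l :: nat
  shows "(\<Sum>r<m*l. g r) = (\<Sum>k<l. \<Sum>a<m. g (k*m + a))"
proof -
  have "(\<Sum>r<m*l. g r) = (\<Sum>k<l. sum g {k*m..<k*m + m})"
    using sum.nat_group[of g m l] by (simp add: mult.commute)
  also have "\<dots> = (\<Sum>k<l. \<Sum>a<m. g (k*m + a))"
  proof (rule sum.cong[OF refl])
    fix k
    have "{k*m..<k*m + m} = (\<lambda>a. a + k*m) ` {0..<m}"
      using image_add_atLeastLessThan[of "k*m" 0 m] by (simp add: add.commute)
    then show "sum g {k*m..<k*m + m} = (\<Sum>a<m. g (k*m + a))"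
      by (simp add: sum.reindex atLeast0LessThan add.commute)
  qed
  finally show ?thesis .
qed

lemma block_index_less:
  fixes k l a m :: nat
  assumes "k < l" "a < m"
  shows "k*m + a < m*l"
proof -
  have "k*m + a < (k + 1)*m" using assms by simp
  also have "\<dots> \<le> l*m" using assms by (intro mult_le_mono1) simp
  finally show ?thesis by (simp add: mult.commute)
qed

lemma block_div_less:
  fixes r m l :: nat
  shows "r < m*l \<Longrightarrow> r div m < l"
  by (simp add: less_mult_imp_div_less mult.commute)


section \<open>The t-product algebra is represented by block-circulant matrices\<close>

lemma tdimsD:
  assumes "tdims m n l A"
  shows "length A = l" "\<And>k. k < l \<Longrightarrow> A!k \<in> carrier_mat m n"
    "0 < l \<Longrightarrow> dim_row (A!0) = m" "0 < l \<Longrightarrow> dim_col (A!0) = n"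
  using assms unfolding tdims_def by auto

lemma tdims_eqI:
  assumes "tdims m n l A" "tdims m n l B"
    and "\<And>k a b. k < l \<Longrightarrow> a < m \<Longrightarrow> b < n \<Longrightarrow> A!k $$ (a,b) = B!k $$ (a,b)"
  shows "A = B"
  using assms by (intro nth_equalityI eq_matI) (auto dest!: tdimsD(2) simp: tdimsD(1))

lemma bcirc_carrier: "tdims m n l A \<Longrightarrow> 0 < l \<Longrightarrow> bcirc A \<in> carrier_mat (m*l) (n*l)"
  unfolding bcirc_def Let_def by (simp add: tdimsD)

lemma bcirc_index:
  "tdims m n l A \<Longrightarrow> 0 < l \<Longrightarrow> r < m*l \<Longrightarrow> c < n*l \<Longrightarrow>
     bcirc A $$ (r,c) = A ! circ_idx l (r div m) (c div n) $$ (r mod m, c mod n)"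
  unfolding bcirc_def Let_def circ_idx_def by (simp add: tdimsD)

lemma nth_tensor_eq_bcirc:
  assumes "tdims m n l T" "0 < l" "k < l" "a < m" "b < n"
  shows "T ! k $$ (a,b) = bcirc T $$ (k*m + a, b)"
  using assms block_index_less[OF assms(3,4)] block_index_less[of 0 l b n]
  by (simp add: bcirc_index circ_idx_0)

lemma bcirc_inj: "tdims m n l A \<Longrightarrow> tdims m n l B \<Longrightarrow> 0 < l \<Longrightarrow> bcirc A = bcirc B \<Longrightarrow> A = B"
  by (rule tdims_eqI) (auto simp: nth_tensor_eq_bcirc)

lemma bcirc_entrywise:
  assumes A: "tdims m n l A" and B: "tdims m' n' l B" and C: "tdims m n l C" and l: "0 < l"
    and "\<And>k a b. k < l \<Longrightarrow> a < m \<Longrightarrow> b < n \<Longrightarrow> C ! k $$ (a,b) = h (A ! k $$ (a,b)) (B ! k $$ (a,b))"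
    and "m' = m" "n' = n"
  shows "bcirc C = mat (m*l) (n*l) (\<lambda>ij. h (bcirc A $$ ij) (bcirc B $$ ij))"
proof (rule eq_matI)
  fix r c assume "r < dim_row (mat (m*l) (n*l) (\<lambda>ij. h (bcirc A $$ ij) (bcirc B $$ ij)))"
    "c < dim_col (mat (m*l) (n*l) (\<lambda>ij. h (bcirc A $$ ij) (bcirc B $$ ij)))"
  then have r: "r < m*l" and c: "c < n*l" by auto
  then have "0 < m" "0 < n" by (auto intro: gr0I)
  then show "bcirc C $$ (r,c) = mat (m*l) (n*l) (\<lambda>ij. h (bcirc A $$ ij) (bcirc B $$ ij)) $$ (r,c)"
    using assms r c by (simp add: bcirc_index circ_idx_less)
qed (use bcirc_carrier[OF C l] in auto)

lemma unfold_carrier: "tdims m n l A \<Longrightarrow> 0 < l \<Longrightarrow> unfold A \<in> carrier_mat (m*l) n"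
  unfolding unfold_def Let_def by (simp add: tdimsD)

lemma unfold_index:
  "tdims m n l A \<Longrightarrow> 0 < l \<Longrightarrow> r < m*l \<Longrightarrow> c < n \<Longrightarrow> unfold A $$ (r,c) = A ! (r div m) $$ (r mod m, c)"
  unfolding unfold_def Let_def by (simp add: tdimsD)

lemma fold_nth:
  "k < l \<Longrightarrow> fold l M ! k = mat (dim_row M div l) (dim_col M) (\<lambda>(i,j). M $$ (k * (dim_row M div l) + i, j))"
  unfolding fold_def by simp

lemma tdims_fold: "M \<in> carrier_mat (m*l) n \<Longrightarrow> 0 < l \<Longrightarrow> tdims m n l (fold l M)"
  unfolding tdims_def fold_def by auto

lemma fold_index:
  "M \<in> carrier_mat (m*l) n \<Longrightarrow> 0 < l \<Longrightarrow> k < l \<Longrightarrow> a < m \<Longrightarrow> b < n \<Longrightarrow>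
     fold l M ! k $$ (a,b) = M $$ (k*m + a, b)"
  by (simp add: fold_nth)

lemma unfold_fold:
  assumes M: "M \<in> carrier_mat (m*l) n" and l: "0 < l"
  shows "unfold (fold l M) = M"
proof (rule eq_matI)
  fix r c assume "r < dim_row M" "c < dim_col M"
  then have r: "r < m*l" and c: "c < n" using M by auto
  then have "0 < m" by (auto intro: gr0I)
  with r c M l show "unfold (fold l M) $$ (r,c) = M $$ (r,c)"
    by (simp add: unfold_index[OF tdims_fold] fold_index block_div_less)
qed (use M unfold_carrier[OF tdims_fold[OF M l] l] in auto)

lemma tprod_tdims:
  assumes "tdims m n l A" "tdims n q l B" "0 < l"
  shows "tdims m q l (A \<star> B)"
  unfolding tprod_def tdimsD(1)[OF assms(1)]
  by (rule tdims_fold[OF mult_carrier_mat[OF bcirc_carrier unfold_carrier]]) (use assms in auto)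

lemma tprod_index:
  assumes A: "tdims m n l A" and B: "tdims n q l B" and l: "0 < l" and k: "k < l" and a: "a < m"
    and c: "c < q"
  shows "(A \<star> B) ! k $$ (a,c) = (\<Sum>j<l. \<Sum>b<n. A ! circ_idx l k j $$ (a,b) * B ! j $$ (b,c))"
proof -
  have prod: "bcirc A * unfold B \<in> carrier_mat (m*l) q"
    using bcirc_carrier[OF A l] unfold_carrier[OF B l] by simp
  have "(A \<star> B) ! k $$ (a,c) = (\<Sum>s<n*l. bcirc A $$ (k*m + a, s) * unfold B $$ (s,c))"
    unfolding tprod_def tdimsD(1)[OF A] fold_index[OF prod l k a c]
    using bcirc_carrier[OF A l] unfold_carrier[OF B l] c block_index_less[OF k a]
    by (simp add: scalar_prod_def lessThan_atLeast0)
  also have "\<dots> = (\<Sum>j<l. \<Sum>b<n. A ! circ_idx l k j $$ (a,b) * B ! j $$ (b,c))"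
    using A B l a c block_index_less[OF k a] block_index_less[of _ l _ n]
    by (auto simp: sum_lessThan_mult bcirc_index unfold_index intro!: sum.cong)
  finally show ?thesis .
qed

lemma bcirc_tprod:
  assumes A: "tdims m n l A" and B: "tdims n q l B" and l: "0 < l"
  shows "bcirc (A \<star> B) = bcirc A * bcirc B"
proof (rule eq_matI)
  fix r c assume "r < dim_row (bcirc A * bcirc B)" "c < dim_col (bcirc A * bcirc B)"
  then have r: "r < m*l" and c: "c < q*l" using bcirc_carrier[OF A l] bcirc_carrier[OF B l] by auto
  then have "0 < m" "0 < q" by (auto intro: gr0I)
  define I J where "I = r div m" and "J = c div q"
  have I: "I < l" and J: "J < l" using r c by (simp_all add: I_def J_def block_div_less)
  let ?f = "\<lambda>j. \<Sum>b<n. A ! circ_idx l (circ_idx l I J) j $$ (r mod m, b) * B ! j $$ (b, c mod q)"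
  have "bcirc (A \<star> B) $$ (r,c) = (\<Sum>j<l. ?f j)"
    using r c l \<open>0 < m\<close> \<open>0 < q\<close>
    by (simp add: bcirc_index[OF tprod_tdims[OF A B l]] tprod_index[OF A B l] circ_idx_less I_def J_def)
  also have "\<dots> = (\<Sum>j<l. ?f (circ_idx l j J))"
    by (rule sum.reindex_bij_betw[OF bij_betw_circ_idx_right[OF l], symmetric])
  also have "\<dots> = (\<Sum>j<l. \<Sum>b<n. bcirc A $$ (r, j*n + b) * bcirc B $$ (j*n + b, c))"
    using r c l A B block_index_less[of _ l _ n]
    by (auto simp: bcirc_index circ_idx_cancel I_def J_def intro!: sum.cong)
  also have "\<dots> = (\<Sum>s<n*l. bcirc A $$ (r,s) * bcirc B $$ (s,c))"
    by (rule sum_lessThan_mult[symmetric])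
  also have "\<dots> = (bcirc A * bcirc B) $$ (r,c)"
    using r c bcirc_carrier[OF A l] bcirc_carrier[OF B l]
    by (simp add: scalar_prod_def lessThan_atLeast0)
  finally show "bcirc (A \<star> B) $$ (r,c) = (bcirc A * bcirc B) $$ (r,c)" .
qed (use bcirc_carrier[OF A l] bcirc_carrier[OF B l] bcirc_carrier[OF tprod_tdims[OF A B l] l] in auto)

lemma length_ttrans [simp]: "length (ttrans A) = length A"
  unfolding ttrans_def by simp

lemma ttrans_nth:
  assumes "k < length A"
  shows "ttrans A ! k = transpose_mat (A ! circ_idx (length A) 0 k)"
proof -
  have l: "0 < length A" using assms by linarith
  have "int ((length A - k) mod length A) = int (circ_idx (length A) 0 k)"
    using assms by (simp add: int_circ_idx[OF l] of_nat_mod mod_simps)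
  then show ?thesis
    using assms unfolding ttrans_def by simp
qed

lemma ttrans_tdims:
  assumes A: "tdims m n l A" and l: "0 < l"
  shows "tdims n m l (ttrans A)"
proof -
  have "ttrans A ! k \<in> carrier_mat n m" if "k < l" for k
    using that A l by (simp add: ttrans_nth tdimsD circ_idx_less)
  then show ?thesis using tdimsD(1)[OF A] unfolding tdims_def by (auto simp: in_set_conv_nth)
qed

lemma bcirc_ttrans:
  assumes A: "tdims m n l A" and l: "0 < l"
  shows "bcirc (ttrans A) = transpose_mat (bcirc A)"
proof (rule eq_matI)
  fix r c assume "r < dim_row (transpose_mat (bcirc A))" "c < dim_col (transpose_mat (bcirc A))"
  then have r: "r < n*l" and c: "c < m*l" using bcirc_carrier[OF A l] by auto
  then have "0 < n" "0 < m" by (auto intro: gr0I)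
  then show "bcirc (ttrans A) $$ (r,c) = transpose_mat (bcirc A) $$ (r,c)"
    using r c A l bcirc_carrier[OF A l] carrier_matD[OF tdimsD(2)[OF A circ_idx_less[OF l], of "c div m" "r div n"]]
    by (simp add: bcirc_index[OF ttrans_tdims[OF A l]] bcirc_index[OF A] ttrans_nth tdimsD circ_idx_less
        circ_idx_swap)
qed (use bcirc_carrier[OF A l] bcirc_carrier[OF ttrans_tdims[OF A l] l] in auto)

lemma tplus_nth: "length A = length B \<Longrightarrow> k < length A \<Longrightarrow> (A \<oplus>\<^sub>t B) ! k = A ! k + B ! k"
  unfolding tplus_def by simp

lemma tminus_nth: "length A = length B \<Longrightarrow> k < length A \<Longrightarrow> (A \<ominus>\<^sub>t B) ! k = A ! k - B ! k"
  unfolding tminus_def by simp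

lemma tsmult_nth: "k < length A \<Longrightarrow> tsmult a A ! k = a \<cdot>\<^sub>m A ! k"
  unfolding tsmult_def by simp

lemma tplus_tdims: "tdims m n l A \<Longrightarrow> tdims m n l B \<Longrightarrow> tdims m n l (A \<oplus>\<^sub>t B)"
  unfolding tdims_def tplus_def by (fastforce simp: in_set_conv_nth)

lemma tminus_tdims: "tdims m n l A \<Longrightarrow> tdims m n l B \<Longrightarrow> tdims m n l (A \<ominus>\<^sub>t B)"
  unfolding tdims_def tminus_def by (fastforce simp: in_set_conv_nth)

lemma tsmult_tdims: "tdims m n l A \<Longrightarrow> tdims m n l (tsmult a A)"
  unfolding tdims_def tsmult_def by auto

lemma bcirc_tplus:
  assumes A: "tdims m n l A" and B: "tdims m n l B" and l: "0 < l"
  shows "bcirc (A \<oplus>\<^sub>t B) = bcirc A + bcirc B"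
  using bcirc_carrier[OF A l] bcirc_carrier[OF B l]
  by (subst bcirc_entrywise[OF A B tplus_tdims[OF A B] l, where h = "(+)"])
     (auto simp: tplus_nth tdimsD[OF A] tdimsD[OF B] dest: tdimsD(2)[OF A] tdimsD(2)[OF B])

lemma bcirc_tminus:
  assumes A: "tdims m n l A" and B: "tdims m n l B" and l: "0 < l"
  shows "bcirc (A \<ominus>\<^sub>t B) = bcirc A - bcirc B"
  using bcirc_carrier[OF A l] bcirc_carrier[OF B l]
  by (subst bcirc_entrywise[OF A B tminus_tdims[OF A B] l, where h = "(-)"])
     (auto simp: tminus_nth tdimsD[OF A] tdimsD[OF B] dest: tdimsD(2)[OF A] tdimsD(2)[OF B])

lemma bcirc_tsmult:
  assumes A: "tdims m n l A" and l: "0 < l"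
  shows "bcirc (tsmult a A) = a \<cdot>\<^sub>m bcirc A"
  using bcirc_carrier[OF A l]
  by (subst bcirc_entrywise[OF A A tsmult_tdims[OF A] l, where h = "\<lambda>x y. a * x"])
     (auto simp: tsmult_nth tdimsD[OF A] dest: tdimsD(2)[OF A])

lemma tid_tdims: "tdims p p l (tid p l)"
  unfolding tdims_def tid_def by auto

lemma tid_nth: "k < l \<Longrightarrow> tid p l ! k = (if k = 0 then 1\<^sub>m p else 0\<^sub>m p p)"
  unfolding tid_def by simp

lemma bcirc_tid:
  assumes l: "0 < l"
  shows "bcirc (tid p l) = 1\<^sub>m (p*l)"
proof (rule eq_matI)
  fix r c assume "r < dim_row (1\<^sub>m (p*l) :: real mat)" "c < dim_col (1\<^sub>m (p*l) :: real mat)"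
  then have r: "r < p*l" and c: "c < p*l" by auto
  then have "0 < p" by (auto intro: gr0I)
  moreover have "r = c \<longleftrightarrow> r div p = c div p \<and> r mod p = c mod p"
    by (metis div_mult_mod_eq)
  ultimately show "bcirc (tid p l) $$ (r,c) = 1\<^sub>m (p*l) $$ (r,c)"
    using r c l
    by (simp add: bcirc_index[OF tid_tdims] tid_nth circ_idx_less circ_idx_eq_0_iff block_div_less)
qed (use bcirc_carrier[OF tid_tdims l, of p] in auto)

lemma tzero_tdims: "tdims m n l (replicate l (0\<^sub>m m n))"
  unfolding tdims_def by auto

lemma bcirc_tzero:
  assumes l: "0 < l"
  shows "bcirc (replicate l (0\<^sub>m m n)) = 0\<^sub>m (m*l) (n*l)"
proof (rule eq_matI)
  fix r c assume "r < dim_row (0\<^sub>m (m*l) (n*l) :: real mat)" "c < dim_col (0\<^sub>m (m*l) (n*l) :: real mat)"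
  then have r: "r < m*l" and c: "c < n*l" by auto
  then have "0 < m" "0 < n" by (auto intro: gr0I)
  then show "bcirc (replicate l (0\<^sub>m m n)) $$ (r,c) = 0\<^sub>m (m*l) (n*l) $$ (r,c)"
    using r c l by (simp add: bcirc_index[OF tzero_tdims] circ_idx_less)
qed (use bcirc_carrier[OF tzero_tdims l, of m n] in auto)

lemma fold_unfold:
  assumes X: "tdims m n l X" and l: "0 < l"
  shows "fold l (unfold X) = X"
proof (rule tdims_eqI[OF tdims_fold[OF unfold_carrier[OF X l] l] X])
  fix k a b assume "k < l" "a < m" "b < n"
  then show "fold l (unfold X) ! k $$ (a,b) = X ! k $$ (a,b)"
    by (simp add: fold_index[OF unfold_carrier[OF X l] l] unfold_index[OF X l] block_index_less)
qed

lemma tinv_bcirc: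
  assumes P: "tdims p p l P" and l: "0 < l" and B: "B \<in> carrier_mat (p*l) (p*l)"
    and PB: "bcirc P * B = 1\<^sub>m (p*l)" and BP: "B * bcirc P = 1\<^sub>m (p*l)"
  shows "tdims p p l (tinv p l P)" "bcirc (tinv p l P) = B"
proof -
  note Pm = bcirc_carrier[OF P l] and I = unfold_carrier[OF tid_tdims l, of p]
  define T where "T = fold l (B * unfold (tid p l))"
  have BI: "B * unfold (tid p l) \<in> carrier_mat (p*l) p" using B I by simp
  have T: "tdims p p l T" unfolding T_def by (rule tdims_fold[OF BI l])
  have "P \<star> T = fold l (bcirc P * (B * unfold (tid p l)))"
    unfolding tprod_def tdimsD(1)[OF P] T_def unfold_fold[OF BI l] ..
  also have "bcirc P * (B * unfold (tid p l)) = unfold (tid p l)"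
    using Pm B I PB by (simp flip: assoc_mult_mat[of _ "p*l" "p*l" _ "p*l" _ p])
  finally have PT: "P \<star> T = tid p l" using fold_unfold[OF tid_tdims l] by simp
  have inverse_unique: "bcirc T' = B" if T': "tdims p p l T'" and "P \<star> T' = tid p l" for T'
  proof -
    have "bcirc P * bcirc T' = 1\<^sub>m (p*l)"
      using that bcirc_tprod[OF P T' l] bcirc_tid[OF l] by simp
    then have "B * (bcirc P * bcirc T') = B" using B by simp
    then show ?thesis using B Pm bcirc_carrier[OF T' l] BP by (simp flip: assoc_mult_mat)
  qed
  have bT: "bcirc T = B" by (rule inverse_unique[OF T PT])
  have TP: "T \<star> P = tid p l"
    by (rule bcirc_inj[OF tprod_tdims[OF T P l] tid_tdims l]) (simp add: bcirc_tprod[OF T P l] bT BP bcirc_tid[OF l])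
  have "tinv p l P = T" unfolding tinv_def
    using T PT TP inverse_unique bT by (intro the_equality) (auto intro: bcirc_inj[OF _ T l])
  then show "tdims p p l (tinv p l P)" "bcirc (tinv p l P) = B" using T bT by auto
qed

section \<open>Linear algebra on vectors given as functions\<close>

text \<open>A vector of length N is a function of type nat \<Rightarrow> real whose values from N on are ignored;
  op_bound M b says that b bounds the operator norm of M.\<close>

definition mat_app :: "real mat \<Rightarrow> (nat \<Rightarrow> real) \<Rightarrow> nat \<Rightarrow> real" where
  "mat_app M x = (\<lambda>i. \<Sum>j<dim_col M. M $$ (i,j) * x j)"

definition vnorm :: "nat \<Rightarrow> (nat \<Rightarrow> real) \<Rightarrow> real" where
  "vnorm N x = L2_set x {..<N}"

definition bilin :: "real mat \<Rightarrow> (nat \<Rightarrow> real) \<Rightarrow> (nat \<Rightarrow> real) \<Rightarrow> real" where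
  "bilin M x y = (\<Sum>i<dim_row M. x i * mat_app M y i)"

definition psd_mat :: "real mat \<Rightarrow> bool" where
  "psd_mat M \<longleftrightarrow> (\<forall>x. 0 \<le> bilin M x x)"

definition sym_mat :: "real mat \<Rightarrow> bool" where
  "sym_mat M \<longleftrightarrow> transpose_mat M = M"

definition op_bound :: "real mat \<Rightarrow> real \<Rightarrow> bool" where
  "op_bound M b \<longleftrightarrow> (\<forall>x. vnorm (dim_row M) (mat_app M x) \<le> b * vnorm (dim_col M) x)"

definition frob :: "real mat \<Rightarrow> real" where
  "frob M = L2_set (\<lambda>(i,j). M $$ (i,j)) ({..<dim_row M} \<times> {..<dim_col M})"

lemma carrier_mat_eqI:
  "A \<in> carrier_mat m n \<Longrightarrow> B \<in> carrier_mat m n \<Longrightarrow> (\<And>i j. i < m \<Longrightarrow> j < n \<Longrightarrow> A $$ (i,j) = B $$ (i,j)) \<Longrightarrow> A = B"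
  by (intro eq_matI) auto

lemma vnorm_nonneg: "0 \<le> vnorm N x" unfolding vnorm_def by (rule L2_set_nonneg)
lemma frob_nonneg: "0 \<le> frob M" unfolding frob_def by (rule L2_set_nonneg)

lemma vnorm_sq: "(vnorm N x)\<^sup>2 = (\<Sum>i<N. (x i)\<^sup>2)"
  unfolding vnorm_def L2_set_def by (simp add: sum_nonneg)

lemma frob_sq: "(frob M)\<^sup>2 = (\<Sum>i<dim_row M. \<Sum>j<dim_col M. (M $$ (i,j))\<^sup>2)"
  unfolding frob_def L2_set_def by (simp add: sum_nonneg sum.cartesian_product case_prod_beta)

lemma vnorm_cong: "(\<And>i. i < N \<Longrightarrow> x i = y i) \<Longrightarrow> vnorm N x = vnorm N y"
  unfolding vnorm_def by (intro L2_set_cong) auto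

lemma abs_le_vnorm: "i < N \<Longrightarrow> \<bar>x i\<bar> \<le> vnorm N x"
proof -
  assume i: "i < N"
  have "\<bar>x i\<bar> \<le> L2_set (\<lambda>i. \<bar>x i\<bar>) {..<N}" using i by (intro member_le_L2_set) auto
  also have "\<dots> = vnorm N x" unfolding vnorm_def L2_set_def by simp
  finally show ?thesis .
qed

lemma abs_le_frob: "i < dim_row M \<Longrightarrow> j < dim_col M \<Longrightarrow> \<bar>M $$ (i,j)\<bar> \<le> frob M"
proof -
  assume i: "i < dim_row M" and j: "j < dim_col M"
  have "\<bar>M $$ (i,j)\<bar> \<le> L2_set (\<lambda>(i,j). \<bar>M $$ (i,j)\<bar>) ({..<dim_row M} \<times> {..<dim_col M})"
    using i j member_le_L2_set[of "{..<dim_row M} \<times> {..<dim_col M}" "(i,j)" "\<lambda>(i,j). \<bar>M $$ (i,j)\<bar>"]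
    by auto
  also have "\<dots> = frob M" unfolding frob_def L2_set_def by (simp add: case_prod_beta)
  finally show ?thesis .
qed

lemma vnorm_add_le: "vnorm N (\<lambda>i. x i + y i) \<le> vnorm N x + vnorm N y"
  unfolding vnorm_def by (rule L2_set_triangle_ineq)

lemma vnorm_scale: "vnorm N (\<lambda>i. c * x i) = \<bar>c\<bar> * vnorm N x"
proof -
  have "\<bar>c\<bar> * vnorm N x = L2_set (\<lambda>i. \<bar>c\<bar> * x i) {..<N}" unfolding vnorm_def
    by (simp add: L2_set_right_distrib)
  also have "\<dots> = vnorm N (\<lambda>i. c * x i)" unfolding vnorm_def L2_set_def
    by (simp add: power_mult_distrib)
  finally show ?thesis by simp
qed

lemma abs_sum_mult_le_L2_set: "\<bar>\<Sum>i\<in>A. f i * g i\<bar> \<le> L2_set f A * L2_set g A"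
proof -
  have "\<bar>\<Sum>i\<in>A. f i * g i\<bar> \<le> (\<Sum>i\<in>A. \<bar>f i\<bar> * \<bar>g i\<bar>)"
    by (rule order_trans[OF sum_abs]) (simp add: abs_mult)
  also have "\<dots> \<le> L2_set f A * L2_set g A" by (rule L2_set_mult_ineq)
  finally show ?thesis .
qed

lemma abs_sum_mult_le_vnorm: "\<bar>\<Sum>i<N. f i * g i\<bar> \<le> vnorm N f * vnorm N g"
  unfolding vnorm_def by (rule abs_sum_mult_le_L2_set)


lemma mat_app_mult:
  assumes A: "A \<in> carrier_mat a b" and B: "B \<in> carrier_mat b c" and i: "i < a"
  shows "mat_app (A * B) x i = mat_app A (mat_app B x) i"
proof -
  have "mat_app (A * B) x i = (\<Sum>j<c. (\<Sum>k<b. A $$ (i,k) * B $$ (k,j)) * x j)"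
    unfolding mat_app_def using A B i by (simp add: scalar_prod_def lessThan_atLeast0)
  also have "\<dots> = (\<Sum>k<b. A $$ (i,k) * (\<Sum>j<c. B $$ (k,j) * x j))"
    by (simp add: sum_distrib_left sum_distrib_right sum.swap[of _ "{..<c}"] mult.assoc)
  also have "\<dots> = mat_app A (mat_app B x) i" unfolding mat_app_def using A B by simp
  finally show ?thesis .
qed

lemma mat_app_add:
  assumes A: "A \<in> carrier_mat a b" and B: "B \<in> carrier_mat a b" and i: "i < a"
  shows "mat_app (A + B) x i = mat_app A x i + mat_app B x i"
  unfolding mat_app_def using A B i by (simp add: sum.distrib distrib_right)

lemma mat_app_diff:
  assumes A: "A \<in> carrier_mat a b" and B: "B \<in> carrier_mat a b" and i: "i < a"
  shows "mat_app (A - B) x i = mat_app A x i - mat_app B x i"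
  unfolding mat_app_def using A B i by (simp add: sum_subtractf left_diff_distrib)

lemma mat_app_smult:
  assumes A: "A \<in> carrier_mat a b" and i: "i < a"
  shows "mat_app (c \<cdot>\<^sub>m A) x i = c * mat_app A x i"
  unfolding mat_app_def using A i by (simp add: sum_distrib_left mult.assoc)

lemma mat_app_one:
  assumes i: "i < N"
  shows "mat_app (1\<^sub>m N) x i = x i"
proof -
  have "mat_app (1\<^sub>m N) x i = (\<Sum>j<N. if i = j then x j else 0)"
    unfolding mat_app_def using i by (intro sum.cong) auto
  also have "\<dots> = x i" using i by (simp add: sum.delta)
  finally show ?thesis .
qed

lemma mat_app_cong:
  assumes "\<And>j. j < dim_col M \<Longrightarrow> x j = y j"
  shows "mat_app M x i = mat_app M y i"
  unfolding mat_app_def using assms by (intro sum.cong) auto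

lemma vnorm_mat_app_le_frob:
  assumes A: "A \<in> carrier_mat a b"
  shows "vnorm a (mat_app A x) \<le> frob A * vnorm b x"
proof -
  have "(vnorm a (mat_app A x))\<^sup>2 = (\<Sum>i<a. (mat_app A x i)\<^sup>2)" by (rule vnorm_sq)
  also have "\<dots> \<le> (\<Sum>i<a. (\<Sum>j<b. (A $$ (i,j))\<^sup>2) * (vnorm b x)\<^sup>2)"
  proof (rule sum_mono)
    fix i
    have "\<bar>mat_app A x i\<bar> \<le> vnorm b (\<lambda>j. A $$ (i,j)) * vnorm b x"
      unfolding mat_app_def using A abs_sum_mult_le_vnorm[where N=b and f="\<lambda>j. A $$ (i,j)" and g=x]
      by simp
    then have "(mat_app A x i)\<^sup>2 \<le> (vnorm b (\<lambda>j. A $$ (i,j)) * vnorm b x)\<^sup>2"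
      using abs_le_square_iff[of "mat_app A x i" "vnorm b (\<lambda>j. A $$ (i,j)) * vnorm b x"] vnorm_nonneg[of b]
      by (simp add: abs_mult)
    also have "\<dots> = (\<Sum>j<b. (A $$ (i,j))\<^sup>2) * (vnorm b x)\<^sup>2"
      by (simp add: power_mult_distrib vnorm_sq)
    finally show "(mat_app A x i)\<^sup>2 \<le> (\<Sum>j<b. (A $$ (i,j))\<^sup>2) * (vnorm b x)\<^sup>2" .
  qed
  also have "\<dots> = (frob A * vnorm b x)\<^sup>2"
    using A by (simp add: power_mult_distrib frob_sq sum_distrib_right)
  finally have "(vnorm a (mat_app A x))\<^sup>2 \<le> (frob A * vnorm b x)\<^sup>2" .
  then show ?thesis using frob_nonneg vnorm_nonneg by (meson mult_nonneg_nonneg power2_le_imp_le)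
qed


lemma op_bound_frob: "op_bound A (frob A)"
  unfolding op_bound_def using vnorm_mat_app_le_frob[of A "dim_row A" "dim_col A"] by auto

lemma op_bound_mult:
  assumes A: "A \<in> carrier_mat a b" and B: "B \<in> carrier_mat b c"
    and oA: "op_bound A \<alpha>" and oB: "op_bound B \<beta>" and a0: "0 \<le> \<alpha>"
  shows "op_bound (A * B) (\<alpha> * \<beta>)"
  unfolding op_bound_def
proof
  fix x
  have "vnorm (dim_row (A * B)) (mat_app (A * B) x) = vnorm a (mat_app A (mat_app B x))"
    using A B by (auto intro!: vnorm_cong simp: mat_app_mult)
  also have "\<dots> \<le> \<alpha> * vnorm b (mat_app B x)" using oA A unfolding op_bound_def by auto
  also have "\<dots> \<le> \<alpha> * (\<beta> * vnorm c x)" using oB B a0 unfolding op_bound_def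
    by (auto intro: mult_left_mono)
  finally show "vnorm (dim_row (A * B)) (mat_app (A * B) x) \<le> \<alpha> * \<beta> * vnorm (dim_col (A * B)) x"
    using A B by (simp add: mult.assoc)
qed

lemma op_bound_add:
  assumes A: "A \<in> carrier_mat a b" and B: "B \<in> carrier_mat a b"
    and oA: "op_bound A \<alpha>" and oB: "op_bound B \<beta>"
  shows "op_bound (A + B) (\<alpha> + \<beta>)"
  unfolding op_bound_def
proof
  fix x
  have "vnorm (dim_row (A + B)) (mat_app (A + B) x) = vnorm a (\<lambda>i. mat_app A x i + mat_app B x i)"
    using A B by (auto intro!: vnorm_cong simp: mat_app_add)
  also have "\<dots> \<le> vnorm a (mat_app A x) + vnorm a (mat_app B x)" by (rule vnorm_add_le)
  also have "\<dots> \<le> \<alpha> * vnorm b x + \<beta> * vnorm b x" using oA oB A B unfolding op_bound_def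
    by (auto intro: add_mono)
  finally show "vnorm (dim_row (A + B)) (mat_app (A + B) x) \<le> (\<alpha> + \<beta>) * vnorm (dim_col (A + B)) x"
    using A B by (simp add: distrib_right)
qed

lemma op_bound_smult:
  assumes A: "A \<in> carrier_mat a b" and oA: "op_bound A \<alpha>"
  shows "op_bound (c \<cdot>\<^sub>m A) (\<bar>c\<bar> * \<alpha>)"
  unfolding op_bound_def
proof
  fix x
  have "vnorm (dim_row (c \<cdot>\<^sub>m A)) (mat_app (c \<cdot>\<^sub>m A) x) = vnorm a (\<lambda>i. c * mat_app A x i)"
    using A by (auto intro!: vnorm_cong simp: mat_app_smult)
  also have "\<dots> = \<bar>c\<bar> * vnorm a (mat_app A x)" by (rule vnorm_scale)
  also have "\<dots> \<le> \<bar>c\<bar> * (\<alpha> * vnorm b x)" using oA A unfolding op_bound_def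
    by (auto intro: mult_left_mono)
  finally show "vnorm (dim_row (c \<cdot>\<^sub>m A)) (mat_app (c \<cdot>\<^sub>m A) x) \<le> \<bar>c\<bar> * \<alpha> * vnorm (dim_col (c \<cdot>\<^sub>m A)) x"
    using A by (simp add: mult.assoc)
qed

lemma op_bound_mono: "op_bound A \<alpha> \<Longrightarrow> \<alpha> \<le> \<beta> \<Longrightarrow> op_bound A \<beta>"
  unfolding op_bound_def by (meson mult_right_mono vnorm_nonneg order_trans)

lemma abs_index_le_op_bound:
  assumes oA: "op_bound A \<alpha>" and i: "i < dim_row A" and j: "j < dim_col A"
  shows "\<bar>A $$ (i,j)\<bar> \<le> \<alpha>"
proof -
  define x where "x = (\<lambda>k. if k = j then 1 else (0::real))"
  have "mat_app A x i = A $$ (i,j)" unfolding mat_app_def x_def using j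
    by (simp add: if_distrib[of "\<lambda>v. A $$ (i, _) * v"] sum.delta' lessThan_def cong: if_cong)
  moreover have "vnorm (dim_col A) x = 1"
  proof -
    have "(vnorm (dim_col A) x)\<^sup>2 = 1" unfolding vnorm_sq x_def using j
      by (simp add: if_distrib[of "\<lambda>v. v\<^sup>2"] sum.delta' lessThan_def cong: if_cong)
    then show ?thesis using vnorm_nonneg[of "dim_col A" x] power2_eq_1_iff by force
  qed
  ultimately show ?thesis using abs_le_vnorm[OF i, of "mat_app A x"] oA unfolding op_bound_def
    by (metis mult.right_neutral order_trans)
qed


lemma bilin_expand:
  assumes M: "M \<in> carrier_mat N N"
  shows "bilin M x y = (\<Sum>i<N. \<Sum>j<N. x i * M $$ (i,j) * y j)"
  unfolding bilin_def mat_app_def using M by (simp add: sum_distrib_left mult.assoc)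

lemma sym_matD:
  assumes M: "M \<in> carrier_mat N N" and s: "sym_mat M" and i: "i < N" and j: "j < N"
  shows "M $$ (i,j) = M $$ (j,i)"
proof -
  have "transpose_mat M $$ (j,i) = M $$ (i,j)" using M i j by simp
  then show ?thesis using s unfolding sym_mat_def by simp
qed

lemma bilin_commute:
  assumes M: "M \<in> carrier_mat N N" and s: "sym_mat M"
  shows "bilin M x y = bilin M y x"
proof -
  have "bilin M x y = (\<Sum>i<N. \<Sum>j<N. x i * M $$ (i,j) * y j)" by (rule bilin_expand[OF M])
  also have "\<dots> = (\<Sum>j<N. \<Sum>i<N. x i * M $$ (i,j) * y j)" by (rule sum.swap)
  also have "\<dots> = (\<Sum>j<N. \<Sum>i<N. y j * M $$ (j,i) * x i)"
    using sym_matD[OF M s] by (intro sum.cong refl) (simp add: mult.commute mult.left_commute)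
  also have "\<dots> = bilin M y x" by (rule bilin_expand[OF M, symmetric])
  finally show ?thesis .
qed

lemma bilin_add_scaled:
  assumes M: "M \<in> carrier_mat N N"
  shows "bilin M (\<lambda>i. x i + t * y i) (\<lambda>i. x i + t * y i) = bilin M x x + t * bilin M x y + t * bilin M y x + t\<^sup>2 * bilin M y y"
  unfolding bilin_expand[OF M]
  by (simp add: algebra_simps sum.distrib sum_distrib_left power2_eq_square)

lemma discriminant_le_of_nonneg:
  fixes a b c :: real
  assumes h: "\<And>t. 0 \<le> c + 2*t*b + t\<^sup>2*a" and a0: "0 \<le> a"
  shows "b\<^sup>2 \<le> a*c"
proof (cases "a = 0")
  case True
  show ?thesis
  proof (cases "b = 0")
    case False
    have "0 \<le> c + 2*(-(c+1)/(2*b))*b + (-(c+1)/(2*b))\<^sup>2*a" by (rule h)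
    then show ?thesis using True False by (simp add: field_simps)
  qed (use True h[of 0] in simp)
next
  case False
  with a0 have a: "0 < a" by simp
  have "0 \<le> c + 2*(-b/a)*b + (-b/a)\<^sup>2*a" by (rule h)
  then have "0 \<le> c - b\<^sup>2/a" using a by (simp add: field_simps power2_eq_square)
  then show ?thesis using a by (simp add: field_simps)
qed

lemma square_le_cancel:
  fixes u K :: real
  assumes "u\<^sup>2 * u\<^sup>2 \<le> u\<^sup>2 * K" "u \<noteq> 0"
  shows "u\<^sup>2 \<le> K"
proof -
  have "0 < u\<^sup>2" using assms(2) by simp
  then show ?thesis using assms(1) mult_le_cancel_left_pos[of "u\<^sup>2" "u\<^sup>2" K] by simp
qed

lemma bilin_Cauchy_Schwarz:
  assumes M: "M \<in> carrier_mat N N" and s: "sym_mat M" and p: "psd_mat M"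
  shows "(bilin M x y)\<^sup>2 \<le> bilin M x x * bilin M y y"
proof -
  have "\<And>t. 0 \<le> bilin M x x + 2*t*bilin M x y + t\<^sup>2*bilin M y y"
  proof -
    fix t
    have "0 \<le> bilin M (\<lambda>i. x i + t * y i) (\<lambda>i. x i + t * y i)" using p unfolding psd_mat_def by simp
    then show "0 \<le> bilin M x x + 2*t*bilin M x y + t\<^sup>2*bilin M y y"
      unfolding bilin_add_scaled[OF M] bilin_commute[OF M s, of y x] by simp
  qed
  from discriminant_le_of_nonneg[OF this] p show ?thesis unfolding psd_mat_def
    by (simp add: mult.commute)
qed

lemma bilin_mat_app_self:
  assumes M: "M \<in> carrier_mat N N"
  shows "bilin M (mat_app M x) x = (vnorm N (mat_app M x))\<^sup>2"
  unfolding bilin_def vnorm_sq using M by (simp add: power2_eq_square)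

lemma bilin_le_op_bound:
  assumes M: "M \<in> carrier_mat N N" and oM: "op_bound M \<beta>"
  shows "bilin M y y \<le> \<beta> * (vnorm N y)\<^sup>2"
proof -
  have "bilin M y y \<le> \<bar>\<Sum>i<N. y i * mat_app M y i\<bar>" unfolding bilin_def using M by simp
  also have "\<dots> \<le> vnorm N y * vnorm N (mat_app M y)" by (rule abs_sum_mult_le_vnorm)
  also have "\<dots> \<le> vnorm N y * (\<beta> * vnorm N y)" using oM M unfolding op_bound_def
    by (auto intro: mult_left_mono vnorm_nonneg)
  finally show ?thesis by (simp add: power2_eq_square mult_ac)
qed

lemma op_bound_psd:
  assumes M: "M \<in> carrier_mat N N" and s: "sym_mat M" and p: "psd_mat M"
    and g: "\<And>x. bilin M x x \<le> \<gamma> * (vnorm N x)\<^sup>2" and g0: "0 \<le> \<gamma>"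
  shows "op_bound M \<gamma>"
  unfolding op_bound_def
proof
  fix x
  let ?y = "mat_app M x"
  have "((vnorm N ?y)\<^sup>2)\<^sup>2 = (bilin M ?y x)\<^sup>2" using bilin_mat_app_self[OF M] by simp
  also have "\<dots> \<le> bilin M ?y ?y * bilin M x x" by (rule bilin_Cauchy_Schwarz[OF M s p])
  also have "\<dots> \<le> (\<gamma> * (vnorm N ?y)\<^sup>2) * (\<gamma> * (vnorm N x)\<^sup>2)"
    using g p unfolding psd_mat_def by (intro mult_mono) (auto intro: mult_nonneg_nonneg g0)
  finally have h0: "((vnorm N ?y)\<^sup>2)\<^sup>2 \<le> (\<gamma> * (vnorm N ?y)\<^sup>2) * (\<gamma> * (vnorm N x)\<^sup>2)" .
  have h: "(vnorm N ?y)\<^sup>2 * (vnorm N ?y)\<^sup>2 \<le> (vnorm N ?y)\<^sup>2 * (\<gamma> * vnorm N x)\<^sup>2"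
    using h0 by (simp add: power2_eq_square power_mult_distrib mult_ac)
  have "vnorm N ?y \<le> \<gamma> * vnorm N x"
  proof (cases "vnorm N ?y = 0")
    case True then show ?thesis using g0 vnorm_nonneg by simp
  next
    case False
    then have "0 < (vnorm N ?y)\<^sup>2" using vnorm_nonneg by simp
    then have "(vnorm N ?y)\<^sup>2 \<le> (\<gamma> * vnorm N x)\<^sup>2" using square_le_cancel[OF h False] by simp
    then show ?thesis using g0 vnorm_nonneg by (meson mult_nonneg_nonneg power2_le_imp_le)
  qed
  then show "vnorm (dim_row M) (mat_app M x) \<le> \<gamma> * vnorm (dim_col M) x" using M by simp
qed

lemma square_le_bilin_of_lower_bound:
  assumes M: "M \<in> carrier_mat N N" and s: "sym_mat M" and p: "psd_mat M"
  and g: "\<And>x. vnorm N x \<le> vnorm N (mat_app M x)" and oM: "op_bound M \<beta>" and b0: "0 < \<beta>"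
  shows "(vnorm N x)\<^sup>2 \<le> \<beta> * bilin M x x"
proof -
  let ?y = "mat_app M x"
  have "((vnorm N ?y)\<^sup>2)\<^sup>2 = (bilin M ?y x)\<^sup>2" using bilin_mat_app_self[OF M] by simp
  also have "\<dots> \<le> bilin M ?y ?y * bilin M x x" by (rule bilin_Cauchy_Schwarz[OF M s p])
  also have "\<dots> \<le> (\<beta> * (vnorm N ?y)\<^sup>2) * bilin M x x"
    using bilin_le_op_bound[OF M oM] p unfolding psd_mat_def by (intro mult_right_mono) auto
  finally have h0: "((vnorm N ?y)\<^sup>2)\<^sup>2 \<le> (\<beta> * (vnorm N ?y)\<^sup>2) * bilin M x x" .
  have h: "(vnorm N ?y)\<^sup>2 * (vnorm N ?y)\<^sup>2 \<le> (vnorm N ?y)\<^sup>2 * (\<beta> * bilin M x x)"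
    using h0 by (simp add: power2_eq_square mult_ac)
  have "(vnorm N ?y)\<^sup>2 \<le> \<beta> * bilin M x x"
  proof (cases "vnorm N ?y = 0")
    case True then show ?thesis using b0 p unfolding psd_mat_def by simp
  next
    case False
    then have "0 < (vnorm N ?y)\<^sup>2" using vnorm_nonneg by simp
    then show ?thesis using square_le_cancel[OF h False] by simp
  qed
  moreover have "(vnorm N x)\<^sup>2 \<le> (vnorm N ?y)\<^sup>2" using g[of x] vnorm_nonneg
    by (simp add: power_mono)
  ultimately show ?thesis by linarith
qed


lemma bilin_add:
  assumes A: "A \<in> carrier_mat N N" and B: "B \<in> carrier_mat N N"
  shows "bilin (A + B) x y = bilin A x y + bilin B x y"
  unfolding bilin_def using A B by (simp add: mat_app_add[OF A B] distrib_left sum.distrib)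

lemma bilin_diff:
  assumes A: "A \<in> carrier_mat N N" and B: "B \<in> carrier_mat N N"
  shows "bilin (A - B) x y = bilin A x y - bilin B x y"
  unfolding bilin_def using A B by (simp add: mat_app_diff[OF A B] right_diff_distrib sum_subtractf)

lemma bilin_smult:
  assumes A: "A \<in> carrier_mat N N"
  shows "bilin (c \<cdot>\<^sub>m A) x y = c * bilin A x y"
  unfolding bilin_def using A by (simp add: mat_app_smult[OF A] sum_distrib_left mult_ac)

lemma bilin_one: "bilin (1\<^sub>m N) x x = (vnorm N x)\<^sup>2"
  unfolding bilin_def vnorm_sq by (simp add: mat_app_one power2_eq_square)

lemma bilin_cong:
  assumes M: "M \<in> carrier_mat N N" and xy: "\<And>i. i < N \<Longrightarrow> x i = x' i" "\<And>i. i < N \<Longrightarrow> y i = y' i"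
  shows "bilin M x y = bilin M x' y'"
  unfolding bilin_def using M xy by (auto intro!: sum.cong simp: mat_app_cong[of M y y'])

lemma bilin_transpose_mult:
  assumes B: "B \<in> carrier_mat a N"
  shows "bilin (transpose_mat B * B) x x = (vnorm a (mat_app B x))\<^sup>2"
proof -
  have Bt: "transpose_mat B \<in> carrier_mat N a" using B by simp
  have "bilin (transpose_mat B * B) x x = (\<Sum>i<N. x i * mat_app (transpose_mat B) (mat_app B x) i)"
    unfolding bilin_def using B Bt by (simp add: mat_app_mult[OF Bt B])
  also have "\<dots> = (\<Sum>i<N. \<Sum>r<a. x i * (B $$ (r,i) * mat_app B x r))"
    unfolding mat_app_def[of "transpose_mat B"] using B by (simp add: sum_distrib_left)
  also have "\<dots> = (\<Sum>r<a. \<Sum>i<N. x i * (B $$ (r,i) * mat_app B x r))" by (rule sum.swap)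
  also have "\<dots> = (\<Sum>r<a. mat_app B x r * mat_app B x r)"
    unfolding mat_app_def[of B] using B by (simp add: sum_distrib_left sum_distrib_right mult_ac)
  also have "\<dots> = (vnorm a (mat_app B x))\<^sup>2" unfolding vnorm_sq by (simp add: power2_eq_square)
  finally show ?thesis .
qed

lemma frob_add_le:
  assumes A: "A \<in> carrier_mat a b" and B: "B \<in> carrier_mat a b"
  shows "frob (A + B) \<le> frob A + frob B"
proof -
  have "frob (A + B) = L2_set (\<lambda>ij. (\<lambda>(i,j). A $$ (i,j)) ij + (\<lambda>(i,j). B $$ (i,j)) ij) ({..<a} \<times> {..<b})"
    unfolding frob_def using A B by (intro L2_set_cong) auto
  also have "\<dots> \<le> frob A + frob B" unfolding frob_def using A B
    by (simp add: L2_set_triangle_ineq del: case_prod_conv split_paired_all)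
  finally show ?thesis .
qed

lemma frob_smult:
  assumes A: "A \<in> carrier_mat a b"
  shows "frob (c \<cdot>\<^sub>m A) = \<bar>c\<bar> * frob A"
proof -
  have "frob (c \<cdot>\<^sub>m A) = L2_set (\<lambda>ij. \<bar>c\<bar> * (\<lambda>(i,j). A $$ (i,j)) ij) ({..<a} \<times> {..<b})"
    unfolding frob_def L2_set_def using A
    by (intro arg_cong[where f=sqrt] sum.cong) (auto simp: power_mult_distrib)
  also have "\<dots> = \<bar>c\<bar> * frob A" unfolding frob_def using A by (simp add: L2_set_right_distrib)
  finally show ?thesis .
qed

lemma frob_uminus:
  assumes A: "A \<in> carrier_mat a b"
  shows "frob (- A) = frob A"
proof -
  have "- A = (-1) \<cdot>\<^sub>m A" using A by (auto intro!: eq_matI)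
  then show ?thesis using frob_smult[OF A, of "-1"] by simp
qed

lemma frob_diff_le:
  assumes A: "A \<in> carrier_mat a b" and B: "B \<in> carrier_mat a b"
  shows "frob (A - B) \<le> frob A + frob B"
proof -
  have "A - B = A + (- B)" using A B by (auto intro!: eq_matI)
  then show ?thesis using frob_add_le[OF A, of "- B"] frob_uminus[OF B] B by simp
qed

lemma frob_mult_le:
  assumes A: "A \<in> carrier_mat a b" and B: "B \<in> carrier_mat b c"
  shows "frob (A * B) \<le> frob A * frob B"
proof -
  have "(frob (A * B))\<^sup>2 = (\<Sum>i<a. \<Sum>j<c. ((A*B) $$ (i,j))\<^sup>2)" using A B by (simp add: frob_sq)
  also have "\<dots> = (\<Sum>j<c. \<Sum>i<a. ((A*B) $$ (i,j))\<^sup>2)" by (rule sum.swap)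
  also have "\<dots> = (\<Sum>j<c. (vnorm a (mat_app A (\<lambda>k. B $$ (k,j))))\<^sup>2)"
  proof (intro sum.cong refl)
    fix j assume j: "j \<in> {..<c}"
    show "(\<Sum>i<a. ((A*B) $$ (i,j))\<^sup>2) = (vnorm a (mat_app A (\<lambda>k. B $$ (k,j))))\<^sup>2"
      unfolding vnorm_sq mat_app_def using A B j
      by (intro sum.cong refl) (simp add: scalar_prod_def lessThan_atLeast0)
  qed
  also have "\<dots> \<le> (\<Sum>j<c. (frob A)\<^sup>2 * (vnorm b (\<lambda>k. B $$ (k,j)))\<^sup>2)"
  proof (rule sum_mono)
    fix j
    have "vnorm a (mat_app A (\<lambda>k. B $$ (k,j))) \<le> frob A * vnorm b (\<lambda>k. B $$ (k,j))"
      by (rule vnorm_mat_app_le_frob[OF A])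
    then show "(vnorm a (mat_app A (\<lambda>k. B $$ (k,j))))\<^sup>2 \<le> (frob A)\<^sup>2 * (vnorm b (\<lambda>k. B $$ (k,j)))\<^sup>2"
      using vnorm_nonneg by (metis power_mono power_mult_distrib)
  qed
  also have "\<dots> = (frob A)\<^sup>2 * (\<Sum>j<c. \<Sum>k<b. (B $$ (k,j))\<^sup>2)"
    by (simp add: vnorm_sq sum_distrib_left)
  also have "\<dots> = (frob A)\<^sup>2 * (\<Sum>k<b. \<Sum>j<c. (B $$ (k,j))\<^sup>2)"
    by (subst sum.swap) (rule refl)
  also have "\<dots> = (frob A)\<^sup>2 * (frob B)\<^sup>2"
    using B by (simp add: frob_sq)
  finally have "(frob (A * B))\<^sup>2 \<le> (frob A * frob B)\<^sup>2" by (simp add: power_mult_distrib)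
  then show ?thesis using frob_nonneg by (meson mult_nonneg_nonneg power2_le_imp_le)
qed

definition frob_inner :: "real mat \<Rightarrow> real mat \<Rightarrow> real" where
  "frob_inner E F = (\<Sum>i<dim_row E. \<Sum>j<dim_col E. E $$ (i,j) * F $$ (i,j))"

lemma frob_inner_le:
  assumes E: "E \<in> carrier_mat a b" and F: "F \<in> carrier_mat a b"
  shows "frob_inner E F \<le> frob E * frob F"
proof -
  have "frob_inner E F = (\<Sum>ij\<in>{..<a} \<times> {..<b}. (\<lambda>(i,j). E $$ (i,j)) ij * (\<lambda>(i,j). F $$ (i,j)) ij)"
    unfolding frob_inner_def using E by (simp add: sum.cartesian_product case_prod_beta)
  also have "\<dots> \<le> \<bar>\<dots>\<bar>" by simp
  also have "\<dots> \<le> L2_set (\<lambda>(i,j). E $$ (i,j)) ({..<a} \<times> {..<b}) * L2_set (\<lambda>(i,j). F $$ (i,j)) ({..<a} \<times> {..<b})"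
    by (rule abs_sum_mult_le_L2_set)
  also have "\<dots> = frob E * frob F" unfolding frob_def using carrier_matD[OF E] carrier_matD[OF F]
    by (simp only:)
  finally show ?thesis .
qed

lemma frob_inner_add:
  assumes E: "E \<in> carrier_mat a b" and F: "F \<in> carrier_mat a b" and G: "G \<in> carrier_mat a b"
  shows "frob_inner E (F + G) = frob_inner E F + frob_inner E G"
  unfolding frob_inner_def using E F G by (simp add: distrib_left sum.distrib)

lemma frob_inner_mult_left:
  assumes Q: "Q \<in> carrier_mat N N" and E: "E \<in> carrier_mat N N"
  shows "frob_inner E (Q * E) = (\<Sum>j<N. bilin Q (\<lambda>i. E $$ (i,j)) (\<lambda>i. E $$ (i,j)))"
proof -
  have "frob_inner E (Q * E) = (\<Sum>i<N. \<Sum>j<N. E $$ (i,j) * (\<Sum>k<N. Q $$ (i,k) * E $$ (k,j)))"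
    unfolding frob_inner_def using Q E by (simp add: scalar_prod_def lessThan_atLeast0)
  also have "\<dots> = (\<Sum>j<N. \<Sum>i<N. E $$ (i,j) * (\<Sum>k<N. Q $$ (i,k) * E $$ (k,j)))" by (rule sum.swap)
  also have "\<dots> = (\<Sum>j<N. bilin Q (\<lambda>i. E $$ (i,j)) (\<lambda>i. E $$ (i,j)))"
    unfolding bilin_def mat_app_def using Q by simp
  finally show ?thesis .
qed

lemma frob_inner_mult_right:
  assumes Q: "Q \<in> carrier_mat N N" and E: "E \<in> carrier_mat N N"
  shows "frob_inner E (E * Q) = (\<Sum>i<N. bilin Q (\<lambda>j. E $$ (i,j)) (\<lambda>j. E $$ (i,j)))"
proof -
  have "frob_inner E (E * Q) = (\<Sum>i<N. \<Sum>j<N. E $$ (i,j) * (\<Sum>k<N. E $$ (i,k) * Q $$ (k,j)))"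
    unfolding frob_inner_def using Q E by (simp add: scalar_prod_def lessThan_atLeast0)
  also have "\<dots> = (\<Sum>i<N. \<Sum>k<N. E $$ (i,k) * (\<Sum>j<N. Q $$ (k,j) * E $$ (i,j)))"
  proof (rule sum.cong[OF refl])
    fix i
    show "(\<Sum>j<N. E $$ (i,j) * (\<Sum>k<N. E $$ (i,k) * Q $$ (k,j))) = (\<Sum>k<N. E $$ (i,k) * (\<Sum>j<N. Q $$ (k,j) * E $$ (i,j)))"
    proof -
      have "(\<Sum>j<N. E $$ (i,j) * (\<Sum>k<N. E $$ (i,k) * Q $$ (k,j))) = (\<Sum>j<N. \<Sum>k<N. E $$ (i,j) * (E $$ (i,k) * Q $$ (k,j)))"
        by (simp add: sum_distrib_left)
      also have "\<dots> = (\<Sum>k<N. \<Sum>j<N. E $$ (i,j) * (E $$ (i,k) * Q $$ (k,j)))" by (rule sum.swap)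
      also have "\<dots> = (\<Sum>k<N. E $$ (i,k) * (\<Sum>j<N. Q $$ (k,j) * E $$ (i,j)))"
        by (simp add: sum_distrib_left mult_ac)
      finally show ?thesis .
    qed
  qed
  also have "\<dots> = (\<Sum>i<N. bilin Q (\<lambda>j. E $$ (i,j)) (\<lambda>j. E $$ (i,j)))"
    unfolding bilin_def mat_app_def using Q by simp
  finally show ?thesis .
qed

text \<open>Pairing Q1 E + E Q0 with E in the Frobenius inner product, the Q1 term is nonnegative and the
  Q0 term is at least c |E|_F^2.\<close>

lemma frob_le_sylvester:
  assumes E: "E \<in> carrier_mat N N" and Q1: "Q1 \<in> carrier_mat N N" and p1: "psd_mat Q1"
  and Q0: "Q0 \<in> carrier_mat N N" and c: "0 < c" and pd: "\<And>x. c * (vnorm N x)\<^sup>2 \<le> bilin Q0 x x"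
  shows "c * frob E \<le> frob (Q1 * E + E * Q0)"
proof -
  have "c * (frob E)\<^sup>2 = (\<Sum>i<N. c * (vnorm N (\<lambda>j. E $$ (i,j)))\<^sup>2)"
    using E by (simp add: frob_sq vnorm_sq sum_distrib_left)
  also have "\<dots> \<le> (\<Sum>i<N. bilin Q0 (\<lambda>j. E $$ (i,j)) (\<lambda>j. E $$ (i,j)))" by (intro sum_mono pd)
  also have "\<dots> = frob_inner E (E * Q0)" using frob_inner_mult_right[OF Q0 E] by simp
  also have "\<dots> \<le> frob_inner E (Q1 * E) + frob_inner E (E * Q0)"
    using frob_inner_mult_left[OF Q1 E] p1 unfolding psd_mat_def by (simp add: sum_nonneg)
  also have "\<dots> = frob_inner E (Q1 * E + E * Q0)"
    using Q1 E Q0 by (intro frob_inner_add[symmetric, of _ N N]) auto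
  also have "\<dots> \<le> frob E * frob (Q1 * E + E * Q0)"
    using Q1 E Q0 by (intro frob_inner_le[of _ N N]) auto
  finally have h: "c * (frob E)\<^sup>2 \<le> frob E * frob (Q1 * E + E * Q0)" .
  show ?thesis
  proof (cases "frob E = 0")
    case True then show ?thesis using frob_nonneg by simp
  next
    case False
    then have "0 < frob E" using frob_nonneg[of E] by linarith
    then show ?thesis
      using h mult_le_cancel_left_pos[of "frob E" "c * frob E" "frob (Q1 * E + E * Q0)"]
      by (simp add: power2_eq_square mult_ac)
  qed
qed

lemma sylvester_eq_0_imp:
  assumes E: "E \<in> carrier_mat N N" and Q1: "Q1 \<in> carrier_mat N N" and p1: "psd_mat Q1"
    and Q0: "Q0 \<in> carrier_mat N N" and c: "0 < c" and pd: "\<And>x. c * (vnorm N x)\<^sup>2 \<le> bilin Q0 x x"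
    and eq: "Q1 * E + E * Q0 = 0\<^sub>m N N"
  shows "E = 0\<^sub>m N N"
proof (rule carrier_mat_eqI[OF E zero_carrier_mat])
  have "frob (0\<^sub>m N N :: real mat) = 0" unfolding frob_def by (rule L2_set_0') auto
  then have "c * frob E \<le> 0" using frob_le_sylvester[OF E Q1 p1 Q0 c pd] eq by simp
  then have "frob E \<le> 0" using c by (simp add: mult_le_0_iff)
  then show "E $$ (i,j) = 0\<^sub>m N N $$ (i,j)" if "i < N" "j < N" for i j
    using abs_le_frob[of i E j] E that by simp
qed

lemma unfold_tprod:
  assumes "tdims m n l A" "tdims n q l B" "0 < l"
  shows "unfold (A \<star> B) = bcirc A * unfold B"
  unfolding tprod_def tdimsD(1)[OF assms(1)]
  by (rule unfold_fold[OF mult_carrier_mat[OF bcirc_carrier unfold_carrier]]) (use assms in auto)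

lemma tinner_unfold:
  assumes Z: "tdims p 1 l Z" and W: "tdims p 1 l W" and l: "0 < l"
  shows "tinner Z W = (\<Sum>r<p*l. unfold Z $$ (r,0) * unfold W $$ (r,0))"
proof -
  have "tinner Z W = (\<Sum>k<l. \<Sum>i<p. Z ! k $$ (i,0) * W ! k $$ (i,0))"
    unfolding tinner_def tdimsD(1)[OF Z]
  proof (rule sum.cong[OF refl])
    fix k assume "k \<in> {..<l}"
    then have "Z ! k \<in> carrier_mat p 1" using tdimsD(2)[OF Z] by simp
    then show "(\<Sum>i<dim_row (Z ! k). \<Sum>j<dim_col (Z ! k). Z ! k $$ (i,j) * W ! k $$ (i,j)) =
      (\<Sum>i<p. Z ! k $$ (i,0) * W ! k $$ (i,0))" by auto
  qed
  also have "\<dots> = (\<Sum>r<p*l. unfold Z $$ (r,0) * unfold W $$ (r,0))"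
    using Z W l by (simp add: sum_lessThan_mult unfold_index block_index_less)
  finally show ?thesis .
qed

lemma tinner_tprod_eq_bilin:
  assumes S: "tdims p p l S" and Z: "tdims p 1 l Z" and l: "0 < l"
  shows "tinner Z (S \<star> Z) = bilin (bcirc S) (\<lambda>r. unfold Z $$ (r,0)) (\<lambda>r. unfold Z $$ (r,0))"
  using bcirc_carrier[OF S l] unfold_carrier[OF Z l]
  by (simp add: tinner_unfold[OF Z tprod_tdims[OF S Z l] l] unfold_tprod[OF S Z l] bilin_def mat_app_def
      scalar_prod_def lessThan_atLeast0)

lemma tpsd_iff:
  assumes S: "tdims p p l S" and l: "0 < l"
  shows "tpsd p l S \<longleftrightarrow> psd_mat (bcirc S)"
proof
  assume t: "tpsd p l S"
  show "psd_mat (bcirc S)" unfolding psd_mat_def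
  proof
    fix x
    define Z where "Z = fold l (mat (p*l) 1 (\<lambda>(r,_). x r))"
    have Z: "tdims p 1 l Z" unfolding Z_def by (rule tdims_fold) (use l in auto)
    have "unfold Z $$ (r,0) = x r" if "r < p*l" for r
      using that unfolding Z_def unfold_fold[OF mat_carrier l] by simp
    then have "bilin (bcirc S) x x = tinner Z (S \<star> Z)"
      unfolding tinner_tprod_eq_bilin[OF S Z l] using bcirc_carrier[OF S l]
      by (intro bilin_cong) auto
    then show "0 \<le> bilin (bcirc S) x x" using t Z unfolding tpsd_def by simp
  qed
qed (simp add: tpsd_def psd_mat_def tinner_tprod_eq_bilin[OF S _ l])

lemma tsym_iff:
  assumes S: "tdims p p l S" and l: "0 < l"
  shows "tsym S \<longleftrightarrow> sym_mat (bcirc S)"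
proof -
  have St: "tdims p p l (ttrans S)" using ttrans_tdims[OF S l] .
  have "tsym S \<longleftrightarrow> bcirc S = bcirc (ttrans S)"
    unfolding tsym_def using bcirc_inj[OF S St l] by auto
  also have "\<dots> \<longleftrightarrow> sym_mat (bcirc S)" unfolding sym_mat_def bcirc_ttrans[OF S l] by auto
  finally show ?thesis .
qed

lemma sym_mat_iff_index:
  assumes M: "M \<in> carrier_mat N N"
  shows "sym_mat M \<longleftrightarrow> (\<forall>i<N. \<forall>j<N. M $$ (i,j) = M $$ (j,i))"
proof
  assume "sym_mat M" then show "\<forall>i<N. \<forall>j<N. M $$ (i,j) = M $$ (j,i)" using sym_matD[OF M] by blast
next
  assume h: "\<forall>i<N. \<forall>j<N. M $$ (i,j) = M $$ (j,i)"
  show "sym_mat M" unfolding sym_mat_def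
  proof (rule eq_matI)
    show "dim_row (transpose_mat M) = dim_row M" "dim_col (transpose_mat M) = dim_col M" using M
      by auto
    fix i j assume "i < dim_row M" "j < dim_col M"
    then show "transpose_mat M $$ (i,j) = M $$ (i,j)" using M h by auto
  qed
qed

lemma index_mult_mat_sum:
  assumes A: "A \<in> carrier_mat a b" and B: "B \<in> carrier_mat b c" and i: "i < a" and j: "j < c"
  shows "(A * B) $$ (i,j) = (\<Sum>k<b. A $$ (i,k) * B $$ (k,j))"
  using A B i j by (simp add: scalar_prod_def lessThan_atLeast0)

lemma diff_sq_mat:
  fixes A B :: "real mat" assumes A: "A \<in> carrier_mat N N" and B: "B \<in> carrier_mat N N"
    and comm: "A * B = B * A"
  shows "(A + B) * (A - B) = A * A - B * B"
proof -
  have "(A + B) * (A - B) = A * (A - B) + B * (A - B)"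
    by (rule add_mult_distrib_mat[OF A B minus_carrier_mat[OF B]])
  also have "\<dots> = (A * A - A * B) + (B * A - B * B)" using A B
    by (simp add: mult_minus_distrib_mat[of _ N N])
  also have "\<dots> = A * A - B * B" unfolding comm using A B by (intro eq_matI) auto
  finally show ?thesis .
qed

lemma sym_mat_limit:
  assumes "\<And>k. Y k \<in> carrier_mat N N" "\<And>k. sym_mat (Y k)" "L \<in> carrier_mat N N"
    and lim: "\<And>i j. i < N \<Longrightarrow> j < N \<Longrightarrow> (\<lambda>k. Y k $$ (i,j)) \<longlonglongrightarrow> L $$ (i,j)"
  shows "sym_mat L"
proof -
  have "L $$ (i,j) = L $$ (j,i)" if "i < N" "j < N" for i j
  proof -
    have "Y k $$ (i,j) = Y k $$ (j,i)" for k
      using assms(2)[of k] sym_mat_iff_index[OF assms(1)[of k]] that by blast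
    then show ?thesis using LIMSEQ_unique[OF lim[OF that]] lim[OF that(2,1)] by simp
  qed
  then show ?thesis using sym_mat_iff_index[OF assms(3)] by blast
qed

lemma op_bound_limit:
  assumes Y: "\<And>k. Y k \<in> carrier_mat N N" and bound: "\<And>k. op_bound (Y k) b"
    and L: "L \<in> carrier_mat N N"
    and lim: "\<And>i j. i < N \<Longrightarrow> j < N \<Longrightarrow> (\<lambda>k. Y k $$ (i,j)) \<longlonglongrightarrow> L $$ (i,j)"
  shows "op_bound L b"
  unfolding op_bound_def
proof
  fix x
  have "(\<lambda>k. vnorm N (mat_app (Y k) x)) \<longlonglongrightarrow> vnorm N (mat_app L x)"
    unfolding vnorm_def L2_set_def mat_app_def using carrier_matD[OF Y] L lim
    by (auto intro!: tendsto_intros)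
  moreover have "vnorm N (mat_app (Y k) x) \<le> b * vnorm N x" for k
    using bound[of k] carrier_matD[OF Y[of k]] unfolding op_bound_def by simp
  ultimately have "vnorm N (mat_app L x) \<le> b * vnorm N x"
    by (intro LIMSEQ_le_const2) auto
  then show "vnorm (dim_row L) (mat_app L x) \<le> b * vnorm (dim_col L) x" using L by simp
qed

section \<open>Square roots of positive definite block-circulant matrices\<close>

text \<open>For I \<le> A \<le> s I the square root of A is sqrt s (I - L), where L is the limit of the iteration
  Y' = (C + Y^2)/2 with C = I - A/s, since then (I - L)^2 = I - C.  If the operator norm of C is
  \<gamma> < 1, the iteration stays in the ball of radius r, the smaller root of r = (\<gamma> + r^2)/2, and its
  steps shrink geometrically with ratio r.\<close>

context
  fixes N :: nat and C :: "real mat" and \<gamma> :: real and Y :: "nat \<Rightarrow> real mat"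
  assumes C: "C \<in> carrier_mat N N" and C_sym: "sym_mat C" and C_bound: "op_bound C \<gamma>"
    and \<gamma>: "0 \<le> \<gamma>" "\<gamma> < 1"
    and Y_0: "Y 0 = 0\<^sub>m N N" and Y_Suc: "\<And>k. Y (Suc k) = (1/2) \<cdot>\<^sub>m (C + Y k * Y k)"
begin

lemma sqrt_iter_carrier: "Y k \<in> carrier_mat N N"
  by (induction k) (use C in \<open>simp_all add: Y_0 Y_Suc\<close>)

lemma sqrt_iter_sym: "sym_mat (Y k)"
proof (induction k)
  case (Suc k)
  note Yk = sqrt_iter_carrier[of k]
  have CY: "(1/2) \<cdot>\<^sub>m (C + Y k * Y k) \<in> carrier_mat N N" using C Yk by simp
  have "(\<Sum>m<N. Y k $$ (i,m) * Y k $$ (m,j)) = (\<Sum>m<N. Y k $$ (j,m) * Y k $$ (m,i))"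
    if "i < N" "j < N" for i j
    using Suc that sym_mat_iff_index[OF Yk] by (auto simp: mult.commute intro!: sum.cong)
  then show ?case
    using C_sym sym_mat_iff_index[OF C] C Yk unfolding Y_Suc sym_mat_iff_index[OF CY]
    by (simp add: index_mult_mat_sum[OF Yk Yk] del: index_mult_mat(1))
qed (simp add: Y_0 sym_mat_def)

lemma sqrt_iter_comm: "Y k * C = C * Y k"
proof (induction k)
  case (Suc k)
  note Yk = sqrt_iter_carrier[of k]
  have YY: "Y k * Y k \<in> carrier_mat N N" using Yk by simp
  have "Y k * Y k * C = Y k * (C * Y k)" using Suc by (simp add: assoc_mult_mat[OF Yk Yk C])
  also have "\<dots> = C * (Y k * Y k)"
    using Suc by (simp add: assoc_mult_mat[OF Yk C Yk, symmetric] assoc_mult_mat[OF C Yk Yk])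
  finally have "(C + Y k * Y k) * C = C * (C + Y k * Y k)"
    by (simp add: add_mult_distrib_mat[OF C YY C] mult_add_distrib_mat[OF C C YY])
  moreover have CY: "C + Y k * Y k \<in> carrier_mat N N" using C Yk by simp
  ultimately show ?case
    unfolding Y_Suc mult_smult_distrib[OF C CY] mult_smult_assoc_mat[OF CY C] by simp
qed (use C in \<open>simp add: Y_0\<close>)

lemma sqrt_iter_comm_Suc: "Y (Suc k) * Y k = Y k * Y (Suc k)"
proof -
  note Yk = sqrt_iter_carrier[of k]
  have CY: "C + Y k * Y k \<in> carrier_mat N N" using C Yk by simp
  have YY: "Y k * Y k \<in> carrier_mat N N" using Yk by simp
  have "(C + Y k * Y k) * Y k = Y k * (C + Y k * Y k)"
    using sqrt_iter_comm[of k]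
    by (simp add: add_mult_distrib_mat[OF C YY Yk] mult_add_distrib_mat[OF Yk C YY] assoc_mult_mat[OF Yk Yk Yk])
  then show ?thesis
    unfolding Y_Suc mult_smult_distrib[OF Yk CY] mult_smult_assoc_mat[OF CY Yk] by simp
qed

lemma sqrt_iter_radius: "(\<gamma> + (1 - sqrt (1 - \<gamma>))\<^sup>2) / 2 = 1 - sqrt (1 - \<gamma>)"
  using \<gamma> by (simp add: power2_diff)

lemma sqrt_iter_bound: "op_bound (Y k) (1 - sqrt (1 - \<gamma>))"
proof (induction k)
  case 0
  have "0 \<le> 1 - sqrt (1 - \<gamma>)" using \<gamma> by simp
  then show ?case unfolding op_bound_def Y_0 mat_app_def
    by (auto simp: vnorm_def L2_set_def intro!: mult_nonneg_nonneg sum_nonneg)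
next
  case (Suc k)
  let ?r = "1 - sqrt (1 - \<gamma>)"
  have "0 \<le> ?r" using \<gamma> by simp
  then have "op_bound (C + Y k * Y k) (\<gamma> + ?r * ?r)"
    using op_bound_add[OF C _ C_bound op_bound_mult[OF _ _ Suc Suc]] sqrt_iter_carrier[of k] by simp
  then have "op_bound ((1/2) \<cdot>\<^sub>m (C + Y k * Y k)) (\<bar>1/2\<bar> * (\<gamma> + ?r * ?r))"
    using C sqrt_iter_carrier[of k] by (intro op_bound_smult[of _ N N]) auto
  then show ?case
    unfolding Y_Suc by (rule op_bound_mono) (use sqrt_iter_radius in \<open>simp add: power2_eq_square\<close>)
qed

lemma sqrt_iter_step_bound: "op_bound (Y (Suc k) - Y k) (\<gamma>/2 * (1 - sqrt (1 - \<gamma>))^k)"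
proof (induction k)
  case 0
  have "Y (Suc 0) - Y 0 = (1/2) \<cdot>\<^sub>m C" using C by (intro eq_matI) (auto simp: Y_Suc Y_0)
  then show ?case using op_bound_smult[OF C C_bound, of "1/2"] by (simp add: mult.commute)
next
  case (Suc k)
  define r where "r = 1 - sqrt (1 - \<gamma>)"
  note Yk = sqrt_iter_carrier[of k] and Yk1 = sqrt_iter_carrier[of "Suc k"]
  have "Y (Suc (Suc k)) - Y (Suc k) = (1/2) \<cdot>\<^sub>m (Y (Suc k) * Y (Suc k) - Y k * Y k)"
    using Yk Yk1 C by (intro eq_matI) (auto simp: Y_Suc[of "Suc k"] Y_Suc[of k] algebra_simps)
  also have "Y (Suc k) * Y (Suc k) - Y k * Y k = (Y (Suc k) + Y k) * (Y (Suc k) - Y k)"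
    by (rule diff_sq_mat[OF Yk1 Yk sqrt_iter_comm_Suc, symmetric])
  finally have step: "Y (Suc (Suc k)) - Y (Suc k) = (1/2) \<cdot>\<^sub>m ((Y (Suc k) + Y k) * (Y (Suc k) - Y k))" .
  have "0 \<le> r + r" using \<gamma> by (simp add: r_def)
  then have "op_bound ((Y (Suc k) + Y k) * (Y (Suc k) - Y k)) ((r + r) * (\<gamma>/2 * r^k))"
    using Yk Yk1 Suc op_bound_add[OF Yk1 Yk sqrt_iter_bound sqrt_iter_bound] unfolding r_def
    by (intro op_bound_mult) auto
  then have "op_bound ((1/2) \<cdot>\<^sub>m ((Y (Suc k) + Y k) * (Y (Suc k) - Y k))) (\<bar>1/2\<bar> * ((r + r) * (\<gamma>/2 * r^k)))"
    using Yk Yk1 by (intro op_bound_smult[of _ N N]) auto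
  then have "op_bound ((1/2) \<cdot>\<^sub>m ((Y (Suc k) + Y k) * (Y (Suc k) - Y k))) (\<gamma>/2 * r ^ Suc k)"
    by (rule op_bound_mono) (simp add: algebra_simps)
  then show ?case unfolding step r_def .
qed

lemma sqrt_iter_convergent:
  assumes "i < N" "j < N"
  shows "convergent (\<lambda>k. Y k $$ (i,j))"
proof -
  let ?r = "1 - sqrt (1 - \<gamma>)"
  define d where "d m = Y (Suc m) $$ (i,j) - Y m $$ (i,j)" for m
  have "norm (d m) \<le> \<gamma>/2 * ?r^m" for m
  proof -
    have "d m = (Y (Suc m) - Y m) $$ (i,j)"
      unfolding d_def using sqrt_iter_carrier[of m] sqrt_iter_carrier[of "Suc m"] assms by simp
    then show ?thesis
      using abs_index_le_op_bound[OF sqrt_iter_step_bound[of m]] sqrt_iter_carrier[of m]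
        sqrt_iter_carrier[of "Suc m"] assms by simp
  qed
  moreover have "summable (\<lambda>m. \<gamma>/2 * ?r^m)" using \<gamma> by (intro summable_mult summable_geometric) auto
  ultimately have "summable d" by (metis summable_comparison_test')
  moreover have "Y k $$ (i,j) = (\<Sum>m<k. d m)" for k
    unfolding d_def sum_lessThan_telescope[of "\<lambda>m. Y m $$ (i,j)"] using assms by (simp add: Y_0)
  ultimately show ?thesis by (simp add: summable_iff_convergent)
qed

lemma sqrt_iter_limit:
  obtains L where "L \<in> carrier_mat N N"
    "\<And>i j. i < N \<Longrightarrow> j < N \<Longrightarrow> (\<lambda>k. Y k $$ (i,j)) \<longlonglongrightarrow> L $$ (i,j)"
    "L * L = 2 \<cdot>\<^sub>m L - C" "sym_mat L" "op_bound L (1 - sqrt (1 - \<gamma>))"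
proof
  define L where "L = mat N N (\<lambda>(i,j). lim (\<lambda>k. Y k $$ (i,j)))"
  show L: "L \<in> carrier_mat N N" unfolding L_def by simp
  show lim: "(\<lambda>k. Y k $$ (i,j)) \<longlonglongrightarrow> L $$ (i,j)" if "i < N" "j < N" for i j
    unfolding L_def using that sqrt_iter_convergent[OF that] by (simp add: convergent_LIMSEQ_iff)
  show "L * L = 2 \<cdot>\<^sub>m L - C"
  proof (rule eq_matI)
    fix i j assume "i < dim_row (2 \<cdot>\<^sub>m L - C)" "j < dim_col (2 \<cdot>\<^sub>m L - C)"
    then have i: "i < N" and j: "j < N" using C by auto
    have step: "Y (Suc k) $$ (i,j) = (1/2) * (C $$ (i,j) + (\<Sum>m<N. Y k $$ (i,m) * Y k $$ (m,j)))" for k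
      using sqrt_iter_carrier[of k] C i j by (simp add: Y_Suc scalar_prod_def lessThan_atLeast0)
    have "(\<lambda>k. (1/2) * (C $$ (i,j) + (\<Sum>m<N. Y k $$ (i,m) * Y k $$ (m,j)))) \<longlonglongrightarrow> L $$ (i,j)"
      using LIMSEQ_Suc[OF lim[OF i j]] unfolding step .
    moreover have "(\<lambda>k. (1/2) * (C $$ (i,j) + (\<Sum>m<N. Y k $$ (i,m) * Y k $$ (m,j))))
        \<longlonglongrightarrow> (1/2) * (C $$ (i,j) + (\<Sum>m<N. L $$ (i,m) * L $$ (m,j)))"
      using lim i j by (intro tendsto_intros) auto
    ultimately have "L $$ (i,j) = (1/2) * (C $$ (i,j) + (\<Sum>m<N. L $$ (i,m) * L $$ (m,j)))"
      by (rule LIMSEQ_unique)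
    then show "(L * L) $$ (i,j) = (2 \<cdot>\<^sub>m L - C) $$ (i,j)"
      using L C i j by (simp add: scalar_prod_def lessThan_atLeast0)
  qed (use L C in auto)
  show "sym_mat L" by (rule sym_mat_limit[OF sqrt_iter_carrier sqrt_iter_sym L lim])
  show "op_bound L (1 - sqrt (1 - \<gamma>))"
    by (rule op_bound_limit[OF sqrt_iter_carrier sqrt_iter_bound L lim])
qed

end

lemma bcirc_limit:
  assumes T: "\<And>k. tdims m n l (T k)" and l: "0 < l" and L: "L \<in> carrier_mat (m*l) (n*l)"
    and lim: "\<And>i j. i < m*l \<Longrightarrow> j < n*l \<Longrightarrow> (\<lambda>k. bcirc (T k) $$ (i,j)) \<longlonglongrightarrow> L $$ (i,j)"
  obtains T' where "tdims m n l T'" "bcirc T' = L"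
proof
  define T' where "T' = fold l (mat (m*l) n (\<lambda>(i,j). L $$ (i,j)))"
  show T': "tdims m n l T'" unfolding T'_def by (rule tdims_fold) (use l in auto)
  show "bcirc T' = L"
  proof (rule eq_matI)
    fix r c assume "r < dim_row L" "c < dim_col L"
    then have r: "r < m*l" and c: "c < n*l" using L by auto
    then have "0 < m" "0 < n" by (auto intro: gr0I)
    define K where "K = circ_idx l (r div m) (c div n)"
    have K: "K < l" unfolding K_def by (rule circ_idx_less[OF l])
    have r': "K*m + r mod m < m*l" and c': "c mod n < n*l"
      using K \<open>0 < m\<close> \<open>0 < n\<close> l block_index_less[of 0 l "c mod n" n]
      by (auto intro: block_index_less)
    have "bcirc (T k) $$ (r,c) = bcirc (T k) $$ (K*m + r mod m, c mod n)" for k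
      using bcirc_index[OF T l r c] nth_tensor_eq_bcirc[OF T l K] \<open>0 < m\<close> \<open>0 < n\<close>
      by (simp add: K_def)
    then have "L $$ (r,c) = L $$ (K*m + r mod m, c mod n)"
      using LIMSEQ_unique[OF lim[OF r c]] lim[OF r' c'] by simp
    moreover have "bcirc T' $$ (r,c) = T' ! K $$ (r mod m, c mod n)"
      by (simp add: bcirc_index[OF T' l r c] K_def)
    moreover have "T' ! K $$ (r mod m, c mod n) = L $$ (K*m + r mod m, c mod n)"
      unfolding T'_def using fold_index[OF mat_carrier l K] r' \<open>0 < m\<close> \<open>0 < n\<close> by simp
    ultimately show "bcirc T' $$ (r,c) = L $$ (r,c)" by simp
  qed (use L bcirc_carrier[OF T' l] in auto)
qed

lemma tsqrt_iter_limit: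
  assumes C: "tdims p p l C" and l: "0 < l" and C_sym: "sym_mat (bcirc C)"
    and C_bound: "op_bound (bcirc C) \<gamma>" and \<gamma>: "0 \<le> \<gamma>" "\<gamma> < 1"
  obtains L where "tdims p p l L" "sym_mat (bcirc L)" "bcirc L * bcirc L = 2 \<cdot>\<^sub>m bcirc L - bcirc C"
    "op_bound (bcirc L) (1 - sqrt (1 - \<gamma>))"
proof -
  define T where "T k = ((\<lambda>Y. tsmult (1/2) (C \<oplus>\<^sub>t Y \<star> Y)) ^^ k) (replicate l (0\<^sub>m p p))" for k
  have T: "tdims p p l (T k)" for k
    by (induction k) (simp_all add: T_def tzero_tdims tsmult_tdims tplus_tdims C tprod_tdims l)
  have "bcirc (T (Suc k)) = (1/2) \<cdot>\<^sub>m (bcirc C + bcirc (T k) * bcirc (T k))" for k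
    using T[of k]
    by (simp add: T_def bcirc_tsmult[OF tplus_tdims[OF C tprod_tdims]] bcirc_tplus[OF C tprod_tdims]
        bcirc_tprod C l)
  moreover have "bcirc (T 0) = 0\<^sub>m (p*l) (p*l)" by (simp add: T_def bcirc_tzero[OF l])
  ultimately obtain L where L: "L \<in> carrier_mat (p*l) (p*l)"
    and lim: "\<And>i j. i < p*l \<Longrightarrow> j < p*l \<Longrightarrow> (\<lambda>k. bcirc (T k) $$ (i,j)) \<longlonglongrightarrow> L $$ (i,j)"
    and "L * L = 2 \<cdot>\<^sub>m L - bcirc C" "sym_mat L" "op_bound L (1 - sqrt (1 - \<gamma>))"
    using sqrt_iter_limit[where Y = "\<lambda>k. bcirc (T k)"] bcirc_carrier[OF C l] C_sym C_bound \<gamma>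
    by blast
  moreover obtain Lt where "tdims p p l Lt" "bcirc Lt = L" using bcirc_limit[OF T l L lim] by blast
  ultimately show thesis using that by blast
qed

lemma sym_op_bound_id_minus_scaled:
  assumes A: "A \<in> carrier_mat N N" and A_sym: "sym_mat A" and s: "1 \<le> s"
    and lower: "\<And>x. (vnorm N x)\<^sup>2 \<le> bilin A x x" and upper: "\<And>x. bilin A x x \<le> s * (vnorm N x)\<^sup>2"
  shows "sym_mat (1\<^sub>m N - (1/s) \<cdot>\<^sub>m A)" "op_bound (1\<^sub>m N - (1/s) \<cdot>\<^sub>m A) (1 - 1/s)"
proof -
  have C: "1\<^sub>m N - (1/s) \<cdot>\<^sub>m A \<in> carrier_mat N N" by (rule minus_carrier_mat[OF smult_carrier_mat[OF A]])
  have bilin_C: "bilin (1\<^sub>m N - (1/s) \<cdot>\<^sub>m A) x x = (vnorm N x)\<^sup>2 - (1/s) * bilin A x x" for x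
    using A by (simp add: bilin_diff[of _ N] bilin_smult[of _ N] bilin_one)
  show sym: "sym_mat (1\<^sub>m N - (1/s) \<cdot>\<^sub>m A)"
    using A_sym A unfolding sym_mat_iff_index[OF A] sym_mat_iff_index[OF C] by auto
  have "psd_mat (1\<^sub>m N - (1/s) \<cdot>\<^sub>m A)" unfolding psd_mat_def bilin_C
    using upper s by (simp add: field_simps)
  moreover have "bilin (1\<^sub>m N - (1/s) \<cdot>\<^sub>m A) x x \<le> (1 - 1/s) * (vnorm N x)\<^sup>2" for x
    unfolding bilin_C using lower[of x] s by (simp add: field_simps)
  ultimately show "op_bound (1\<^sub>m N - (1/s) \<cdot>\<^sub>m A) (1 - 1/s)"
    using s by (intro op_bound_psd[OF C sym]) auto
qed

lemma psd_smult_id_minus: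
  assumes L: "L \<in> carrier_mat N N" and bound: "op_bound L r" and "r \<le> 1" "0 \<le> c"
  shows "psd_mat (c \<cdot>\<^sub>m (1\<^sub>m N - L))"
  unfolding psd_mat_def
proof
  fix x
  have "r * (vnorm N x)\<^sup>2 \<le> (vnorm N x)\<^sup>2" using mult_right_mono[OF assms(3) zero_le_power2] by simp
  then have "bilin L x x \<le> (vnorm N x)\<^sup>2" using bilin_le_op_bound[OF L bound, of x] by linarith
  then show "0 \<le> bilin (c \<cdot>\<^sub>m (1\<^sub>m N - L)) x x"
    using L assms(4) by (simp add: bilin_smult[of _ N] bilin_diff[of _ N] bilin_one minus_carrier_mat)
qed

lemma tsqrt_exists:
  assumes A: "tdims p p l A" and l: "0 < l" and A_sym: "sym_mat (bcirc A)" and s: "1 \<le> s"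
    and lower: "\<And>x. (vnorm (p*l) x)\<^sup>2 \<le> bilin (bcirc A) x x"
    and upper: "\<And>x. bilin (bcirc A) x x \<le> s * (vnorm (p*l) x)\<^sup>2"
  shows "\<exists>S. tdims p p l S \<and> tsym S \<and> tpsd p l S \<and> S \<star> S = A"
proof -
  define N where "N = p*l"
  note Am = bcirc_carrier[OF A l, folded N_def]
  define C where "C = tid p l \<ominus>\<^sub>t tsmult (1/s) A"
  have C: "tdims p p l C" unfolding C_def by (intro tminus_tdims tid_tdims tsmult_tdims A)
  have bC: "bcirc C = 1\<^sub>m N - (1/s) \<cdot>\<^sub>m bcirc A"
    unfolding C_def N_def
    by (simp add: bcirc_tminus[OF tid_tdims tsmult_tdims[OF A] l] bcirc_tid[OF l]
        bcirc_tsmult[OF A l])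
  obtain Lt where Lt: "tdims p p l Lt" and L_sym: "sym_mat (bcirc Lt)"
    and LL: "bcirc Lt * bcirc Lt = 2 \<cdot>\<^sub>m bcirc Lt - bcirc C"
    and L_bound: "op_bound (bcirc Lt) (1 - sqrt (1 - (1 - 1/s)))"
    using tsqrt_iter_limit[OF C l _ _, of "1 - 1/s"] s
      sym_op_bound_id_minus_scaled[OF Am A_sym s lower[folded N_def] upper[folded N_def], folded bC]
    by auto
  define L where "L = bcirc Lt"
  note Lm = bcirc_carrier[OF Lt l, folded N_def L_def]
  define S where "S = tsmult (sqrt s) (tid p l \<ominus>\<^sub>t Lt)"
  have S: "tdims p p l S" unfolding S_def by (intro tsmult_tdims tminus_tdims tid_tdims Lt)
  have bS: "bcirc S = sqrt s \<cdot>\<^sub>m (1\<^sub>m N - L)" unfolding S_def N_def L_def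
    by (simp add: bcirc_tsmult[OF tminus_tdims[OF tid_tdims Lt] l] bcirc_tminus[OF tid_tdims Lt l]
        bcirc_tid[OF l])
  have IL: "1\<^sub>m N - L \<in> carrier_mat N N" by (rule minus_carrier_mat[OF Lm])
  have "(1\<^sub>m N - L) * (1\<^sub>m N - L) = (1\<^sub>m N - L) - (L - L * L)"
    using Lm by (simp add: mult_minus_distrib_mat[OF IL one_carrier_mat Lm]
        minus_mult_distrib_mat[OF one_carrier_mat Lm Lm])
  also have "\<dots> = (1/s) \<cdot>\<^sub>m bcirc A"
    unfolding L_def LL bC using Lm Am s by (intro eq_matI) (auto simp: L_def)
  finally have "bcirc S * bcirc S = sqrt s \<cdot>\<^sub>m (sqrt s \<cdot>\<^sub>m ((1/s) \<cdot>\<^sub>m bcirc A))"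
    unfolding bS using IL
    by (simp add: mult_smult_assoc_mat[OF IL smult_carrier_mat[OF IL]] mult_smult_distrib[OF IL IL])
  also have "\<dots> = bcirc A" using Am s by (intro eq_matI) (auto simp flip: mult.assoc)
  finally have "S \<star> S = A"
    by (intro bcirc_inj[OF tprod_tdims[OF S S l] A l]) (simp add: bcirc_tprod[OF S S l])
  moreover have "tsym S"
    unfolding tsym_iff[OF S l] bS sym_mat_iff_index[OF smult_carrier_mat[OF IL]]
    using L_sym sym_mat_iff_index[OF Lm] Lm by (auto simp: L_def)
  moreover have "tpsd p l S"
    unfolding tpsd_iff[OF S l] bS using s
    by (intro psd_smult_id_minus[OF Lm L_bound[folded L_def]]) auto
  ultimately show ?thesis using S by blast
qed

definition id_plus_gram :: "nat \<Rightarrow> nat \<Rightarrow> tensor \<Rightarrow> tensor" where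
  "id_plus_gram p l W = tid p l \<oplus>\<^sub>t ttrans W \<star> W"

lemma id_plus_gram_tdims:
  assumes W: "tdims n p l W" and l: "0 < l"
  shows "tdims p p l (id_plus_gram p l W)"
  unfolding id_plus_gram_def
  by (intro tplus_tdims tid_tdims tprod_tdims[OF ttrans_tdims[OF W l] W l])

lemma bcirc_id_plus_gram:
  assumes W: "tdims n p l W" and l: "0 < l"
  shows "bcirc (id_plus_gram p l W) = 1\<^sub>m (p*l) + transpose_mat (bcirc W) * bcirc W"
  unfolding id_plus_gram_def
  by (simp add: bcirc_tplus[OF tid_tdims tprod_tdims[OF ttrans_tdims[OF W l] W l] l] bcirc_tid[OF l]
      bcirc_tprod[OF ttrans_tdims[OF W l] W l] bcirc_ttrans[OF W l])

lemma bilin_id_plus_gram: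
  assumes Wm: "Wm \<in> carrier_mat a N"
  shows "bilin (1\<^sub>m N + transpose_mat Wm * Wm) x x = (vnorm N x)\<^sup>2 + (vnorm a (mat_app Wm x))\<^sup>2"
proof -
  have "transpose_mat Wm * Wm \<in> carrier_mat N N" using Wm by simp
  then show ?thesis by (simp add: bilin_add[of _ N] bilin_one bilin_transpose_mult[OF Wm])
qed

lemma sym_mat_id_plus_gram:
  assumes Wm: "Wm \<in> carrier_mat a N"
  shows "sym_mat (1\<^sub>m N + transpose_mat Wm * Wm)"
  unfolding sym_mat_def using Wm
  by (simp add: transpose_add[of _ N N] transpose_mult[of _ N a _ N])

lemma bilin_id_plus_gram_bounds:
  assumes Wm: "Wm \<in> carrier_mat a N"
  shows "(vnorm N x)\<^sup>2 \<le> bilin (1\<^sub>m N + transpose_mat Wm * Wm) x x"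
        "bilin (1\<^sub>m N + transpose_mat Wm * Wm) x x \<le> (1 + (frob Wm)\<^sup>2) * (vnorm N x)\<^sup>2"
proof -
  show "(vnorm N x)\<^sup>2 \<le> bilin (1\<^sub>m N + transpose_mat Wm * Wm) x x"
    unfolding bilin_id_plus_gram[OF Wm] by simp
  have "vnorm a (mat_app Wm x) \<le> frob Wm * vnorm N x" by (rule vnorm_mat_app_le_frob[OF Wm])
  then have "(vnorm a (mat_app Wm x))\<^sup>2 \<le> (frob Wm * vnorm N x)\<^sup>2" using vnorm_nonneg
    by (simp add: power_mono)
  then show "bilin (1\<^sub>m N + transpose_mat Wm * Wm) x x \<le> (1 + (frob Wm)\<^sup>2) * (vnorm N x)\<^sup>2"
    unfolding bilin_id_plus_gram[OF Wm] by (simp add: power_mult_distrib algebra_simps)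
qed

lemma tsqrt_id_plus_gram_exists:
  assumes W: "tdims n p l W" and l: "0 < l"
  shows "\<exists>S. tdims p p l S \<and> tsym S \<and> tpsd p l S \<and> S \<star> S = id_plus_gram p l W"
proof -
  have Wm: "bcirc W \<in> carrier_mat (n*l) (p*l)" by (rule bcirc_carrier[OF W l])
  show ?thesis
    by (rule tsqrt_exists[OF id_plus_gram_tdims[OF W l] l _ _ _ _, of "1 + (frob (bcirc W))\<^sup>2"])
       (use sym_mat_id_plus_gram[OF Wm] bilin_id_plus_gram_bounds[OF Wm] in \<open>auto simp: bcirc_id_plus_gram[OF W l]\<close>)
qed

lemma vnorm_le_mat_app_of_square:
  assumes Q: "Q \<in> carrier_mat N N" and s: "sym_mat Q"
    and lo: "\<And>x. (vnorm N x)\<^sup>2 \<le> bilin (Q * Q) x x"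
  shows "vnorm N x \<le> vnorm N (mat_app Q x)"
proof -
  have "bilin (Q * Q) x x = bilin (transpose_mat Q * Q) x x" using s unfolding sym_mat_def by simp
  also have "\<dots> = (vnorm N (mat_app Q x))\<^sup>2" by (rule bilin_transpose_mult[OF Q])
  finally have "(vnorm N x)\<^sup>2 \<le> (vnorm N (mat_app Q x))\<^sup>2" using lo[of x] by simp
  then show ?thesis using vnorm_nonneg by (meson power2_le_imp_le)
qed

lemma psd_lower_bound_exists:
  assumes Q: "Q \<in> carrier_mat N N" and s: "sym_mat Q" and p: "psd_mat Q"
    and lo: "\<And>x. vnorm N x \<le> vnorm N (mat_app Q x)"
  shows "\<exists>c>0. \<forall>x. c * (vnorm N x)\<^sup>2 \<le> bilin Q x x"
proof -
  define \<beta> where "\<beta> = frob Q + 1"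
  have b0: "0 < \<beta>" unfolding \<beta>_def using frob_nonneg[of Q] by simp
  have oQ: "op_bound Q \<beta>" unfolding \<beta>_def by (rule op_bound_mono[OF op_bound_frob]) simp
  have "(1/\<beta>) * (vnorm N x)\<^sup>2 \<le> bilin Q x x" for x
    using square_le_bilin_of_lower_bound[OF Q s p lo oQ b0, of x] b0 by (simp add: field_simps)
  moreover have "0 < 1/\<beta>" using b0 by simp
  ultimately show ?thesis by blast
qed

lemma mat_sqrt_unique:
  assumes Q1: "Q1 \<in> carrier_mat N N" and Q2: "Q2 \<in> carrier_mat N N"
    and s2: "sym_mat Q2" and p1: "psd_mat Q1" and p2: "psd_mat Q2" and eq: "Q1 * Q1 = Q2 * Q2"
    and lo: "\<And>x. (vnorm N x)\<^sup>2 \<le> bilin (Q2 * Q2) x x"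
  shows "Q1 = Q2"
proof -
  obtain c where c: "0 < c" and pd: "\<And>x. c * (vnorm N x)\<^sup>2 \<le> bilin Q2 x x"
    using psd_lower_bound_exists[OF Q2 s2 p2 vnorm_le_mat_app_of_square[OF Q2 s2 lo]] by blast
  have "Q1 * (Q1 - Q2) + (Q1 - Q2) * Q2 = 0\<^sub>m N N"
    unfolding mult_minus_distrib_mat[OF Q1 Q1 Q2] minus_mult_distrib_mat[OF Q1 Q2 Q2] eq
    using Q1 Q2 by (intro eq_matI) auto
  then have "Q1 - Q2 = 0\<^sub>m N N"
    by (rule sylvester_eq_0_imp[OF minus_carrier_mat[OF Q2] Q1 p1 Q2 c pd])
  then have "(Q1 - Q2) $$ (i,j) = 0" if "i < N" "j < N" for i j using that by simp
  then show ?thesis using Q1 Q2 by (intro eq_matI) auto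
qed

lemma tsqrt_id_plus_gram_unique:
  assumes W: "tdims n p l W" and l: "0 < l"
    and S1: "tdims p p l S1 \<and> tsym S1 \<and> tpsd p l S1 \<and> S1 \<star> S1 = id_plus_gram p l W"
    and S2: "tdims p p l S2 \<and> tsym S2 \<and> tpsd p l S2 \<and> S2 \<star> S2 = id_plus_gram p l W"
  shows "S1 = S2"
proof -
  have Wm: "bcirc W \<in> carrier_mat (n*l) (p*l)" by (rule bcirc_carrier[OF W l])
  have t1: "tdims p p l S1" and t2: "tdims p p l S2" using S1 S2 by auto
  note Q1 = bcirc_carrier[OF t1 l] and Q2 = bcirc_carrier[OF t2 l]
  have sq1: "bcirc S1 * bcirc S1 = bcirc (id_plus_gram p l W)" using S1 bcirc_tprod[OF t1 t1 l]
    by simp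
  have sq2: "bcirc S2 * bcirc S2 = bcirc (id_plus_gram p l W)" using S2 bcirc_tprod[OF t2 t2 l]
    by simp
  have "bcirc S1 = bcirc S2"
  proof (rule mat_sqrt_unique[OF Q1 Q2])
    show "sym_mat (bcirc S2)" using S2 tsym_iff[OF t2 l] by simp
    show "psd_mat (bcirc S1)" using S1 tpsd_iff[OF t1 l] by simp
    show "psd_mat (bcirc S2)" using S2 tpsd_iff[OF t2 l] by simp
    show "bcirc S1 * bcirc S1 = bcirc S2 * bcirc S2" using sq1 sq2 by simp
    show "(vnorm (p*l) x)\<^sup>2 \<le> bilin (bcirc S2 * bcirc S2) x x" for x
      unfolding sq2 bcirc_id_plus_gram[OF W l] by (rule bilin_id_plus_gram_bounds(1)[OF Wm])
  qed
  then show ?thesis by (rule bcirc_inj[OF t1 t2 l])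
qed

lemma tsqrt_id_plus_gram:
  assumes W: "tdims n p l W" and l: "0 < l"
  shows "tdims p p l (tsqrt p l (id_plus_gram p l W)) \<and> tsym (tsqrt p l (id_plus_gram p l W)) \<and>
         tpsd p l (tsqrt p l (id_plus_gram p l W)) \<and> tsqrt p l (id_plus_gram p l W) \<star> tsqrt p l (id_plus_gram p l W) = id_plus_gram p l W"
proof -
  have "\<exists>!S. tdims p p l S \<and> tsym S \<and> tpsd p l S \<and> S \<star> S = id_plus_gram p l W"
    using tsqrt_id_plus_gram_exists[OF W l] tsqrt_id_plus_gram_unique[OF W l] by blast
  then show ?thesis unfolding tsqrt_def by (rule theI')
qed

lemma det_nonzero_of_vnorm_le:
  assumes Q: "Q \<in> carrier_mat N N" and lo: "\<And>x. vnorm N x \<le> vnorm N (mat_app Q x)"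
  shows "det Q \<noteq> 0"
proof
  assume "det Q = 0"
  then obtain v where v: "v \<in> carrier_vec N" "v \<noteq> 0\<^sub>v N" "Q *\<^sub>v v = 0\<^sub>v N"
    using det_0_iff_vec_prod_zero_field[OF Q] by blast
  define x where "x i = v $ i" for i
  have "mat_app Q x i = 0" if i: "i < N" for i
  proof -
    have "(Q *\<^sub>v v) $ i = (0\<^sub>v N) $ i" by (simp only: v(3))
    then have "(Q *\<^sub>v v) $ i = 0" using i by (simp only: index_zero_vec)
    moreover have "(Q *\<^sub>v v) $ i = (\<Sum>j<N. Q $$ (i,j) * v $ j)"
      using Q v(1) i by (auto simp: scalar_prod_def lessThan_atLeast0 intro!: sum.cong)
    ultimately show ?thesis unfolding mat_app_def x_def using Q by simp
  qed
  then have "vnorm N (mat_app Q x) = 0" unfolding vnorm_def by (simp add: L2_set_def)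
  then have "vnorm N x = 0" using lo[of x] vnorm_nonneg[of N x] by simp
  then have "\<forall>i<N. x i = 0" unfolding vnorm_def by (simp add: L2_set_eq_0_iff)
  then have "v = 0\<^sub>v N" using v(1) unfolding x_def by (intro eq_vecI) auto
  then show False using v(2) by simp
qed

lemma mat_inverse_exists:
  assumes Q: "Q \<in> carrier_mat N N" and lo: "\<And>x. vnorm N x \<le> vnorm N (mat_app Q x)"
  shows "\<exists>B. B \<in> carrier_mat N N \<and> Q * B = 1\<^sub>m N \<and> B * Q = 1\<^sub>m N \<and> op_bound B 1"
proof -
  have "Q \<in> Units (ring_mat TYPE(real) N ())"
    by (rule det_non_zero_imp_unit[OF Q det_nonzero_of_vnorm_le[OF Q lo]])
  then obtain B where B: "B \<in> carrier_mat N N" "B * Q = 1\<^sub>m N" "Q * B = 1\<^sub>m N"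
    unfolding Units_def ring_mat_def by auto
  have "op_bound B 1" unfolding op_bound_def
  proof
    fix y
    have "mat_app Q (mat_app B y) i = y i" if i: "i < N" for i
      using mat_app_mult[OF Q B(1) i, of y, symmetric] B(3) mat_app_one[OF i] by simp
    then have "vnorm N (mat_app Q (mat_app B y)) = vnorm N y" by (intro vnorm_cong) auto
    then show "vnorm (dim_row B) (mat_app B y) \<le> 1 * vnorm (dim_col B) y"
      using lo[of "mat_app B y"] B(1) by simp
  qed
  then show ?thesis using B by blast
qed

section \<open>Derivatives of matrix-valued functions at 0\<close>

definition mat_deriv0 :: "nat \<Rightarrow> nat \<Rightarrow> (real \<Rightarrow> real mat) \<Rightarrow> real mat \<Rightarrow> bool" where
  "mat_deriv0 a b F F' \<longleftrightarrow> (\<forall>i<a. \<forall>j<b. ((\<lambda>t. F t $$ (i,j)) has_real_derivative F' $$ (i,j)) (at 0))"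

lemma mat_deriv0_tendsto:
  "mat_deriv0 a b F F' \<Longrightarrow> i < a \<Longrightarrow> j < b \<Longrightarrow> ((\<lambda>t. F t $$ (i,j)) \<longlongrightarrow> F 0 $$ (i,j)) (at 0)"
  unfolding mat_deriv0_def by (metis DERIV_continuous continuous_at)

lemma mat_deriv0_quotient:
  "mat_deriv0 a b F F' \<Longrightarrow> i < a \<Longrightarrow> j < b \<Longrightarrow>
     ((\<lambda>t. (F t $$ (i,j) - F 0 $$ (i,j)) / t) \<longlongrightarrow> F' $$ (i,j)) (at 0)"
  unfolding mat_deriv0_def has_field_derivative_iff by simp

lemma mat_deriv0_affine:
  assumes "F0 \<in> carrier_mat a b" "V \<in> carrier_mat a b"
  shows "mat_deriv0 a b (\<lambda>t. F0 + t \<cdot>\<^sub>m V) V"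
  unfolding mat_deriv0_def using assms by (auto intro!: derivative_eq_intros)

lemma mat_deriv0_mult:
  assumes F: "\<And>t. F t \<in> carrier_mat a b" and G: "\<And>t. G t \<in> carrier_mat b c"
    and F': "F' \<in> carrier_mat a b" and G': "G' \<in> carrier_mat b c"
    and dF: "mat_deriv0 a b F F'" and dG: "mat_deriv0 b c G G'"
  shows "mat_deriv0 a c (\<lambda>t. F t * G t) (F' * G 0 + F 0 * G')"
  unfolding mat_deriv0_def
proof (intro allI impI)
  fix i j assume i: "i < a" and j: "j < c"
  have "((\<lambda>t. \<Sum>k<b. F t $$ (i,k) * G t $$ (k,j)) has_real_derivative
          (\<Sum>k<b. F' $$ (i,k) * G 0 $$ (k,j) + G' $$ (k,j) * F 0 $$ (i,k))) (at 0)"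
    using dF dG i j unfolding mat_deriv0_def by (intro DERIV_sum DERIV_mult) auto
  moreover have "(\<Sum>k<b. F' $$ (i,k) * G 0 $$ (k,j) + G' $$ (k,j) * F 0 $$ (i,k)) = (F' * G 0 + F 0 * G') $$ (i,j)"
    using F' G[of 0] F[of 0] G' i j
    by (simp add: index_mult_mat_sum[OF F' G i j] index_mult_mat_sum[OF F G' i j] sum.distrib mult.commute
        del: index_mult_mat(1))
  ultimately show "((\<lambda>t. (F t * G t) $$ (i,j)) has_real_derivative (F' * G 0 + F 0 * G') $$ (i,j)) (at 0)"
    using index_mult_mat_sum[OF F G i j] by simp
qed

lemma inverse_diff_eq:
  fixes A A' B B' :: "real mat"
  assumes A: "A \<in> carrier_mat N N" and A': "A' \<in> carrier_mat N N" and B: "B \<in> carrier_mat N N"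
    and B': "B' \<in> carrier_mat N N" and "B' * A' = 1\<^sub>m N" and "A * B = 1\<^sub>m N"
  shows "B' - B = B' * (A - A') * B"
proof -
  have "B' * (A - A') * B = B' * A * B - B' * A' * B"
    using A A' B B'
    by (simp add: mult_minus_distrib_mat[OF B' A A'] minus_mult_distrib_mat[of _ N N])
  also have "\<dots> = B' - B" using assms by (simp add: assoc_mult_mat[OF B' A B])
  finally show ?thesis by simp
qed

lemma abs_double_sum_le:
  fixes f :: "nat \<Rightarrow> nat \<Rightarrow> real"
  shows "\<bar>\<Sum>b<N. (\<Sum>a<N. f a b) * z b\<bar> \<le> (\<Sum>b<N. \<Sum>a<N. \<bar>f a b\<bar> * \<bar>z b\<bar>)"
proof -
  have "\<bar>(\<Sum>a<N. f a b) * z b\<bar> \<le> (\<Sum>a<N. \<bar>f a b\<bar> * \<bar>z b\<bar>)" for b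
    by (simp add: abs_mult sum_distrib_right[symmetric] mult_right_mono sum_abs)
  then show ?thesis by (rule order_trans[OF sum_abs sum_mono])
qed

context
  fixes N :: nat and F Fi :: "real \<Rightarrow> real mat" and F' :: "real mat" and \<beta> :: real
  assumes F: "\<And>t. F t \<in> carrier_mat N N" and Fi: "\<And>t. Fi t \<in> carrier_mat N N"
    and F': "F' \<in> carrier_mat N N"
    and inv: "\<And>t. Fi t * F t = 1\<^sub>m N" "F 0 * Fi 0 = 1\<^sub>m N"
    and bnd: "\<And>t i j. i < N \<Longrightarrow> j < N \<Longrightarrow> \<bar>Fi t $$ (i,j)\<bar> \<le> \<beta>"
    and dF: "mat_deriv0 N N F F'"
begin

lemma inverse_increment_index:
  assumes "i < N" "j < N"
  shows "Fi t $$ (i,j) - Fi 0 $$ (i,j)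
    = (\<Sum>b<N. (\<Sum>a<N. Fi t $$ (i,a) * (F 0 $$ (a,b) - F t $$ (a,b))) * Fi 0 $$ (b,j))"
proof -
  have "Fi t $$ (i,j) - Fi 0 $$ (i,j) = (Fi t - Fi 0) $$ (i,j)"
    using Fi[of t] Fi[of 0] assms by simp
  also have "\<dots> = (Fi t * (F 0 - F t) * Fi 0) $$ (i,j)"
    unfolding inverse_diff_eq[OF F F Fi Fi inv(1)[of t] inv(2)] ..
  also have "\<dots> = (\<Sum>b<N. (Fi t * (F 0 - F t)) $$ (i,b) * Fi 0 $$ (b,j))"
    using assms by (intro index_mult_mat_sum[OF mult_carrier_mat[OF Fi minus_carrier_mat[OF F]] Fi])
  also have "\<dots> = (\<Sum>b<N. (\<Sum>a<N. Fi t $$ (i,a) * (F 0 $$ (a,b) - F t $$ (a,b))) * Fi 0 $$ (b,j))"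
    using assms F[of t] F[of 0]
    by (intro sum.cong refl) (simp add: index_mult_mat_sum[OF Fi minus_carrier_mat[OF F]] del: index_mult_mat(1))
  finally show ?thesis .
qed

lemma inverse_index_tendsto:
  assumes i: "i < N" and j: "j < N"
  shows "((\<lambda>t. Fi t $$ (i,j)) \<longlongrightarrow> Fi 0 $$ (i,j)) (at 0)"
proof -
  let ?g = "\<lambda>t. \<Sum>b<N. \<Sum>a<N. \<beta> * \<bar>F 0 $$ (a,b) - F t $$ (a,b)\<bar> * \<bar>Fi 0 $$ (b,j)\<bar>"
  have "\<bar>Fi t $$ (i,a)\<bar> * \<bar>x\<bar> * \<bar>y\<bar> \<le> \<beta> * \<bar>x\<bar> * \<bar>y\<bar>" if "a < N" for t a x y
    using bnd[OF i that, of t] by (intro mult_right_mono) auto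
  then have "\<bar>Fi t $$ (i,j) - Fi 0 $$ (i,j)\<bar> \<le> ?g t" for t
    unfolding inverse_increment_index[OF i j]
    by (intro order_trans[OF abs_double_sum_le] sum_mono) (simp add: abs_mult)
  then have ev: "eventually (\<lambda>t. norm (Fi t $$ (i,j) - Fi 0 $$ (i,j)) \<le> norm (?g t) * 1) (at 0)"
    by (intro always_eventually allI) (simp add: order_trans[OF _ abs_ge_self])
  have "(?g \<longlongrightarrow> (\<Sum>b<N. \<Sum>a<N. \<beta> * \<bar>F 0 $$ (a,b) - F 0 $$ (a,b)\<bar> * \<bar>Fi 0 $$ (b,j)\<bar>)) (at 0)"
    using mat_deriv0_tendsto[OF dF]
    by (intro tendsto_sum tendsto_mult_right tendsto_mult_left tendsto_rabs tendsto_diff tendsto_const) auto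
  then have "(?g \<longlongrightarrow> 0) (at 0)" by simp
  from tendsto_0_le[OF this ev] show ?thesis by (simp add: LIM_zero_iff)
qed

lemma mat_deriv0_inverse: "mat_deriv0 N N Fi (- (Fi 0 * F' * Fi 0))"
  unfolding mat_deriv0_def
proof (intro allI impI)
  fix i j assume i: "i < N" and j: "j < N"
  have quot: "(Fi t $$ (i,j) - Fi 0 $$ (i,j)) / t =
      (\<Sum>b<N. (\<Sum>a<N. Fi t $$ (i,a) * ((F 0 $$ (a,b) - F t $$ (a,b)) / t)) * Fi 0 $$ (b,j))" for t
    unfolding inverse_increment_index[OF i j]
    by (simp add: sum_divide_distrib sum_distrib_right sum_distrib_left algebra_simps)
  have "((\<lambda>t. (F 0 $$ (a,b) - F t $$ (a,b)) / t) \<longlongrightarrow> - F' $$ (a,b)) (at 0)" if "a < N" "b < N" for a b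
    using tendsto_minus[OF mat_deriv0_quotient[OF dF that]] by (simp add: minus_divide_left)
  then have "((\<lambda>t. (Fi t $$ (i,j) - Fi 0 $$ (i,j)) / t) \<longlongrightarrow>
      (\<Sum>b<N. (\<Sum>a<N. Fi 0 $$ (i,a) * (- F' $$ (a,b))) * Fi 0 $$ (b,j))) (at 0)"
    unfolding quot using inverse_index_tendsto i by (intro tendsto_intros) auto
  moreover have "(Fi 0 * F' * Fi 0) $$ (i,j) = (\<Sum>b<N. (Fi 0 * F') $$ (i,b) * Fi 0 $$ (b,j))"
    by (rule index_mult_mat_sum[OF mult_carrier_mat[OF Fi F'] Fi i j])
  moreover have "\<dots> = (\<Sum>b<N. (\<Sum>a<N. Fi 0 $$ (i,a) * F' $$ (a,b)) * Fi 0 $$ (b,j))"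
    by (intro sum.cong refl) (simp add: index_mult_mat_sum[OF Fi F' i] del: index_mult_mat(1))
  ultimately show "((\<lambda>t. Fi t $$ (i,j)) has_real_derivative (- (Fi 0 * F' * Fi 0)) $$ (i,j)) (at 0)"
    unfolding has_field_derivative_iff using Fi[of 0] F' i j by (simp add: sum_negf)
qed

end

text \<open>Both estimates below apply frob_le_sylvester: to D = P t - P 0, for which
  P t D + D P 0 = t B1 + t^2 B2, and to D - t G, for which P 0 (D - t G) + (D - t G) P 0 = t^2 B2 - D^2.\<close>

context
  fixes N :: nat and P :: "real \<Rightarrow> real mat" and B1 B2 :: "real mat" and c :: real
  assumes P: "\<And>t. P t \<in> carrier_mat N N" and P_psd: "\<And>t. psd_mat (P t)"
    and B1: "B1 \<in> carrier_mat N N" and B2: "B2 \<in> carrier_mat N N"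
    and P_sq: "\<And>t. P t * P t = P 0 * P 0 + t \<cdot>\<^sub>m B1 + (t*t) \<cdot>\<^sub>m B2"
    and c: "0 < c" and P0_pd: "\<And>x. c * (vnorm N x)\<^sup>2 \<le> bilin (P 0) x x"
begin

lemma sqrt_path_increment: "c * frob (P t - P 0) \<le> \<bar>t\<bar> * frob B1 + (t*t) * frob B2"
proof -
  have D: "P t - P 0 \<in> carrier_mat N N" by (rule minus_carrier_mat[OF P])
  have "P t * (P t - P 0) + (P t - P 0) * P 0 = P t * P t - P 0 * P 0"
    unfolding mult_minus_distrib_mat[OF P P P] minus_mult_distrib_mat[OF P P P]
    using P[of t] P[of 0] by (intro eq_matI) (simp_all del: index_mult_mat(1))
  also have "\<dots> = t \<cdot>\<^sub>m B1 + (t*t) \<cdot>\<^sub>m B2" unfolding P_sq[of t] using P[of 0] B1 B2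
    by (intro eq_matI) auto
  finally have "c * frob (P t - P 0) \<le> frob (t \<cdot>\<^sub>m B1 + (t*t) \<cdot>\<^sub>m B2)"
    using frob_le_sylvester[OF D P[of t] P_psd[of t] P[of 0] c P0_pd] by simp
  also have "\<dots> \<le> \<bar>t\<bar> * frob B1 + (t*t) * frob B2"
    using frob_add_le[of "t \<cdot>\<^sub>m B1" N N "(t*t) \<cdot>\<^sub>m B2"] B1 B2 by (simp add: frob_smult[of _ N N])
  finally show ?thesis .
qed

lemma sqrt_path_remainder_eq:
  fixes t :: real
  assumes G: "G \<in> carrier_mat N N" and G_eq: "P 0 * G + G * P 0 = B1"
  defines "D \<equiv> P t - P 0"
  shows "P 0 * (D - t \<cdot>\<^sub>m G) + (D - t \<cdot>\<^sub>m G) * P 0 = (t*t) \<cdot>\<^sub>m B2 - D * D"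
proof -
  have "P 0 * (D - t \<cdot>\<^sub>m G) + (D - t \<cdot>\<^sub>m G) * P 0
      = (P 0 * P t - P 0 * P 0 - t \<cdot>\<^sub>m (P 0 * G)) + (P t * P 0 - P 0 * P 0 - t \<cdot>\<^sub>m (G * P 0))"
    unfolding D_def
    by (simp add: mult_minus_distrib_mat[OF P minus_carrier_mat[OF P] smult_carrier_mat[OF G]]
        minus_mult_distrib_mat[OF minus_carrier_mat[OF P] smult_carrier_mat[OF G] P]
        mult_minus_distrib_mat[OF P P P] minus_mult_distrib_mat[OF P P P]
        mult_smult_distrib[OF P G] mult_smult_assoc_mat[OF G P])
  also have "\<dots> = (t*t) \<cdot>\<^sub>m B2 - ((P t * P t - P t * P 0) - (P 0 * P t - P 0 * P 0))"
  proof (rule eq_matI)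
    fix i j assume "i < dim_row ((t*t) \<cdot>\<^sub>m B2 - ((P t * P t - P t * P 0) - (P 0 * P t - P 0 * P 0)))"
      "j < dim_col ((t*t) \<cdot>\<^sub>m B2 - ((P t * P t - P t * P 0) - (P 0 * P t - P 0 * P 0)))"
    then have ij: "i < N" "j < N" using B2 P[of 0] by auto
    have "(P t * P t) $$ (i,j) = (P 0 * P 0) $$ (i,j) + t * B1 $$ (i,j) + t * t * B2 $$ (i,j)"
      unfolding P_sq[of t] using ij P[of 0] B1 B2 by (simp del: index_mult_mat(1))
    moreover have "B1 $$ (i,j) = (P 0 * G) $$ (i,j) + (G * P 0) $$ (i,j)"
      unfolding G_eq[symmetric] using ij P[of 0] G by (simp del: index_mult_mat(1))
    ultimately show "(P 0 * P t - P 0 * P 0 - t \<cdot>\<^sub>m (P 0 * G) + (P t * P 0 - P 0 * P 0 - t \<cdot>\<^sub>m (G * P 0))) $$ (i,j)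
        = ((t*t) \<cdot>\<^sub>m B2 - ((P t * P t - P t * P 0) - (P 0 * P t - P 0 * P 0))) $$ (i,j)"
      using ij P[of 0] P[of t] G B2 by (simp add: algebra_simps del: index_mult_mat(1))
  qed (use P[of 0] G B2 in \<open>simp_all del: index_mult_mat(1)\<close>)
  also have "(P t * P t - P t * P 0) - (P 0 * P t - P 0 * P 0) = D * D"
    unfolding D_def by (simp add: minus_mult_distrib_mat[OF P P minus_carrier_mat[OF P]]
        mult_minus_distrib_mat[OF P P P])
  finally show ?thesis .
qed

lemma sqrt_path_remainder:
  assumes G: "G \<in> carrier_mat N N" and G_eq: "P 0 * G + G * P 0 = B1"
  shows "c * frob (P t - P 0 - t \<cdot>\<^sub>m G) \<le> (t*t) * frob B2 + (frob (P t - P 0))\<^sup>2"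
proof -
  have D: "P t - P 0 \<in> carrier_mat N N" by (rule minus_carrier_mat[OF P])
  have "c * frob (P t - P 0 - t \<cdot>\<^sub>m G) \<le> frob ((t*t) \<cdot>\<^sub>m B2 - (P t - P 0) * (P t - P 0))"
    using frob_le_sylvester[OF minus_carrier_mat[OF smult_carrier_mat[OF G], of "P t - P 0" t] P[of 0] P_psd[of 0]
        P[of 0] c P0_pd]
      sqrt_path_remainder_eq[OF G G_eq, of t] by simp
  also have "\<dots> \<le> (t*t) * frob B2 + (frob (P t - P 0))\<^sup>2"
    using frob_diff_le[of "(t*t) \<cdot>\<^sub>m B2" N N "(P t - P 0) * (P t - P 0)"] frob_mult_le[OF D D] B2 D
    by (simp add: frob_smult[of _ N N] power2_eq_square)
  finally show ?thesis .
qed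

lemma sqrt_path_remainder_quadratic:
  assumes G: "G \<in> carrier_mat N N" and G_eq: "P 0 * G + G * P 0 = B1"
  obtains K where "\<And>t. \<bar>t\<bar> < 1 \<Longrightarrow> frob (P t - P 0 - t \<cdot>\<^sub>m G) \<le> (t*t) * K"
proof
  define M where "M = (frob B1 + frob B2) / c"
  fix t :: real assume t: "\<bar>t\<bar> < 1"
  have "\<bar>t\<bar> * \<bar>t\<bar> \<le> \<bar>t\<bar> * 1" using t by (intro mult_left_mono) auto
  then have "(t*t) * frob B2 \<le> \<bar>t\<bar> * frob B2"
    by (intro mult_right_mono) (simp_all add: abs_mult_self_eq frob_nonneg)
  then have "c * frob (P t - P 0) \<le> \<bar>t\<bar> * (frob B1 + frob B2)"
    using sqrt_path_increment[of t] by (simp add: distrib_left)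
  then have "frob (P t - P 0) \<le> \<bar>t\<bar> * M"
    unfolding M_def using c by (simp add: pos_le_divide_eq mult.commute)
  then have "(frob (P t - P 0))\<^sup>2 \<le> (\<bar>t\<bar> * M)\<^sup>2" by (rule power_mono[OF _ frob_nonneg])
  then have "(frob (P t - P 0))\<^sup>2 \<le> (t*t) * (M * M)"
    unfolding power_mult_distrib power2_abs by (simp add: power2_eq_square)
  then have "c * frob (P t - P 0 - t \<cdot>\<^sub>m G) \<le> (t*t) * (frob B2 + M * M)"
    using sqrt_path_remainder[OF G G_eq, of t] by (simp add: distrib_left)
  then show "frob (P t - P 0 - t \<cdot>\<^sub>m G) \<le> (t*t) * ((frob B2 + M * M) / c)"
    using c by (simp add: pos_le_divide_eq mult.commute)
qed

lemma mat_deriv0_sqrt_path: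
  assumes G: "G \<in> carrier_mat N N" and G_eq: "P 0 * G + G * P 0 = B1"
  shows "mat_deriv0 N N P G"
  unfolding mat_deriv0_def
proof (intro allI impI)
  fix i j assume i: "i < N" and j: "j < N"
  obtain K where K: "\<And>t. \<bar>t\<bar> < 1 \<Longrightarrow> frob (P t - P 0 - t \<cdot>\<^sub>m G) \<le> (t*t) * K"
    using sqrt_path_remainder_quadratic[OF G G_eq] by blast
  have "\<bar>(P t $$ (i,j) - P 0 $$ (i,j)) / t - G $$ (i,j)\<bar> \<le> \<bar>t\<bar> * K" if t: "t \<noteq> 0" "\<bar>t\<bar> < 1" for t
  proof -
    have "t * ((x - y) / t - z) = x - y - t * z" for x y z using t by (simp add: field_simps)
    then have "\<bar>t\<bar> * \<bar>(P t $$ (i,j) - P 0 $$ (i,j)) / t - G $$ (i,j)\<bar> = \<bar>(P t - P 0 - t \<cdot>\<^sub>m G) $$ (i,j)\<bar>"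
      using P[of t] P[of 0] G i j by (simp flip: abs_mult)
    also have "\<dots> \<le> frob (P t - P 0 - t \<cdot>\<^sub>m G)"
      using abs_le_frob[of i "P t - P 0 - t \<cdot>\<^sub>m G" j] P[of t] P[of 0] G i j by simp
    also have "\<dots> \<le> \<bar>t\<bar> * (\<bar>t\<bar> * K)"
      using K[OF t(2)] by (simp only: mult.assoc[symmetric] abs_mult_self_eq)
    finally show ?thesis using t by simp
  qed
  then have "eventually (\<lambda>t. norm ((P t $$ (i,j) - P 0 $$ (i,j)) / t - G $$ (i,j)) \<le> norm (\<bar>t\<bar> * K) * 1) (at 0)"
    unfolding eventually_at
    by (intro exI[of _ 1]) (auto simp: dist_real_def intro: order_trans[OF _ abs_ge_self])
  moreover have "((\<lambda>t. \<bar>t\<bar> * K) \<longlongrightarrow> 0) (at 0)"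
    using tendsto_mult_right[OF tendsto_rabs[OF tendsto_ident_at], of K 0] by simp
  ultimately have "((\<lambda>t. (P t $$ (i,j) - P 0 $$ (i,j)) / t - G $$ (i,j)) \<longlongrightarrow> 0) (at 0)"
    by (rule tendsto_0_le[rotated])
  then show "((\<lambda>t. P t $$ (i,j)) has_real_derivative G $$ (i,j)) (at 0)"
    unfolding has_field_derivative_iff by (simp add: LIM_zero_iff)
qed

end

section \<open>Vectorization and the Sylvester matrix\<close>

lemma vec_index_facts:
  fixes k b a p :: nat
  assumes b: "b < p" and a: "a < p"
  shows "((k*p+b)*p+a) div p = k*p+b" "((k*p+b)*p+a) mod p = a"
        "((k*p+b)*p+a) div (p*p) = k" "((k*p+b)*p+a) mod (p*p) = b*p+a"
        "(b*p+a) div p = b" "(b*p+a) mod p = a" "(k*p+b) div p = k" "(k*p+b) mod p = b"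
proof -
  have e: "(k*p+b)*p+a = k*(p*p) + (b*p+a)" by (simp add: algebra_simps)
  have ba: "b*p+a < p*p" using block_index_less[OF b a] by (simp add: mult.commute)
  then have pp: "p * p \<noteq> 0" by linarith
  show "((k*p+b)*p+a) div p = k*p+b" "((k*p+b)*p+a) mod p = a" using a by auto
  show "((k*p+b)*p+a) div (p*p) = k" "((k*p+b)*p+a) mod (p*p) = b*p+a" unfolding e using ba pp
    by (auto simp: add.commute[of "k*(p*p)"])
  show "(b*p+a) div p = b" "(b*p+a) mod p = a" "(k*p+b) div p = k" "(k*p+b) mod p = b" using a b
    by auto
qed

lemma vec_index_less:
  fixes k b a p l :: nat
  assumes "k < l" "b < p" "a < p"
  shows "(k*p+b)*p+a < p*p*l"
proof -
  have "k*p+b < p*l" using assms by (intro block_index_less) auto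
  then have "(k*p+b)*p+a < p*(p*l)" using assms by (intro block_index_less) auto
  then show ?thesis by (simp add: mult.assoc)
qed

lemma sum_lessThan_mult3:
  fixes p l :: nat
  shows "(\<Sum>y<p*p*l. g y) = (\<Sum>j<l. \<Sum>d<p. \<Sum>c<p. g ((j*p+d)*p+c))"
proof -
  have "(\<Sum>y<p*p*l. g y) = (\<Sum>y<p*(p*l). g y)" by (simp add: mult.assoc)
  also have "\<dots> = (\<Sum>u<p*l. \<Sum>c<p. g (u*p+c))" by (rule sum_lessThan_mult)
  also have "\<dots> = (\<Sum>j<l. \<Sum>d<p. \<Sum>c<p. g ((j*p+d)*p+c))" by (rule sum_lessThan_mult)
  finally show ?thesis .
qed

lemma vec_index_decomp:
  fixes x p l :: nat
  assumes x: "x < p*p*l"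
  shows "\<exists>k b a. k < l \<and> b < p \<and> a < p \<and> x = (k*p+b)*p+a"
proof -
  have p0: "0 < p" using x by (auto intro: gr0I)
  define a where "a = x mod p"
  define b where "b = (x div p) mod p"
  define k where "k = x div p div p"
  have "x = (k*p+b)*p+a" unfolding a_def b_def k_def by (metis div_mult_mod_eq)
  moreover have "k < l"
  proof -
    have "k = x div (p*p)" unfolding k_def by (simp add: div_mult2_eq)
    then show ?thesis using block_div_less[of x "p*p" l] x by simp
  qed
  moreover have "b < p" "a < p" unfolding a_def b_def using p0 by auto
  ultimately show ?thesis by blast
qed

lemma tvec_carrier:
  assumes T: "tdims p p l T" and l: "0 < l"
  shows "tvec T \<in> carrier_vec (p*p*l)"
  unfolding tvec_def Let_def using tdimsD[OF T] l by simp

lemma tvec_index: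
  assumes T: "tdims p p l T" and l: "0 < l" and k: "k < l" and b: "b < p" and a: "a < p"
  shows "tvec T $ ((k*p+b)*p+a) = T ! k $$ (a,b)"
  unfolding tvec_def Let_def using tdimsD[OF T] l vec_index_less[OF k b a] vec_index_facts[OF b a]
  by simp

lemma tvec_inj:
  "tdims p p l T1 \<Longrightarrow> tdims p p l T2 \<Longrightarrow> 0 < l \<Longrightarrow> tvec T1 = tvec T2 \<Longrightarrow> T1 = T2"
  by (rule tdims_eqI) (auto simp: tvec_index[symmetric])

definition unvec :: "nat \<Rightarrow> nat \<Rightarrow> real vec \<Rightarrow> tensor" where
  "unvec p l v = map (\<lambda>k. mat p p (\<lambda>(a,b). v $ ((k*p+b)*p+a))) [0..<l]"

lemma unvec_tdims: "tdims p p l (unvec p l v)" unfolding unvec_def tdims_def by auto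

lemma tvec_unvec:
  assumes v: "v \<in> carrier_vec (p*p*l)" and l: "0 < l"
  shows "tvec (unvec p l v) = v"
proof (rule eq_vecI)
  show "dim_vec (tvec (unvec p l v)) = dim_vec v" using tvec_carrier[OF unvec_tdims l] v by simp
  fix x assume "x < dim_vec v"
  then have x: "x < p*p*l" using v by simp
  obtain k b a where kba: "k < l" "b < p" "a < p" "x = (k*p+b)*p+a" using vec_index_decomp[OF x]
    by blast
  have "tvec (unvec p l v) $ x = unvec p l v ! k $$ (a,b)" unfolding kba(4)
    by (rule tvec_index[OF unvec_tdims l kba(1-3)])
  also have "\<dots> = v $ x" unfolding unvec_def kba(4) using kba by simp
  finally show "tvec (unvec p l v) $ x = v $ x" .
qed

definition sylvester_mat :: "nat \<Rightarrow> nat \<Rightarrow> tensor \<Rightarrow> real mat" where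
  "sylvester_mat p l P = kron (transpose_mat (bcirc_t P)) (1\<^sub>m p) + khatri_rao l (blockI p l) (bcirc P)"

lemma bcirc_t_carrier:
  assumes "tdims m n l A" "0 < l"
  shows "bcirc_t A \<in> carrier_mat (m*l) (n*l)"
  using tdimsD[OF assms(1)] assms(2) unfolding bcirc_t_def Let_def by auto

lemma bcirc_t_index:
  assumes "tdims m n l A" "0 < l" "r < m*l" "c < n*l"
  shows "bcirc_t A $$ (r,c) = A ! circ_idx l (c div n) (r div m) $$ (r mod m, c mod n)"
  using tdimsD[OF assms(1)] assms(2-4) unfolding bcirc_t_def Let_def circ_idx_def by auto

lemma sylvester_mat_summands_carrier:
  assumes P: "tdims p p l P" and l: "0 < l"
  shows "kron (transpose_mat (bcirc_t P)) (1\<^sub>m p) \<in> carrier_mat (p*p*l) (p*p*l)"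
        "khatri_rao l (blockI p l) (bcirc P) \<in> carrier_mat (p*p*l) (p*p*l)"
  unfolding kron_def khatri_rao_def blockI_def Let_def
  using bcirc_t_carrier[OF P l] bcirc_carrier[OF P l] l by (simp_all add: mult_ac)

lemma sylvester_mat_carrier:
  assumes P: "tdims p p l P" and l: "0 < l"
  shows "sylvester_mat p l P \<in> carrier_mat (p*p*l) (p*p*l)"
  unfolding sylvester_mat_def kron_def khatri_rao_def blockI_def Let_def
  using bcirc_t_carrier[OF P l] bcirc_carrier[OF P l] l by (simp add: mult_ac)

lemma index_kron_sylvester:
  assumes P: "tdims p p l P" and l: "0 < l" and kj: "k < l" "j < l"
    and i: "b < p" "a < p" "d < p" "c < p"
  shows "kron (transpose_mat (bcirc_t P)) (1\<^sub>m p) $$ ((k*p+b)*p+a, (j*p+d)*p+c) = P ! circ_idx l k j $$ (d,b) * (if a = c then 1 else 0)"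
proof -
  note Bt = bcirc_t_carrier[OF P l]
  have u: "k*p+b < p*l" "j*p+d < p*l" using kj i by (auto intro: block_index_less)
  have r: "(k*p+b)*p+a < p*l*p" "(j*p+d)*p+c < p*l*p"
    using vec_index_less[OF kj(1) i(1,2)] vec_index_less[OF kj(2) i(3,4)] by (simp_all add: mult_ac)
  show ?thesis unfolding kron_def
    using Bt r u i vec_index_facts[OF i(1,2)] vec_index_facts[OF i(3,4)]
    bcirc_t_index[OF P l u(2) u(1)] by simp
qed

lemma index_khatri_rao_sylvester:
  assumes P: "tdims p p l P" and l: "0 < l" and kj: "k < l" "j < l"
    and i: "b < p" "a < p" "d < p" "c < p"
  shows "khatri_rao l (blockI p l) (bcirc P) $$ ((k*p+b)*p+a, (j*p+d)*p+c) = (if b = d then 1 else 0) * P ! circ_idx l k j $$ (a,c)"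
proof -
  note B = bcirc_carrier[OF P l]
  have u: "k*p+b < p*l" "j*p+d < p*l" "k*p+a < p*l" "j*p+c < p*l" using kj i
    by (auto intro: block_index_less)
  have r: "(k*p+b)*p+a < p*p*l" "(j*p+d)*p+c < p*p*l"
    using vec_index_less[OF kj(1) i(1,2)] vec_index_less[OF kj(2) i(3,4)] by simp_all
  have bl: "blockI p l $$ (k*p+b, j*p+d) = (if b = d then 1 else 0)"
    unfolding blockI_def using u i by (simp add: vec_index_facts)
  have bc: "bcirc P $$ (k*p+a, j*p+c) = P ! circ_idx l k j $$ (a,c)"
    using bcirc_index[OF P l u(3) u(4)] i by simp
  have dims: "dim_row (blockI p l) = p*l" "dim_col (blockI p l) = p*l" unfolding blockI_def by auto
  show ?thesis unfolding khatri_rao_def Let_def dims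
    using B r l vec_index_facts[OF i(1,2)] vec_index_facts[OF i(3,4)] bl bc
    by simp
qed

lemma sum_delta_collapse:
  fixes f g :: "nat \<Rightarrow> real" and h :: "nat \<Rightarrow> nat \<Rightarrow> real"
  assumes a: "a < p" and b: "b < p"
  shows "(\<Sum>d<p. \<Sum>c<p. (f d * (if a = c then 1 else 0) + (if b = d then 1 else 0) * g c) * h c d)
       = (\<Sum>d<p. f d * h a d) + (\<Sum>c<p. g c * h c b)"
proof -
  have "(\<Sum>d<p. \<Sum>c<p. (f d * (if a = c then 1 else 0) + (if b = d then 1 else 0) * g c) * h c d)
      = (\<Sum>d<p. f d * h a d + (if b = d then (\<Sum>c<p. g c * h c d) else 0))"
  proof (rule sum.cong[OF refl])
    fix d assume d: "d \<in> {..<p}"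
    have "(\<Sum>c<p. (f d * (if a = c then 1 else 0) + (if b = d then 1 else 0) * g c) * h c d)
        = (\<Sum>c<p. (if a = c then f d * h c d else 0) + (if b = d then g c * h c d else 0))"
      by (intro sum.cong) (auto simp: algebra_simps)
    also have "\<dots> = f d * h a d + (if b = d then (\<Sum>c<p. g c * h c d) else 0)"
      using a by (cases "b = d") (simp_all add: sum.distrib sum.delta)
    finally show "(\<Sum>c<p. (f d * (if a = c then 1 else 0) + (if b = d then 1 else 0) * g c) * h c d)
        = f d * h a d + (if b = d then (\<Sum>c<p. g c * h c d) else 0)" .
  qed
  also have "\<dots> = (\<Sum>d<p. f d * h a d) + (\<Sum>c<p. g c * h c b)"
    using b by (simp add: sum.distrib sum.delta)
  finally show ?thesis .
qed


lemma sylvester_mat_tvec: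
  assumes S: "tdims p p l S" and P: "tdims p p l P" and l: "0 < l"
  shows "sylvester_mat p l P *\<^sub>v tvec S = tvec (S \<star> P \<oplus>\<^sub>t P \<star> S)"
proof -
  note Kc = sylvester_mat_carrier[OF P l] and Sv = tvec_carrier[OF S l]
  have SP: "tdims p p l (S \<star> P)" and PS: "tdims p p l (P \<star> S)" using tprod_tdims S P l by auto
  have R: "tdims p p l (S \<star> P \<oplus>\<^sub>t P \<star> S)" by (rule tplus_tdims[OF SP PS])
  show ?thesis
  proof (rule eq_vecI)
    fix x assume "x < dim_vec (tvec (S \<star> P \<oplus>\<^sub>t P \<star> S))"
    then have x: "x < p*p*l" using tvec_carrier[OF R l] by simp
    obtain k b a where kba: "k < l" "b < p" "a < p" "x = (k*p+b)*p+a" using vec_index_decomp[OF x]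
      by blast
    have "(sylvester_mat p l P *\<^sub>v tvec S) $ x = (\<Sum>y<p*p*l. sylvester_mat p l P $$ (x,y) * tvec S $ y)"
      using Kc Sv x by (simp add: scalar_prod_def lessThan_atLeast0)
    also have "\<dots> = (\<Sum>j<l. \<Sum>d<p. \<Sum>c<p. (P ! circ_idx l k j $$ (d,b) * (if a = c then 1 else 0)
                   + (if b = d then 1 else 0) * P ! circ_idx l k j $$ (a,c)) * S ! j $$ (c,d))"
      unfolding sum_lessThan_mult3 kba(4)
        using kba sylvester_mat_summands_carrier[OF P l] vec_index_less
      by (intro sum.cong refl) (simp add: sylvester_mat_def tvec_index[OF S l] index_kron_sylvester[OF P l] index_khatri_rao_sylvester[OF P l])
    also have "\<dots> = (\<Sum>j<l. \<Sum>d<p. S ! j $$ (a,d) * P ! circ_idx l k j $$ (d,b))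
        + (\<Sum>j<l. \<Sum>c<p. P ! circ_idx l k j $$ (a,c) * S ! j $$ (c,b))"
    proof -
      have "(\<Sum>j<l. \<Sum>d<p. \<Sum>c<p. (P ! circ_idx l k j $$ (d,b) * (if a = c then 1 else 0)
                   + (if b = d then 1 else 0) * P ! circ_idx l k j $$ (a,c)) * S ! j $$ (c,d))
          = (\<Sum>j<l. (\<Sum>d<p. P ! circ_idx l k j $$ (d,b) * S ! j $$ (a,d))
                   + (\<Sum>c<p. P ! circ_idx l k j $$ (a,c) * S ! j $$ (c,b)))"
        using kba by (intro sum.cong refl sum_delta_collapse) auto
      then show ?thesis by (simp add: sum.distrib mult.commute)
    qed
    also have "(\<Sum>j<l. \<Sum>d<p. S ! j $$ (a,d) * P ! circ_idx l k j $$ (d,b))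
        = (\<Sum>j<l. \<Sum>d<p. S ! circ_idx l k j $$ (a,d) * P ! j $$ (d,b))"
      using sum.reindex_bij_betw[OF bij_betw_circ_idx_left[OF l, of k],
          of "\<lambda>j. \<Sum>d<p. S ! j $$ (a,d) * P ! circ_idx l k j $$ (d,b)"]
      by (simp add: circ_idx_circ_idx[OF l])
    also have "\<dots> + (\<Sum>j<l. \<Sum>c<p. P ! circ_idx l k j $$ (a,c) * S ! j $$ (c,b)) = tvec (S \<star> P \<oplus>\<^sub>t P \<star> S) $ x"
      using kba tdimsD(1)[OF SP] tdimsD(1)[OF PS] tdimsD(2)[OF SP kba(1)] tdimsD(2)[OF PS kba(1)]
      by (simp add: tvec_index[OF R l] tplus_nth tprod_index[OF S P l] tprod_index[OF P S l])
    finally show "(sylvester_mat p l P *\<^sub>v tvec S) $ x = tvec (S \<star> P \<oplus>\<^sub>t P \<star> S) $ x" .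
  qed (use Kc tvec_carrier[OF R l] in simp)
qed

lemma pinv_eq_inverse:
  fixes K Ki :: "real mat"
  assumes K: "K \<in> carrier_mat M M" and Ki: "Ki \<in> carrier_mat M M"
    and KKi: "K * Ki = 1\<^sub>m M" and KiK: "Ki * K = 1\<^sub>m M"
  shows "pinv K = Ki"
  unfolding pinv_def
proof (rule the_equality)
  show "Ki \<in> carrier_mat (dim_col K) (dim_row K) \<and> K * Ki * K = K \<and> Ki * K * Ki = Ki \<and>
        transpose_mat (K * Ki) = K * Ki \<and> transpose_mat (Ki * K) = Ki * K"
    using K Ki KKi KiK by simp
next
  fix Z assume h: "Z \<in> carrier_mat (dim_col K) (dim_row K) \<and> K * Z * K = K \<and> Z * K * Z = Z \<and>
        transpose_mat (K * Z) = K * Z \<and> transpose_mat (Z * K) = Z * K"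
  then have Z: "Z \<in> carrier_mat M M" and KZK: "K * Z * K = K" using K by auto
  have "Z = (Ki * K) * Z * (K * Ki)" using KKi KiK Z by simp
  also have "\<dots> = Ki * (K * Z * K) * Ki"
    by (simp only: assoc_mult_mat[OF mult_carrier_mat[OF Ki K] Z mult_carrier_mat[OF K Ki]]
      assoc_mult_mat[OF Ki K mult_carrier_mat[OF Z mult_carrier_mat[OF K Ki]]]
      assoc_mult_mat[OF Ki mult_carrier_mat[OF mult_carrier_mat[OF K Z] K] Ki]
      assoc_mult_mat[OF mult_carrier_mat[OF K Z] K Ki]
      assoc_mult_mat[OF K Z mult_carrier_mat[OF K Ki]])
  also have "\<dots> = Ki" using KZK KiK Ki by (simp add: assoc_mult_mat[OF Ki K Ki])
  finally show "Z = Ki" .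
qed

lemma tvec_zero:
  assumes l: "0 < l"
  shows "tvec (replicate l (0\<^sub>m p p)) = 0\<^sub>v (p*p*l)"
proof (rule eq_vecI)
  show "dim_vec (tvec (replicate l (0\<^sub>m p p))) = dim_vec (0\<^sub>v (p*p*l) :: real vec)"
    using tvec_carrier[OF tzero_tdims l] by simp
  fix x assume "x < dim_vec (0\<^sub>v (p*p*l) :: real vec)"
  then have x: "x < p*p*l" by simp
  obtain k b a where kba: "k < l" "b < p" "a < p" "x = (k*p+b)*p+a" using vec_index_decomp[OF x]
    by blast
  show "tvec (replicate l (0\<^sub>m p p)) $ x = (0\<^sub>v (p*p*l) :: real vec) $ x"
    unfolding kba(4) tvec_index[OF tzero_tdims l kba(1-3)] using kba x by simp
qed

lemma sylvester_mat_invertible: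
  assumes P: "tdims p p l P" and l: "0 < l" and pP: "psd_mat (bcirc P)"
    and c: "0 < c" and pd: "\<And>x. c * (vnorm (p*l) x)\<^sup>2 \<le> bilin (bcirc P) x x"
  shows "\<exists>Ki. Ki \<in> carrier_mat (p*p*l) (p*p*l) \<and> sylvester_mat p l P * Ki = 1\<^sub>m (p*p*l)
    \<and> Ki * sylvester_mat p l P = 1\<^sub>m (p*p*l)"
proof -
  note K = sylvester_mat_carrier[OF P l] and Pm = bcirc_carrier[OF P l]
  have "det (sylvester_mat p l P) \<noteq> 0"
  proof
    assume "det (sylvester_mat p l P) = 0"
    then obtain v where v: "v \<in> carrier_vec (p*p*l)" "v \<noteq> 0\<^sub>v (p*p*l)" "sylvester_mat p l P *\<^sub>v v = 0\<^sub>v (p*p*l)"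
      using det_0_iff_vec_prod_zero_field[OF K] by blast
    define T where "T = unvec p l v"
    have T: "tdims p p l T" unfolding T_def by (rule unvec_tdims)
    have tv: "tvec T = v" unfolding T_def by (rule tvec_unvec[OF v(1) l])
    have "tvec (T \<star> P \<oplus>\<^sub>t P \<star> T) = tvec (replicate l (0\<^sub>m p p))"
      using sylvester_mat_tvec[OF T P l] v(3) tv tvec_zero[OF l] by simp
    then have "T \<star> P \<oplus>\<^sub>t P \<star> T = replicate l (0\<^sub>m p p)"
      by (rule tvec_inj[OF tplus_tdims[OF tprod_tdims[OF T P l] tprod_tdims[OF P T l]] tzero_tdims l])
    from arg_cong[OF this, of bcirc] have "bcirc P * bcirc T + bcirc T * bcirc P = 0\<^sub>m (p*l) (p*l)"
      using bcirc_carrier[OF T l] Pm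
      by (simp add: bcirc_tplus[OF tprod_tdims[OF T P l] tprod_tdims[OF P T l] l] bcirc_tprod[OF T P l]
          bcirc_tprod[OF P T l] bcirc_tzero[OF l] comm_add_mat[of "bcirc T * bcirc P" "p*l" "p*l"])
    then have "bcirc T = bcirc (replicate l (0\<^sub>m p p))"
      unfolding bcirc_tzero[OF l]
      by (rule sylvester_eq_0_imp[OF bcirc_carrier[OF T l] Pm pP Pm c pd])
    then have "v = 0\<^sub>v (p*p*l)" using tv tvec_zero[OF l] bcirc_inj[OF T tzero_tdims l] by simp
    then show False using v(2) by simp
  qed
  then have "sylvester_mat p l P \<in> Units (ring_mat TYPE(real) (p*p*l) ())"
    by (rule det_non_zero_imp_unit[OF K])
  then show ?thesis unfolding Units_def ring_mat_def by auto
qed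

section \<open>The differentiated retraction\<close>

lemma sum_mult_add_scaled:
  fixes x y u v :: "nat \<Rightarrow> real"
  shows "(\<Sum>k<a. (x k + t * y k) * (u k + t * v k)) = (\<Sum>k<a. x k * u k) + t * ((\<Sum>k<a. x k * v k) + (\<Sum>k<a. y k * u k)) + t * t * (\<Sum>k<a. y k * v k)"
  by (simp add: algebra_simps sum.distrib sum_distrib_left)

lemma id_plus_gram_path_expand:
  fixes Um Vm :: "real mat"
  assumes U: "Um \<in> carrier_mat a N" and V: "Vm \<in> carrier_mat a N"
  shows "1\<^sub>m N + transpose_mat (Um + t \<cdot>\<^sub>m Vm) * (Um + t \<cdot>\<^sub>m Vm) =
         (1\<^sub>m N + transpose_mat Um * Um) + t \<cdot>\<^sub>m (transpose_mat Um * Vm + transpose_mat Vm * Um) + (t*t) \<cdot>\<^sub>m (transpose_mat Vm * Vm)"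
proof (rule eq_matI)
  fix i j assume "i < dim_row ((1\<^sub>m N + transpose_mat Um * Um) + t \<cdot>\<^sub>m (transpose_mat Um * Vm + transpose_mat Vm * Um) + (t*t) \<cdot>\<^sub>m (transpose_mat Vm * Vm))"
    "j < dim_col ((1\<^sub>m N + transpose_mat Um * Um) + t \<cdot>\<^sub>m (transpose_mat Um * Vm + transpose_mat Vm * Um) + (t*t) \<cdot>\<^sub>m (transpose_mat Vm * Vm))"
  then have i: "i < N" and j: "j < N" using V by auto
  have W: "Um + t \<cdot>\<^sub>m Vm \<in> carrier_mat a N" using U V by simp
  have tr: "\<And>M. M \<in> carrier_mat a N \<Longrightarrow> transpose_mat M \<in> carrier_mat N a" by simp
  have m: "\<And>M1 M2. M1 \<in> carrier_mat a N \<Longrightarrow> M2 \<in> carrier_mat a N \<Longrightarrow>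
      (transpose_mat M1 * M2) $$ (i,j) = (\<Sum>k<a. M1 $$ (k,i) * M2 $$ (k,j))"
    using i j by (subst index_mult_mat_sum[OF tr]) auto
  show "(1\<^sub>m N + transpose_mat (Um + t \<cdot>\<^sub>m Vm) * (Um + t \<cdot>\<^sub>m Vm)) $$ (i,j) =
        ((1\<^sub>m N + transpose_mat Um * Um) + t \<cdot>\<^sub>m (transpose_mat Um * Vm + transpose_mat Vm * Um) + (t*t) \<cdot>\<^sub>m (transpose_mat Vm * Vm)) $$ (i,j)"
  proof -
    have "(transpose_mat (Um + t \<cdot>\<^sub>m Vm) * (Um + t \<cdot>\<^sub>m Vm)) $$ (i,j) = (\<Sum>k<a. (Um $$ (k,i) + t * Vm $$ (k,i)) * (Um $$ (k,j) + t * Vm $$ (k,j)))"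
      unfolding m[OF W W] using U V i j by (intro sum.cong refl) auto
    also have "\<dots> = (transpose_mat Um * Um) $$ (i,j) + t * ((transpose_mat Um * Vm) $$ (i,j) + (transpose_mat Vm * Um) $$ (i,j)) + t * t * (transpose_mat Vm * Vm) $$ (i,j)"
      unfolding m[OF U U] m[OF U V] m[OF V U] m[OF V V]
      using sum_mult_add_scaled[where x="\<lambda>k. Um $$ (k,i)" and y="\<lambda>k. Vm $$ (k,i)" and u="\<lambda>k. Um $$ (k,j)" and v="\<lambda>k. Vm $$ (k,j)" and t=t and a=a]
      by simp
    finally show ?thesis using i j U V by (simp del: index_mult_mat(1))
  qed
qed (use U V in auto)

lemma gram_add_tangent:
  fixes Xm Um :: "real mat"
  assumes X: "Xm \<in> carrier_mat a N" and U: "Um \<in> carrier_mat a N"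
    and h1: "transpose_mat Xm * Xm = 1\<^sub>m N"
    and h2: "transpose_mat Xm * Um + transpose_mat Um * Xm = 0\<^sub>m N N"
  shows "transpose_mat (Xm + Um) * (Xm + Um) = 1\<^sub>m N + transpose_mat Um * Um"
proof -
  have XT: "transpose_mat Xm \<in> carrier_mat N a" and UT: "transpose_mat Um \<in> carrier_mat N a"
    using X U by auto
  have XU: "Xm + Um \<in> carrier_mat a N" using U by simp
  have "transpose_mat (Xm + Um) * (Xm + Um) = transpose_mat Xm * (Xm + Um) + transpose_mat Um * (Xm + Um)"
    unfolding transpose_add[OF X U] by (rule add_mult_distrib_mat[OF XT UT XU])
  also have "\<dots> = (transpose_mat Xm * Xm + transpose_mat Xm * Um) + (transpose_mat Um * Xm + transpose_mat Um * Um)"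
    by (simp add: mult_add_distrib_mat[OF XT X U] mult_add_distrib_mat[OF UT X U])
  also have "\<dots> = 1\<^sub>m N + transpose_mat Um * Um"
  proof (rule carrier_mat_eqI[of _ N N])
    fix i j assume i: "i < N" and j: "j < N"
    have e2: "(transpose_mat Xm * Um) $$ (i,j) + (transpose_mat Um * Xm) $$ (i,j) = 0"
      using arg_cong[OF h2, of "\<lambda>M. M $$ (i,j)"] XT UT X U i j by (simp del: index_mult_mat(1))
    have e1: "(transpose_mat Xm * Xm) $$ (i,j) = (1\<^sub>m N :: real mat) $$ (i,j)" using h1 by simp
    show "(transpose_mat Xm * Xm + transpose_mat Xm * Um + (transpose_mat Um * Xm + transpose_mat Um * Um)) $$ (i,j)
          = (1\<^sub>m N + transpose_mat Um * Um) $$ (i,j)"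
      using i j XT UT X U e1 e2 by (simp del: index_mult_mat(1) index_one_mat add: algebra_simps)
  qed (use XT UT X U in auto)
  finally show ?thesis .
qed

lemma transpose_mult_add_tangent:
  fixes Xm Um Vm :: "real mat"
  assumes X: "Xm \<in> carrier_mat a N" and U: "Um \<in> carrier_mat a N"
    and V: "Vm \<in> carrier_mat a N" and h: "transpose_mat Xm * Vm + transpose_mat Vm * Xm = 0\<^sub>m N N"
  shows "transpose_mat (Xm + Um) * Vm + transpose_mat Vm * (Xm + Um) = transpose_mat Um * Vm + transpose_mat Vm * Um"
proof -
  have XT: "transpose_mat Xm \<in> carrier_mat N a" and UT: "transpose_mat Um \<in> carrier_mat N a"
    and VT: "transpose_mat Vm \<in> carrier_mat N a" using X U V by auto
  have "transpose_mat (Xm + Um) * Vm + transpose_mat Vm * (Xm + Um)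
      = (transpose_mat Xm * Vm + transpose_mat Um * Vm) + (transpose_mat Vm * Xm + transpose_mat Vm * Um)"
    unfolding transpose_add[OF X U]
    by (simp add: add_mult_distrib_mat[OF XT UT V] mult_add_distrib_mat[OF VT X U])
  also have "\<dots> = transpose_mat Um * Vm + transpose_mat Vm * Um"
  proof (rule carrier_mat_eqI[of _ N N])
    fix i j assume i: "i < N" and j: "j < N"
    have e: "(transpose_mat Xm * Vm) $$ (i,j) + (transpose_mat Vm * Xm) $$ (i,j) = 0"
      using arg_cong[OF h, of "\<lambda>M. M $$ (i,j)"] XT VT X V i j by (simp del: index_mult_mat(1))
    show "(transpose_mat Xm * Vm + transpose_mat Um * Vm + (transpose_mat Vm * Xm + transpose_mat Vm * Um)) $$ (i,j)
        = (transpose_mat Um * Vm + transpose_mat Vm * Um) $$ (i,j)"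
      using i j XT UT VT X U V e by (simp del: index_mult_mat(1) add: algebra_simps)
  qed (use XT UT VT X U V in auto)
  finally show ?thesis .
qed

lemma transpose_inverse_of_sym:
  fixes P Q :: "real mat"
  assumes P: "P \<in> carrier_mat N N" and Q: "Q \<in> carrier_mat N N"
    and s: "sym_mat P" and PQ: "P * Q = 1\<^sub>m N" and QP: "Q * P = 1\<^sub>m N"
  shows "transpose_mat Q = Q"
proof -
  have QT: "transpose_mat Q \<in> carrier_mat N N" using Q by simp
  have "transpose_mat Q * P = transpose_mat Q * transpose_mat P" using s unfolding sym_mat_def
    by simp
  also have "\<dots> = transpose_mat (P * Q)" by (rule transpose_mult[OF P Q, symmetric])
  also have "\<dots> = 1\<^sub>m N" using PQ by simp
  finally have h: "transpose_mat Q * P = 1\<^sub>m N" .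
  have "transpose_mat Q = transpose_mat Q * (P * Q)" using PQ QT by simp
  also have "\<dots> = (transpose_mat Q * P) * Q" using QT P Q by (simp add: assoc_mult_mat)
  also have "\<dots> = Q" using h Q by simp
  finally show ?thesis .
qed

lemma sylvester_eq_sqrt_derivative:
  fixes P S A B :: "real mat"
  assumes P: "P \<in> carrier_mat N N" and S: "S \<in> carrier_mat N N"
    and A: "A \<in> carrier_mat N N" and B: "B \<in> carrier_mat N N" and S_eq: "S * P + P * S = A - B"
  shows "P * (A - S * P) + (A - S * P) * P = P * A + B * P"
proof -
  have SP: "S * P \<in> carrier_mat N N" using S P by simp
  have "P * (A - S * P) + (A - S * P) * P = P * A + A * P - (P * S * P + S * P * P)"
    unfolding mult_minus_distrib_mat[OF P A SP] minus_mult_distrib_mat[OF A SP P]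
      assoc_mult_mat[OF P S P, symmetric]
    using P S A by (intro eq_matI) (auto simp del: index_mult_mat(1))
  also have "P * S * P + S * P * P = (A - B) * P"
    unfolding S_eq[symmetric] add_mult_distrib_mat[OF mult_carrier_mat[OF S P] mult_carrier_mat[OF P S] P]
    using P S by (intro eq_matI) (auto simp del: index_mult_mat(1))
  also have "(A - B) * P = A * P - B * P" by (rule minus_mult_distrib_mat[OF A B P])
  finally show ?thesis using P A B by (intro eq_matI) (auto simp del: index_mult_mat(1))
qed

lemma retraction_derivative_eq:
  fixes P Q S Y V :: "real mat"
  assumes P: "P \<in> carrier_mat N N" and Q: "Q \<in> carrier_mat N N" and S: "S \<in> carrier_mat N N"
    and Y: "Y \<in> carrier_mat a N" and V: "V \<in> carrier_mat a N" and PQ: "P * Q = 1\<^sub>m N"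
  shows "V * Q - Y * (transpose_mat Y * V - S * P) * Q = Y * S + (1\<^sub>m a - Y * transpose_mat Y) * V * Q"
proof -
  have YV: "transpose_mat Y * V \<in> carrier_mat N N" using Y V by simp
  have YY: "Y * transpose_mat Y \<in> carrier_mat a a" using Y by simp
  have "Y * (S * P) * Q = Y * S"
    using PQ S
    by (simp add: assoc_mult_mat[OF Y mult_carrier_mat[OF S P] Q] assoc_mult_mat[OF S P Q])
  then have "Y * (transpose_mat Y * V - S * P) * Q = Y * transpose_mat Y * V * Q - Y * S"
    unfolding mult_minus_distrib_mat[OF Y YV mult_carrier_mat[OF S P]]
      minus_mult_distrib_mat[OF mult_carrier_mat[OF Y YV] mult_carrier_mat[OF Y mult_carrier_mat[OF S P]] Q]
    using Y V by (simp add: assoc_mult_mat[of Y a N _ N V])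
  moreover have "(1\<^sub>m a - Y * transpose_mat Y) * V * Q = V * Q - Y * transpose_mat Y * V * Q"
    unfolding minus_mult_distrib_mat[OF one_carrier_mat YY V] using V
    by (simp add: minus_mult_distrib_mat[OF V mult_carrier_mat[OF YY V] Q])
  ultimately show ?thesis
    using Y V Q S by (intro eq_matI) (auto simp del: index_mult_mat(1))
qed

lemma transpose_retraction_mult:
  fixes F0 Qi P0 :: "real mat"
  assumes F0: "F0 \<in> carrier_mat a N" and Qi: "Qi \<in> carrier_mat N N"
    and P0: "P0 \<in> carrier_mat N N" and sP: "sym_mat P0" and PQ: "P0 * Qi = 1\<^sub>m N"
    and QP: "Qi * P0 = 1\<^sub>m N"
    and FF: "transpose_mat F0 * F0 = P0 * P0"
  shows "transpose_mat (F0 * Qi) * F0 = P0"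
proof -
  have QT: "transpose_mat Qi = Qi" by (rule transpose_inverse_of_sym[OF P0 Qi sP PQ QP])
  have FT: "transpose_mat F0 \<in> carrier_mat N a" using F0 by simp
  have "transpose_mat (F0 * Qi) * F0 = Qi * transpose_mat F0 * F0" using transpose_mult[OF F0 Qi] QT
    by simp
  also have "\<dots> = Qi * (P0 * P0)" using assoc_mult_mat[OF Qi FT F0] FF by simp
  also have "\<dots> = P0" using assoc_mult_mat[OF Qi P0 P0, symmetric] QP P0 by simp
  finally show ?thesis .
qed

lemma bcirc_tsqrt_id_plus_gram:
  assumes W: "tdims n p l W" and l: "0 < l"
  defines "Q \<equiv> tsqrt p l (id_plus_gram p l W)"
  shows "tdims p p l Q" "sym_mat (bcirc Q)" "psd_mat (bcirc Q)"
    "bcirc Q * bcirc Q = 1\<^sub>m (p*l) + transpose_mat (bcirc W) * bcirc W"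
    "\<And>x. vnorm (p*l) x \<le> vnorm (p*l) (mat_app (bcirc Q) x)"
proof -
  note facts = tsqrt_id_plus_gram[OF W l, folded Q_def]
  show Q: "tdims p p l Q" using facts by blast
  show sym: "sym_mat (bcirc Q)" using facts tsym_iff[OF Q l] by blast
  show "psd_mat (bcirc Q)" using facts tpsd_iff[OF Q l] by blast
  show sq: "bcirc Q * bcirc Q = 1\<^sub>m (p*l) + transpose_mat (bcirc W) * bcirc W"
    using facts bcirc_tprod[OF Q Q l] bcirc_id_plus_gram[OF W l] by simp
  show "vnorm (p*l) x \<le> vnorm (p*l) (mat_app (bcirc Q) x)" for x
    using vnorm_le_mat_app_of_square[OF bcirc_carrier[OF Q l] sym] bilin_id_plus_gram_bounds(1)[OF bcirc_carrier[OF W l]] unfolding sq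
    by blast
qed

lemma bcirc_tinv_tsqrt_id_plus_gram:
  assumes W: "tdims n p l W" and l: "0 < l"
  defines "Q \<equiv> tsqrt p l (id_plus_gram p l W)"
  shows "tdims p p l (tinv p l Q)" "bcirc (tinv p l Q) * bcirc Q = 1\<^sub>m (p*l)"
    "bcirc Q * bcirc (tinv p l Q) = 1\<^sub>m (p*l)"
    "\<And>i j. i < p*l \<Longrightarrow> j < p*l \<Longrightarrow> \<bar>bcirc (tinv p l Q) $$ (i,j)\<bar> \<le> 1"
proof -
  note Q = bcirc_tsqrt_id_plus_gram[OF W l, folded Q_def]
  obtain B where B: "B \<in> carrier_mat (p*l) (p*l)" "bcirc Q * B = 1\<^sub>m (p*l)" "B * bcirc Q = 1\<^sub>m (p*l)"
    "op_bound B 1"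
    using mat_inverse_exists[OF bcirc_carrier[OF Q(1) l] Q(5)] by blast
  show "tdims p p l (tinv p l Q)" using tinv_bcirc[OF Q(1) l B(1-3)] by blast
  show "bcirc (tinv p l Q) * bcirc Q = 1\<^sub>m (p*l)" "bcirc Q * bcirc (tinv p l Q) = 1\<^sub>m (p*l)"
    using tinv_bcirc[OF Q(1) l B(1-3)] B by auto
  show "\<bar>bcirc (tinv p l Q) $$ (i,j)\<bar> \<le> 1" if "i < p*l" "j < p*l" for i j
    using abs_index_le_op_bound[OF B(4), of i j] B(1) that tinv_bcirc[OF Q(1) l B(1-3)] by simp
qed

lemma bcirc_retr_tpd:
  assumes X: "tdims n p l X" and W: "tdims n p l W" and l: "0 < l"
  shows "tdims n p l (retr_tpd p l X W)"
    "bcirc (retr_tpd p l X W) = (bcirc X + bcirc W) * bcirc (tinv p l (tsqrt p l (id_plus_gram p l W)))"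
  unfolding retr_tpd_def tinvsqrt_def id_plus_gram_def[symmetric]
  using bcirc_tinv_tsqrt_id_plus_gram(1)[OF W l] tplus_tdims[OF X W]
  by (auto simp: tprod_tdims bcirc_tprod bcirc_tplus[OF X W] l)

lemma bcirc_retr_tpd_path:
  assumes X: "tdims n p l X" and U: "tdims n p l U" and V: "tdims n p l V" and l: "0 < l"
  shows "bcirc (retr_tpd p l X (U \<oplus>\<^sub>t tsmult t V))
    = (bcirc X + bcirc U + t \<cdot>\<^sub>m bcirc V) * bcirc (tinv p l (tsqrt p l (id_plus_gram p l (U \<oplus>\<^sub>t tsmult t V))))"
  unfolding bcirc_retr_tpd(2)[OF X tplus_tdims[OF U tsmult_tdims[OF V]] l]
    bcirc_tplus[OF U tsmult_tdims[OF V] l] bcirc_tsmult[OF V l]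
  using bcirc_carrier[OF X l] bcirc_carrier[OF U l] bcirc_carrier[OF V l]
  by (simp add: assoc_add_mat)

lemma tplus_tsmult_0:
  assumes U: "tdims m n l U" and V: "tdims m n l V"
  shows "U \<oplus>\<^sub>t tsmult 0 V = U"
proof (rule tdims_eqI[OF tplus_tdims[OF U tsmult_tdims[OF V]] U])
  fix k a b assume k: "k < l" and "a < m" "b < n"
  then show "(U \<oplus>\<^sub>t tsmult 0 V) ! k $$ (a,b) = U ! k $$ (a,b)"
    using tdimsD(2)[OF U k] tdimsD(2)[OF V k]
    by (simp add: tplus_nth tsmult_nth tdimsD(1)[OF U] tdimsD(1)[OF V] tdimsD(1)[OF tsmult_tdims[OF V]])
qed

lemma tsylvester_of_tvec_pinv:
  assumes P: "tdims p p l P" and l: "0 < l" and psd: "psd_mat (bcirc P)"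
    and c: "0 < c" and pd: "\<And>x. c * (vnorm (p*l) x)\<^sup>2 \<le> bilin (bcirc P) x x"
    and S: "tdims p p l S" and C: "tdims p p l C"
    and S_def: "tvec S = pinv (sylvester_mat p l P) *\<^sub>v tvec C"
  shows "S \<star> P \<oplus>\<^sub>t P \<star> S = C"
proof -
  obtain Ki where Ki: "Ki \<in> carrier_mat (p*p*l) (p*p*l)" "sylvester_mat p l P * Ki = 1\<^sub>m (p*p*l)"
    "Ki * sylvester_mat p l P = 1\<^sub>m (p*p*l)"
    using sylvester_mat_invertible[OF P l psd c pd] by blast
  have "tvec (S \<star> P \<oplus>\<^sub>t P \<star> S) = sylvester_mat p l P *\<^sub>v (Ki *\<^sub>v tvec C)"
    using S_def pinv_eq_inverse[OF sylvester_mat_carrier[OF P l] Ki] sylvester_mat_tvec[OF S P l]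
    by simp
  also have "\<dots> = tvec C"
    using tvec_carrier[OF C l] Ki sylvester_mat_carrier[OF P l] by (simp flip: assoc_mult_mat_vec)
  finally show ?thesis
    by (rule tvec_inj[OF tplus_tdims[OF tprod_tdims[OF S P l] tprod_tdims[OF P S l]] C l])
qed

lemma bcirc_sylvester_of_tvec_pinv:
  assumes P: "tdims p p l P" and l: "0 < l" and psd: "psd_mat (bcirc P)"
    and c: "0 < c" and pd: "\<And>x. c * (vnorm (p*l) x)\<^sup>2 \<le> bilin (bcirc P) x x"
    and S: "tdims p p l S" and Y: "tdims n p l Y" and V: "tdims n p l V"
    and S_def: "tvec S = pinv (sylvester_mat p l P) *\<^sub>v tvec (ttrans Y \<star> V \<ominus>\<^sub>t ttrans V \<star> Y)"
  shows "bcirc S * bcirc P + bcirc P * bcirc S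
    = transpose_mat (bcirc Y) * bcirc V - transpose_mat (bcirc V) * bcirc Y"
proof -
  have YV: "tdims p p l (ttrans Y \<star> V)" and VY: "tdims p p l (ttrans V \<star> Y)"
    by (rule tprod_tdims[OF ttrans_tdims[OF Y l] V l], rule tprod_tdims[OF ttrans_tdims[OF V l] Y l])
  have "S \<star> P \<oplus>\<^sub>t P \<star> S = ttrans Y \<star> V \<ominus>\<^sub>t ttrans V \<star> Y"
    by (rule tsylvester_of_tvec_pinv[OF P l psd c pd S tminus_tdims[OF YV VY] S_def])
  from arg_cong[OF this, of bcirc] show ?thesis
    by (simp add: bcirc_tplus[OF tprod_tdims[OF S P l] tprod_tdims[OF P S l] l] bcirc_tminus[OF YV VY l]
        bcirc_tprod[OF S P l] bcirc_tprod[OF P S l] bcirc_tprod[OF ttrans_tdims[OF Y l] V l]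
        bcirc_tprod[OF ttrans_tdims[OF V l] Y l] bcirc_ttrans[OF Y l] bcirc_ttrans[OF V l])
qed

lemma bcirc_transport_formula:
  assumes Y: "tdims n p l Y" and S: "tdims p p l S" and V: "tdims n p l V" and Q: "tdims p p l Q"
    and l: "0 < l"
  shows "tdims n p l (Y \<star> S \<oplus>\<^sub>t (tid n l \<ominus>\<^sub>t Y \<star> ttrans Y) \<star> V \<star> Q)"
    "bcirc (Y \<star> S \<oplus>\<^sub>t (tid n l \<ominus>\<^sub>t Y \<star> ttrans Y) \<star> V \<star> Q)
      = bcirc Y * bcirc S + (1\<^sub>m (n*l) - bcirc Y * transpose_mat (bcirc Y)) * bcirc V * bcirc Q"
proof -
  have YY: "tdims n n l (Y \<star> ttrans Y)" by (rule tprod_tdims[OF Y ttrans_tdims[OF Y l] l])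
  have IYY: "tdims n n l (tid n l \<ominus>\<^sub>t Y \<star> ttrans Y)" by (rule tminus_tdims[OF tid_tdims YY])
  show "tdims n p l (Y \<star> S \<oplus>\<^sub>t (tid n l \<ominus>\<^sub>t Y \<star> ttrans Y) \<star> V \<star> Q)"
    by (rule tplus_tdims[OF tprod_tdims[OF Y S l] tprod_tdims[OF tprod_tdims[OF IYY V l] Q l]])
  show "bcirc (Y \<star> S \<oplus>\<^sub>t (tid n l \<ominus>\<^sub>t Y \<star> ttrans Y) \<star> V \<star> Q)
      = bcirc Y * bcirc S + (1\<^sub>m (n*l) - bcirc Y * transpose_mat (bcirc Y)) * bcirc V * bcirc Q"
    by (simp add: bcirc_tplus[OF tprod_tdims[OF Y S l] tprod_tdims[OF tprod_tdims[OF IYY V l] Q l] l]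
        bcirc_tprod[OF Y S l] bcirc_tprod[OF tprod_tdims[OF IYY V l] Q l] bcirc_tprod[OF IYY V l]
        bcirc_tminus[OF tid_tdims YY l] bcirc_tid[OF l] bcirc_tprod[OF Y ttrans_tdims[OF Y l] l]
        bcirc_ttrans[OF Y l] mult.commute[of l n])
qed

lemma tensor_deriv_of_bcirc:
  assumes T: "\<And>t. tdims m n l (T t)" and R: "tdims m n l R" and l: "0 < l"
    and d: "mat_deriv0 (m*l) (n*l) (\<lambda>t. bcirc (T t)) (bcirc R)"
  shows "\<forall>k<l. \<forall>i<m. \<forall>j<n. ((\<lambda>t. T t ! k $$ (i,j)) has_real_derivative R ! k $$ (i,j)) (at 0)"
  using d block_index_less block_index_less[of 0 l _ n]
  unfolding mat_deriv0_def by (auto simp: nth_tensor_eq_bcirc[OF T l] nth_tensor_eq_bcirc[OF R l])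

text \<open>The derivative of P at 0 is G = Y^T V - S P 0: the equation for S turns P 0 G + G P 0 into
  U^T V + V^T U.\<close>

lemma mat_deriv0_retraction:
  fixes Xm Um Vm Sm :: "real mat" and P Bi :: "real \<Rightarrow> real mat"
  assumes X: "Xm \<in> carrier_mat a N" and U: "Um \<in> carrier_mat a N" and V: "Vm \<in> carrier_mat a N"
    and S: "Sm \<in> carrier_mat N N"
    and XV: "transpose_mat Xm * Vm + transpose_mat Vm * Xm = 0\<^sub>m N N"
    and P: "\<And>t. P t \<in> carrier_mat N N" and P_sym: "\<And>t. sym_mat (P t)" and P_psd: "\<And>t. psd_mat (P t)"
    and P_sq: "\<And>t. P t * P t = 1\<^sub>m N + transpose_mat (Um + t \<cdot>\<^sub>m Vm) * (Um + t \<cdot>\<^sub>m Vm)"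
    and c: "0 < c" and P0_pd: "\<And>x. c * (vnorm N x)\<^sup>2 \<le> bilin (P 0) x x"
    and Bi: "\<And>t. Bi t \<in> carrier_mat N N" and Bi_P: "\<And>t. Bi t * P t = 1\<^sub>m N"
    and P_Bi: "\<And>t. P t * Bi t = 1\<^sub>m N"
    and Bi_bound: "\<And>t i j. i < N \<Longrightarrow> j < N \<Longrightarrow> \<bar>Bi t $$ (i,j)\<bar> \<le> 1"
  defines "Y \<equiv> (Xm + Um) * Bi 0"
  assumes S_eq: "Sm * P 0 + P 0 * Sm = transpose_mat Y * Vm - transpose_mat Vm * Y"
  shows "mat_deriv0 a N (\<lambda>t. (Xm + Um + t \<cdot>\<^sub>m Vm) * Bi t)
    (Y * Sm + (1\<^sub>m a - Y * transpose_mat Y) * Vm * Bi 0)"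
proof -
  define B1 where "B1 = transpose_mat Um * Vm + transpose_mat Vm * Um"
  define B2 where "B2 = transpose_mat Vm * Vm"
  define G where "G = transpose_mat Y * Vm - Sm * P 0"
  have XU: "Xm + Um \<in> carrier_mat a N" and Y: "Y \<in> carrier_mat a N" unfolding Y_def using U Bi[of 0]
    by auto
  have Y_P: "Y * P 0 = Xm + Um"
    unfolding Y_def using XU
    by (simp add: assoc_mult_mat[OF XU Bi P] Bi_P right_mult_one_mat[OF XU])
  have B: "B1 \<in> carrier_mat N N" "B2 \<in> carrier_mat N N" and G: "G \<in> carrier_mat N N"
    unfolding B1_def B2_def G_def using U V P[of 0] S Y by auto
  have P0_sq: "P 0 * P 0 = 1\<^sub>m N + transpose_mat Um * Um"
    unfolding P_sq[of 0] id_plus_gram_path_expand[OF U V, of 0] using U V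
    by (intro eq_matI) (auto simp del: index_mult_mat(1))
  have P_sq': "P t * P t = P 0 * P 0 + t \<cdot>\<^sub>m B1 + (t*t) \<cdot>\<^sub>m B2" for t
    unfolding P_sq[of t] P0_sq B1_def B2_def by (rule id_plus_gram_path_expand[OF U V])
  have "P 0 * G + G * P 0 = P 0 * (transpose_mat Y * Vm) + transpose_mat Vm * Y * P 0"
    unfolding G_def by (rule sylvester_eq_sqrt_derivative[OF P S _ _ S_eq]) (use Y V in auto)
  also have "\<dots> = transpose_mat (Xm + Um) * Vm + transpose_mat Vm * (Xm + Um)"
    using transpose_mult[OF Y P[of 0]] P_sym[of 0] Y_P Y V P[of 0] unfolding sym_mat_def
    by (simp add: assoc_mult_mat[of _ N N _ a _ N] assoc_mult_mat[of _ N a _ N _ N])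
  also have "\<dots> = B1" unfolding B1_def by (rule transpose_mult_add_tangent[OF X U V XV])
  finally have dP: "mat_deriv0 N N P G"
    by (rule mat_deriv0_sqrt_path[OF P P_psd B P_sq' c P0_pd G])
  have "mat_deriv0 a N (\<lambda>t. (Xm + Um + t \<cdot>\<^sub>m Vm) * Bi t)
      (Vm * Bi 0 + (Xm + Um + 0 \<cdot>\<^sub>m Vm) * (- (Bi 0 * G * Bi 0)))"
    using X U V mult_carrier_mat[OF mult_carrier_mat[OF Bi G] Bi, of 0 0]
    by (intro mat_deriv0_mult[OF _ Bi V _ mat_deriv0_affine mat_deriv0_inverse[OF P Bi G Bi_P P_Bi Bi_bound dP]])
      auto
  moreover have "Xm + Um + 0 \<cdot>\<^sub>m Vm = Xm + Um" using X U V by (intro eq_matI) auto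
  moreover have "(Xm + Um) * (- (Bi 0 * G * Bi 0)) = - (Y * G * Bi 0)"
  proof -
    have "(Xm + Um) * (Bi 0 * G * Bi 0) = Y * G * Bi 0"
      unfolding Y_def using XU Bi[of 0] G
      by (simp add: assoc_mult_mat[of _ a N _ N _ N] mult_carrier_mat)
    then show ?thesis by (subst uminus_mult_right_mat) (use XU U Bi[of 0] G in simp_all)
  qed
  moreover have "Vm * Bi 0 + - (Y * G * Bi 0) = Vm * Bi 0 - Y * G * Bi 0"
    using V Y G Bi[of 0] by (intro minus_add_uminus_mat[symmetric]) auto
  ultimately show ?thesis
    using retraction_derivative_eq[OF P[of 0] Bi[of 0] S Y V P_Bi[of 0]] unfolding G_def by simp
qed

lemma bcirc_tStiefel:
  assumes "X \<in> tStiefel n p l" "0 < l"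
  shows "tdims n p l X" "transpose_mat (bcirc X) * bcirc X = 1\<^sub>m (p*l)"
proof -
  show X: "tdims n p l X" using assms(1) unfolding tStiefel_def by simp
  have "bcirc (ttrans X \<star> X) = bcirc (tid p l)" using assms(1) unfolding tStiefel_def by simp
  then show "transpose_mat (bcirc X) * bcirc X = 1\<^sub>m (p*l)"
    by (simp add: bcirc_tprod[OF ttrans_tdims[OF X assms(2)] X assms(2)] bcirc_ttrans[OF X assms(2)]
        bcirc_tid[OF assms(2)])
qed

lemma bcirc_tangent_tStiefel:
  assumes X: "X \<in> tStiefel n p l" and U: "U \<in> tangent_tStiefel n p l X" and l: "0 < l"
  shows "tdims n p l U" "transpose_mat (bcirc X) * bcirc U + transpose_mat (bcirc U) * bcirc X = 0\<^sub>m (p*l) (p*l)"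
proof -
  note X' = bcirc_tStiefel(1)[OF X l]
  show U': "tdims n p l U" using U unfolding tangent_tStiefel_def by simp
  have "bcirc (ttrans X \<star> U \<oplus>\<^sub>t ttrans U \<star> X) = bcirc (replicate l (0\<^sub>m p p))"
    using U unfolding tangent_tStiefel_def by simp
  then show "transpose_mat (bcirc X) * bcirc U + transpose_mat (bcirc U) * bcirc X = 0\<^sub>m (p*l) (p*l)"
    by (simp add: bcirc_tplus[OF tprod_tdims[OF ttrans_tdims[OF X' l] U' l] tprod_tdims[OF ttrans_tdims[OF U' l] X' l] l]
        bcirc_tprod[OF ttrans_tdims[OF X' l] U' l] bcirc_tprod[OF ttrans_tdims[OF U' l] X' l]
        bcirc_ttrans[OF X' l] bcirc_ttrans[OF U' l] bcirc_tzero[OF l])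
qed

lemma ttrans_retr_tpd_tprod:
  assumes X: "X \<in> tStiefel n p l" and U: "U \<in> tangent_tStiefel n p l X" and l: "0 < l"
  shows "ttrans (retr_tpd p l X U) \<star> (X \<oplus>\<^sub>t U) = tsqrt p l (id_plus_gram p l U)"
proof -
  note X' = bcirc_tStiefel[OF X l] and U' = bcirc_tangent_tStiefel[OF X U l]
  note P = bcirc_tsqrt_id_plus_gram[OF U'(1) l] and Pi = bcirc_tinv_tsqrt_id_plus_gram[OF U'(1) l]
  note Y = bcirc_retr_tpd[OF X'(1) U'(1) l]
  have XU: "tdims n p l (X \<oplus>\<^sub>t U)" by (rule tplus_tdims[OF X'(1) U'(1)])
  have "transpose_mat (bcirc X + bcirc U) * (bcirc X + bcirc U)
      = bcirc (tsqrt p l (id_plus_gram p l U)) * bcirc (tsqrt p l (id_plus_gram p l U))"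
    using gram_add_tangent[OF bcirc_carrier[OF X'(1) l] bcirc_carrier[OF U'(1) l] X'(2) U'(2)] P(4)
    by simp
  then have "bcirc (ttrans (retr_tpd p l X U) \<star> (X \<oplus>\<^sub>t U)) = bcirc (tsqrt p l (id_plus_gram p l U))"
    unfolding bcirc_tprod[OF ttrans_tdims[OF Y(1) l] XU l] bcirc_ttrans[OF Y(1) l] Y(2)
      bcirc_tplus[OF X'(1) U'(1) l]
    by (rule transpose_retraction_mult[OF add_carrier_mat[OF bcirc_carrier[OF U'(1) l], where A = "bcirc X"]
          bcirc_carrier[OF Pi(1) l] bcirc_carrier[OF P(1) l] P(2) Pi(3) Pi(2)])
  then show ?thesis by (rule bcirc_inj[OF tprod_tdims[OF ttrans_tdims[OF Y(1) l] XU l] P(1) l])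
qed

theorem mainTheorem12:
  fixes n p l :: nat and X U V S :: tensor
  assumes "0 < l" and "p \<le> n"
    and "X \<in> tStiefel n p l"
    and "U \<in> tangent_tStiefel n p l X" and "V \<in> tangent_tStiefel n p l X"
    and "tdims p p l S"
    and "tvec S = pinv (kron (transpose_mat (bcirc_t (tsqrt p l (tid p l \<oplus>\<^sub>t ttrans U \<star> U)))) (1\<^sub>m p)
                 + khatri_rao l (blockI p l) (bcirc (tsqrt p l (tid p l \<oplus>\<^sub>t ttrans U \<star> U))))
             *\<^sub>v tvec (ttrans (retr_tpd p l X U) \<star> V \<ominus>\<^sub>t ttrans V \<star> retr_tpd p l X U)"
  shows "\<forall>k<l. \<forall>i<n. \<forall>j<p.
     ((\<lambda>t. retr_tpd p l X (U \<oplus>\<^sub>t tsmult t V) ! k $$ (i,j)) has_real_derivative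
       ((retr_tpd p l X U \<star> S
         \<oplus>\<^sub>t (tid n l \<ominus>\<^sub>t retr_tpd p l X U \<star> ttrans (retr_tpd p l X U)) \<star> V
              \<star> tinv p l (ttrans (retr_tpd p l X U) \<star> (X \<oplus>\<^sub>t U))) ! k $$ (i,j))) (at 0)"
proof -
  note l = assms(1) and S = assms(6) and X = bcirc_tStiefel[OF assms(3,1)]
  note U = bcirc_tangent_tStiefel[OF assms(3,4,1)] and V = bcirc_tangent_tStiefel[OF assms(3,5,1)]
  define P where "P t = tsqrt p l (id_plus_gram p l (U \<oplus>\<^sub>t tsmult t V))" for t
  define Y where "Y = retr_tpd p l X U"
  have W: "tdims n p l (U \<oplus>\<^sub>t tsmult t V)" for t by (intro tplus_tdims tsmult_tdims U(1) V(1))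
  note Pt = bcirc_tsqrt_id_plus_gram[OF W l, folded P_def] and Pi = bcirc_tinv_tsqrt_id_plus_gram[OF W l, folded P_def]
  have P0: "P 0 = tsqrt p l (id_plus_gram p l U)"
    unfolding P_def tplus_tsmult_0[OF U(1) V(1)] ..
  obtain c where c: "0 < c" and P0_pd: "\<And>x. c * (vnorm (p*l) x)\<^sup>2 \<le> bilin (bcirc (P 0)) x x"
    using psd_lower_bound_exists[OF bcirc_carrier[OF Pt(1) l] Pt(2,3,5)] by blast
  have Y: "tdims n p l Y" unfolding Y_def by (rule bcirc_retr_tpd(1)[OF X(1) U(1) l])
  have bY: "bcirc Y = (bcirc X + bcirc U) * bcirc (tinv p l (P 0))"
    unfolding P0 Y_def by (rule bcirc_retr_tpd(2)[OF X(1) U(1) l])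
  have TY: "ttrans Y \<star> (X \<oplus>\<^sub>t U) = P 0"
    unfolding Y_def P0 by (rule ttrans_retr_tpd_tprod[OF assms(3,4,1)])
  have "bcirc S * bcirc (P 0) + bcirc (P 0) * bcirc S
      = transpose_mat (bcirc Y) * bcirc V - transpose_mat (bcirc V) * bcirc Y"
    using assms(7)
      unfolding P0 id_plus_gram_def[symmetric] sylvester_mat_def[symmetric] Y_def[symmetric]
    by (rule bcirc_sylvester_of_tvec_pinv[OF Pt(1)[of 0, unfolded P0] l Pt(3)[of 0, unfolded P0] c
          P0_pd[unfolded P0] S Y V(1)])
  then have "mat_deriv0 (n*l) (p*l) (\<lambda>t. bcirc (retr_tpd p l X (U \<oplus>\<^sub>t tsmult t V)))
      (bcirc Y * bcirc S + (1\<^sub>m (n*l) - bcirc Y * transpose_mat (bcirc Y)) * bcirc V * bcirc (tinv p l (P 0)))"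
    unfolding bY bcirc_retr_tpd_path[OF X(1) U(1) V(1) l] P_def[symmetric]
    by (intro mat_deriv0_retraction[where P = "\<lambda>t. bcirc (P t)" and Bi = "\<lambda>t. bcirc (tinv p l (P t))",
          OF bcirc_carrier[OF X(1) l] bcirc_carrier[OF U(1) l]
          bcirc_carrier[OF V(1) l] bcirc_carrier[OF S l] V(2) bcirc_carrier[OF Pt(1) l] Pt(2,3)
          _ c P0_pd bcirc_carrier[OF Pi(1) l] Pi(2,3,4)])
      (simp_all add: Pt(4) bcirc_tplus[OF U(1) tsmult_tdims[OF V(1)] l] bcirc_tsmult[OF V(1) l])
  then show ?thesis
    unfolding Y_def[symmetric] TY
      bcirc_transport_formula(2)[OF Y S V(1) Pi(1) l, symmetric]
    by (rule tensor_deriv_of_bcirc[OF bcirc_retr_tpd(1)[OF X(1) W l] bcirc_transport_formula(1)[OF Y S V(1) Pi(1) l] l])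
qed

end
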